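(* Let $\gamma$ be a meromorphic family in $\mathrm{GL}_n(\mathbb C)$ with exponents $m_1\ge\dots\ge m_n$. Then (a) for each $j=0,1,\dots,n$ the limit $\mathcal L^j=\lim_{z\to0}z^{m_1+\dots+m_j}\lambda^j_{\mathrm{cha}}(\gamma(z))$ exists in $\mathrm{Mat}(\Lambda^jV)$ and is nonzero; (b) $\mathcal L^j=\mathcal L^j(\mathcal P^\gamma)$ for all $j$, where $\mathcal P^\gamma$ is the hinge attached to $\gamma$.
   Context: $V=\mathbb C^n$; $\lambda^j_{\mathrm{cha}}(A):\Lambda^jV\to\Lambda^jV$, $v_1\wedge\dots\wedge v_j\mapsto Av_1\wedge\dots\wedge Av_j$. A meromorphic family is a map $\gamma$ from a punctured disc $0<|z|<\varepsilon$ to $\mathrm{GL}_n(\mathbb C)$ with matrix entries holomorphic there and with poles or removable singularities at $0$; it can be written $\gamma(z)=a(z)\,\mathrm{diag}(z^{-m_1},\dots,z^{-m_n})\,b(z)$ with $a,b$ holomorphic near $0$, $a(0),b(0)$ invertible, and uniquely determined integers $m_1\ge\dots\ge m_n$ (the exponents). Let $k_1>\dots>k_\tau$ be the distinct exponents; $\mathcal P^\gamma=(P_1,\dots,P_\tau)$ with $P_j=\lim_{z\to0}\mathrm{graph}(z^{k_j}\gamma(z))$ in the Grassmannian of $n$-dimensional subspaces of $V\oplus V$; this is a hinge. For a subspace $P\subset V\oplus V$: $\mathrm{Ker}\,P=\{v:v\oplus0\in P\}$, $\mathrm{Dom}\,P$, $\mathrm{Im}\,P$ the projections to the first/second summands,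 $\mathrm{Indef}\,P=\{w:0\oplus w\in P\}$, $\mathrm{rk}\,P=\dim\mathrm{Dom}\,P-\dim\mathrm{Ker}\,P$. If $\dim P=n$, choose bases $f_1,\dots,f_a,g_1,\dots,g_b,h_1,\dots,h_c$ and $F_1,\dots,F_a,G_1,\dots,G_b,H_1,\dots,H_c$ of $V$ with $P$ spanned by $0\oplus F_i$, $g_j\oplus G_j$, $h_k\oplus0$; $\lambda(P):\Lambda V\to\Lambda V$ maps $f_1\wedge\dots\wedge f_a\wedge g_{i_1}\wedge\dots\wedge g_{i_s}$ ($i_1<\dots<i_s$) to $F_1\wedge\dots\wedge F_a\wedge G_{i_1}\wedge\dots\wedge G_{i_s}$ and kills the other basis monomials; it is defined up to a nonzero scalar; $\lambda^m(P)$ is its restriction to $\Lambda^mV$. A hinge is a sequence $(P_1,\dots,P_k)$ of $n$-dimensional subspaces with $\mathrm{Ker}\,P_j=\mathrm{Dom}\,P_{j+1}$, $\mathrm{Im}\,P_j=\mathrm{Indef}\,P_{j+1}$, $\mathrm{Dom}\,P_1=V$, $\mathrm{Im}\,P_k=V$, $\mathrm{rk}\,P_j>0$. Then $P_1$ is the graph of an invertible $A$; normalize $\lambda(P_1)=\lambda_{\mathrm{cha}}(A)$ and inductively $\lambda(P_{j+1})$ so that $\lambda^{s_j}(P_{j+1})=\lambda^{s_j}(P_j)$, where $s_j=\dim\mathrm{Im}\,P_j$ (these are nonzero and proportional). $\mathcal L^m(\mathcal P)$ is the normalized $\lambda^m(P_j)$ for any $j$ with $\lambda^m(P_j)\ne0$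 (well defined). *)

theory Defs
  imports "HOL-Complex_Analysis.Complex_Analysis"
begin

text \<open>Vectors of C^N are functions nat => complex vanishing at
  coordinates >= N. Matrices are functions nat => nat => complex (only entries
  with indices < N matter). V = C^n, and V (+) V is identified with C^(2n):
  the first summand is coordinates 0..n-1, the second is coordinates n..2n-1.
  The exterior algebra Lambda V has the basis e_I (I a subset of {0..<n},
  e_I = e_i1 ^ ... ^ e_ik with i1 < ... < ik); an element of Lambda V is its
  coordinate function nat set => complex, and a linear map of Lambda V is its
  matrix nat set => nat set => complex in this basis.\<close>

type_synonym cvec = "nat \<Rightarrow> complex"
type_synonym cmat = "nat \<Rightarrow> nat \<Rightarrow> complex"

definition vecs :: "nat \<Rightarrow> cvec set" where
  "vecs N = {v. \<forall>i\<ge>N. v i = 0}"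

definition cspan :: "cvec list \<Rightarrow> cvec set" where
  "cspan ws = {(\<lambda>i. \<Sum>k<length ws. c k * (ws ! k) i) | c. True}"

definition lin_indep :: "cvec list \<Rightarrow> bool" where
  "lin_indep ws = (\<forall>c. (\<forall>i. (\<Sum>k<length ws. c k * (ws ! k) i) = 0) \<longrightarrow> (\<forall>k<length ws. c k = 0))"

definition is_subspace_dim :: "nat \<Rightarrow> cvec set \<Rightarrow> nat \<Rightarrow> bool" where
  "is_subspace_dim N S d = (\<exists>ws. length ws = d \<and> set ws \<subseteq> vecs N \<and> lin_indep ws \<and> cspan ws = S)"

definition cdim :: "nat \<Rightarrow> cvec set \<Rightarrow> nat" where
  "cdim N S = (LEAST d. is_subspace_dim N S d)"

definition mdet :: "nat \<Rightarrow> cmat \<Rightarrow> complex" where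
  "mdet N M = (\<Sum>p | p permutes {..<N}. of_int (sign p) * (\<Prod>i<N. M i (p i)))"

definition mvec :: "nat \<Rightarrow> cmat \<Rightarrow> cvec \<Rightarrow> cvec" where
  "mvec N M v = (\<lambda>i. if i < N then (\<Sum>k<N. M i k * v k) else 0)"

definition cinner :: "nat \<Rightarrow> cvec \<Rightarrow> cvec \<Rightarrow> complex" where
  "cinner N u v = (\<Sum>i<N. u i * cnj (v i))"

definition oproj :: "nat \<Rightarrow> cvec set \<Rightarrow> cmat" where
  "oproj N S = (THE Q. (\<forall>i j. Q i j \<noteq> 0 \<longrightarrow> i < N \<and> j < N) \<and>
       (\<forall>x\<in>vecs N. mvec N Q x \<in> S \<and> (\<forall>y\<in>S. cinner N (\<lambda>i. x i - mvec N Q x i) y = 0)))"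

text \<open>Convergence in the Grassmannian of subspaces of C^N (gap topology:
  convergence of the orthogonal projections).\<close>
definition grass_tendsto :: "nat \<Rightarrow> ('a \<Rightarrow> cvec set) \<Rightarrow> cvec set \<Rightarrow> 'a filter \<Rightarrow> bool" where
  "grass_tendsto N S P F = (\<forall>i<N. \<forall>j<N. ((\<lambda>z. oproj N (S z) i j) \<longlongrightarrow> oproj N P i j) F)"

definition join :: "nat \<Rightarrow> cvec \<Rightarrow> cvec \<Rightarrow> cvec" where
  "join n v w = (\<lambda>i. if i < n then v i else if i < 2 * n then w (i - n) else 0)"

definition graph :: "nat \<Rightarrow> cmat \<Rightarrow> cvec set" where
  "graph n A = {join n v (mvec n A v) | v. v \<in> vecs n}"

definition Ker :: "nat \<Rightarrow> cvec set \<Rightarrow> cvec set" where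
  "Ker n P = {v \<in> vecs n. join n v (\<lambda>_. 0) \<in> P}"
definition Dom :: "nat \<Rightarrow> cvec set \<Rightarrow> cvec set" where
  "Dom n P = {v \<in> vecs n. \<exists>w\<in>vecs n. join n v w \<in> P}"
definition Im :: "nat \<Rightarrow> cvec set \<Rightarrow> cvec set" where
  "Im n P = {w \<in> vecs n. \<exists>v\<in>vecs n. join n v w \<in> P}"
definition Indef :: "nat \<Rightarrow> cvec set \<Rightarrow> cvec set" where
  "Indef n P = {w \<in> vecs n. join n (\<lambda>_. 0) w \<in> P}"

definition ksub :: "nat \<Rightarrow> nat \<Rightarrow> nat set set" where
  "ksub n k = {I. I \<subseteq> {..<n} \<and> card I = k}"

text \<open>Coordinates of v_1 ^ ... ^ v_k in the basis e_I.\<close>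
definition wedge :: "nat \<Rightarrow> cvec list \<Rightarrow> nat set \<Rightarrow> complex" where
  "wedge n vs I = (if I \<subseteq> {..<n} \<and> card I = length vs
     then mdet (length vs) (\<lambda>r c. (vs ! c) (sorted_list_of_set I ! r)) else 0)"

definition ext_apply :: "nat \<Rightarrow> (nat set \<Rightarrow> nat set \<Rightarrow> complex) \<Rightarrow> (nat set \<Rightarrow> complex) \<Rightarrow> nat set \<Rightarrow> complex" where
  "ext_apply n M x = (\<lambda>I. \<Sum>J\<in>Pow {..<n}. M I J * x J)"

text \<open>lambda_cha(A): the linear map of Lambda V sending e_J = e_j1 ^ ... ^ e_jk
  to A e_j1 ^ ... ^ A e_jk.\<close>
definition lam_cha :: "nat \<Rightarrow> cmat \<Rightarrow> nat set \<Rightarrow> nat set \<Rightarrow> complex" where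
  "lam_cha n A I J = wedge n (map (\<lambda>k i. if i < n then A i k else 0) (sorted_list_of_set J)) I"

text \<open>M is a (representative of) lambda(P): there are bases f,g,h and F,G,H of V
  with P spanned by 0(+)F_i, g_j(+)G_j, h_k(+)0, and M maps the monomial
  f_1^..^f_a^g_i1^..^g_is to F_1^..^F_a^G_i1^..^G_is and kills the other
  basis monomials of u = f@g@h.\<close>
definition is_lambda :: "nat \<Rightarrow> cvec set \<Rightarrow> (nat set \<Rightarrow> nat set \<Rightarrow> complex) \<Rightarrow> bool" where
  "is_lambda n P M = (\<exists>f g h F G H.
     length f + length g + length h = n \<and> length F = length f \<and>
     length G = length g \<and> length H = length h \<and>
     set (f @ g @ h) \<subseteq> vecs n \<and> lin_indep (f @ g @ h) \<and>
     set (F @ G @ H) \<subseteq> vecs n \<and> lin_indep (F @ G @ H) \<and>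
     P = cspan (map (join n (\<lambda>_. 0)) F @ map2 (join n) g G @ map (\<lambda>v. join n v (\<lambda>_. 0)) h) \<and>
     (\<forall>T\<subseteq>{..<n}. \<forall>I\<subseteq>{..<n}.
        ext_apply n M (wedge n (map (\<lambda>k. (f @ g @ h) ! k) (sorted_list_of_set T))) I =
        (if {..<length f} \<subseteq> T \<and> T \<subseteq> {..<length f + length g}
         then wedge n (map (\<lambda>k. (F @ G @ H) ! k) (sorted_list_of_set T)) I else 0)))"

text \<open>Normalized family (lambda(P_1), ..., lambda(P_k)) for a hinge (P_1,...,P_k)
  (indices shifted to 0,...,k-1).\<close>
definition normalized_lambdas :: "nat \<Rightarrow> cvec set list \<Rightarrow> (nat set \<Rightarrow> nat set \<Rightarrow> complex) list \<Rightarrow> bool" where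
  "normalized_lambdas n Ps Ms = (length Ms = length Ps \<and>
     (\<forall>j<length Ps. is_lambda n (Ps ! j) (Ms ! j)) \<and>
     (\<exists>A. graph n A = Ps ! 0 \<and> (\<forall>I\<subseteq>{..<n}. \<forall>J\<subseteq>{..<n}. (Ms ! 0) I J = lam_cha n A I J)) \<and>
     (\<forall>j. Suc j < length Ps \<longrightarrow>
        (\<forall>I\<in>ksub n (cdim n (Im n (Ps ! j))). \<forall>J\<in>ksub n (cdim n (Im n (Ps ! j))).
           (Ms ! Suc j) I J = (Ms ! j) I J)))"

definition meromorphic_family :: "nat \<Rightarrow> real \<Rightarrow> (complex \<Rightarrow> cmat) \<Rightarrow> bool" where
  "meromorphic_family n e \<gamma> = (e > 0 \<and>
     (\<forall>i<n. \<forall>j<n. (\<lambda>z. \<gamma> z i j) holomorphic_on (ball 0 e - {0}) \<and> not_essential (\<lambda>z. \<gamma> z i j) 0) \<and>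
     (\<forall>z. 0 < norm z \<and> norm z < e \<longrightarrow> mdet n (\<gamma> z) \<noteq> 0))"

definition has_exponents :: "nat \<Rightarrow> (complex \<Rightarrow> cmat) \<Rightarrow> (nat \<Rightarrow> int) \<Rightarrow> bool" where
  "has_exponents n \<gamma> m = ((\<forall>i j. i \<le> j \<and> j < n \<longrightarrow> m j \<le> m i) \<and>
     (\<exists>r>0. \<exists>a b.
        (\<forall>i<n. \<forall>j<n. (\<lambda>z. a z i j) holomorphic_on ball 0 r \<and> (\<lambda>z. b z i j) holomorphic_on ball 0 r) \<and>
        mdet n (a 0) \<noteq> 0 \<and> mdet n (b 0) \<noteq> 0 \<and>
        (\<forall>z. 0 < norm z \<and> norm z < r \<longrightarrow>
           (\<forall>i<n. \<forall>k<n. \<gamma> z i k = (\<Sum>l<n. a z i l * z powi (- m l) * b z l k)))))"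

definition distinct_exps :: "nat \<Rightarrow> (nat \<Rightarrow> int) \<Rightarrow> int list" where
  "distinct_exps n m = rev (sorted_list_of_set (m ` {..<n}))"

definition is_hinge_of :: "nat \<Rightarrow> (complex \<Rightarrow> cmat) \<Rightarrow> (nat \<Rightarrow> int) \<Rightarrow> cvec set list \<Rightarrow> bool" where
  "is_hinge_of n \<gamma> m Ps = (length Ps = length (distinct_exps n m) \<and>
     (\<forall>j<length Ps. is_subspace_dim (2 * n) (Ps ! j) n \<and>
        grass_tendsto (2 * n) (\<lambda>z. graph n (\<lambda>i k. z powi (distinct_exps n m ! j) * \<gamma> z i k)) (Ps ! j) (at 0)))"

end

theory Submission
  imports Defs "Jordan_Normal_Form.Determinant"
begin

(* Write gamma(z) = a(z) diag(z^-m_i) b(z). By Cauchy-Binet the compound matrix lambda^j(gamma(z)) is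
   lambda(a(z)) diag(z^-(sum of m_i, i in K)) lambda(b(z)), and sum_{i in K} m_i <= m_1 + ... + m_j for |K| = j.
   Hence z^(m_1+...+m_j) lambda^j(gamma(z)) tends to lambda(a(0)) E lambda(b(0)), where E projects onto
   the K of maximal exponent sum; this is nonzero since lambda(a(0)) and lambda(b(0)) are invertible.
   For (b), the limit P_t of the graphs of z^(k_t) gamma(z) is computed explicitly from a(0), b(0) and the
   block of indices with m_i = k_t. In adapted bases lambda(P_t) = lambda(a(0)) E_t lambda(b(0)), with
   E_t projecting onto the K between {i : m_i > k_t} and {i : m_i >= k_t}, and lambda(P_t) is unique up
   to a scalar. In every degree where it is nonzero this matrix is the limit above, and consecutive
   terms share the degree dim Im P_t, so the normalisation fixes all scalars to 1. *)

(* Jordan_Normal_Form brings in HOL-Algebra, whose Lattice.join would shadow the join of Defs. *)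
hide_const (open) Lattice.join

section \<open>Determinants of index-function matrices\<close>

lemma mdet_eq_det: "mdet N M = det (mat N N (\<lambda>(i,j). M i j))"
proof -
  have "\<And>p. p permutes {..<N} \<Longrightarrow> (\<Prod>i<N. M i (p i)) = (\<Prod>i = 0..<N. mat N N (\<lambda>(i,j). M i j) $$ (i, p i))"
    by (rule prod.cong) (auto simp: permutes_in_image atLeast0LessThan)
  thus ?thesis unfolding mdet_def det_def by (auto simp: atLeast0LessThan intro!: sum.cong)
qed

lemma permutes_less: "p permutes {..<N} \<Longrightarrow> x < N \<Longrightarrow> p x < N"
  using permutes_in_image[of p "{..<N}" x] by simp

lemma mdet_cong: "(\<And>i j. i < N \<Longrightarrow> j < N \<Longrightarrow> M i j = M' i j) \<Longrightarrow> mdet N M = mdet N M'"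
  unfolding mdet_def
  by (intro sum.cong refl arg_cong[where f="\<lambda>x. _ * x"] prod.cong) (auto simp: permutes_less)

lemma mdet_eq_0_rows_few_cols:
  assumes A: "A \<subseteq> {..<N}" and B: "finite B" and c: "card B < card A"
    and z: "\<forall>r\<in>A. \<forall>c<N. c \<notin> B \<longrightarrow> M r c = 0"
  shows "mdet N M = 0"
  unfolding mdet_def
proof (rule sum.neutral, safe)
  fix p assume p: "p permutes {..<N}"
  have "\<not> p ` A \<subseteq> B"
  proof
    assume "p ` A \<subseteq> B"
    hence "card (p ` A) \<le> card B" using B by (simp add: card_mono)
    moreover have "card (p ` A) = card A" using permutes_inj_on[OF p] by (simp add: card_image)
    ultimately show False using c by simp
  qed
  then obtain r where r: "r \<in> A" "p r \<notin> B" by auto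
  have "r < N" using r A by auto
  hence "M r (p r) = 0" using z r p by (auto simp: permutes_less)
  hence "(\<Prod>i<N. M i (p i)) = 0" using \<open>r < N\<close> by (intro prod_zero) auto
  thus "of_int (sign p) * (\<Prod>i<N. M i (p i)) = 0" by simp
qed

lemma mdet_transpose: "mdet N (\<lambda>r c. M c r) = mdet N M"
proof -
  have "mat N N (\<lambda>(i,j). M j i) = transpose_mat (mat N N (\<lambda>(i,j). M i j))"
    by (rule eq_matI) auto
  thus ?thesis by (simp add: mdet_eq_det det_transpose[of _ N])
qed

lemma mdet_eq_0_cols_few_rows:
  assumes A: "A \<subseteq> {..<N}" and B: "finite B" and c: "card B < card A"
    and z: "\<forall>c\<in>A. \<forall>r<N. r \<notin> B \<longrightarrow> M r c = 0"
  shows "mdet N M = 0"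
proof -
  have "mdet N (\<lambda>r c. M c r) = 0"
    using mdet_eq_0_rows_few_cols[OF A B c, of "\<lambda>r c. M c r"] z by metis
  thus ?thesis using mdet_transpose[of N M] by simp
qed

lemma mdet_block_upper_right_0:
  assumes a: "a \<le> N" and z: "\<And>r c. r < a \<Longrightarrow> a \<le> c \<Longrightarrow> c < N \<Longrightarrow> M r c = 0"
  shows "mdet N M = mdet a M * mdet (N-a) (\<lambda>r c. M (a+r) (a+c))"
proof -
  have "mat N N (\<lambda>(i,j). M i j) = four_block_mat (mat a a (\<lambda>(i,j). M i j)) (0\<^sub>m a (N-a))
      (mat (N-a) a (\<lambda>(i,j). M (a+i) j)) (mat (N-a) (N-a) (\<lambda>(i,j). M (a+i) (a+j)))"
    using a by (intro eq_matI) (auto simp: four_block_mat_def Let_def z)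
  moreover have "det \<dots> = det (mat a a (\<lambda>(i,j). M i j)) * det (mat (N-a) (N-a) (\<lambda>(i,j). M (a+i) (a+j)))"
    by (rule det_four_block_mat_upper_right_zero[where m="N-a"]) auto
  ultimately show ?thesis by (simp add: mdet_eq_det)
qed

lemma mdet_block_lower_left_0:
  assumes a: "a \<le> N" and z: "\<And>r c. a \<le> r \<Longrightarrow> r < N \<Longrightarrow> c < a \<Longrightarrow> M r c = 0"
  shows "mdet N M = mdet a M * mdet (N-a) (\<lambda>r c. M (a+r) (a+c))"
proof -
  have "mat N N (\<lambda>(i,j). M i j) = four_block_mat (mat a a (\<lambda>(i,j). M i j))
      (mat a (N-a) (\<lambda>(i,j). M i (a+j))) (0\<^sub>m (N-a) a) (mat (N-a) (N-a) (\<lambda>(i,j). M (a+i) (a+j)))"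
    using a by (intro eq_matI) (auto simp: four_block_mat_def Let_def z)
  moreover have "det \<dots> = det (mat a a (\<lambda>(i,j). M i j)) * det (mat (N-a) (N-a) (\<lambda>(i,j). M (a+i) (a+j)))"
    by (rule det_four_block_mat_lower_left_zero[where m="N-a"]) auto
  ultimately show ?thesis by (simp add: mdet_eq_det)
qed

lemma mdet_eq_0_equal_rows:
  assumes "i < N" "j < N" "i \<noteq> j" "\<And>c. c < N \<Longrightarrow> M i c = M j c"
  shows "mdet N M = 0"
proof -
  have r: "row (mat N N (\<lambda>(i,j). M i j)) i = row (mat N N (\<lambda>(i,j). M i j)) j"
    using assms by (intro eq_vecI) auto
  show ?thesis unfolding mdet_eq_det by (rule det_identical_rows[OF _ assms(3,1,2) r]) auto
qed

lemma mdet_permute_rows: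
  assumes p: "p permutes {..<N}"
  shows "mdet N (\<lambda>r c. M (p r) c) = of_int (sign p) * mdet N M"
proof -
  have p': "p permutes {0..<N}" using p by (simp add: atLeast0LessThan)
  have "mat N N (\<lambda>(i,j). mat N N (\<lambda>(i,j). M i j) $$ (p i, j)) = mat N N (\<lambda>(i,j). M (p i) j)"
    using p by (intro eq_matI) (auto simp: permutes_less)
  with det_permute_rows[OF _ p', of "mat N N (\<lambda>(i,j). M i j)"] show ?thesis
    by (simp add: mdet_eq_det)
qed

lemma mdet_scale_rows: "mdet N (\<lambda>r c. d r * M r c) = (\<Prod>r<N. d r) * mdet N M"
  unfolding mdet_def sum_distrib_left
  by (intro sum.cong refl) (auto simp: prod.distrib mult.left_commute)

lemma tendsto_mdet:
  assumes "\<And>i j. i < N \<Longrightarrow> j < N \<Longrightarrow> ((\<lambda>z. M z i j) \<longlongrightarrow> M0 i j) F"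
  shows "((\<lambda>z. mdet N (M z)) \<longlongrightarrow> mdet N M0) F"
  unfolding mdet_def
proof (intro tendsto_sum tendsto_mult tendsto_const tendsto_prod)
  fix p i assume "p \<in> {p. p permutes {..<N}}" "i \<in> {..<N}"
  thus "((\<lambda>z. M z i (p i)) \<longlongrightarrow> M0 i (p i)) F" by (auto intro: assms permutes_less)
qed

definition mmul :: "nat \<Rightarrow> cmat \<Rightarrow> cmat \<Rightarrow> cmat" where
  "mmul n X Y = (\<lambda>i j. \<Sum>l<n. X i l * Y l j)"

definition mident :: cmat where
  "mident = (\<lambda>i j. if i = j then 1 else 0)"

lemma mdet_mmul: "mdet n (mmul n X Y) = mdet n X * mdet n Y"
proof -
  have "mat n n (\<lambda>(i,j). mmul n X Y i j) = mat n n (\<lambda>(i,j). X i j) * mat n n (\<lambda>(i,j). Y i j)"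
    by (intro eq_matI) (auto simp: mmul_def scalar_prod_def atLeast0LessThan intro!: sum.cong)
  thus ?thesis unfolding mdet_eq_det by (simp add: det_mult[of _ n])
qed

lemma mdet_mident: "mdet k mident = 1"
proof -
  have "mat k k (\<lambda>(i,j). mident i j) = 1\<^sub>m k" by (intro eq_matI) (auto simp: mident_def)
  thus ?thesis by (simp add: mdet_eq_det)
qed

lemma sum_mult_mident: assumes "i < n" shows "(\<Sum>s<n. f s * mident s i) = f i"
proof -
  have "(\<Sum>s<n. f s * mident s i) = (\<Sum>s<n. if s = i then f s else 0)"
    by (intro sum.cong) (auto simp: mident_def)
  thus ?thesis using assms by (simp add: sum.delta')
qed

lemma sum_mident_mult: assumes "i < n" shows "(\<Sum>s<n. mident i s * f s) = f i"
proof -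
  have "(\<Sum>s<n. mident i s * f s) = (\<Sum>s<n. if s = i then f s else 0)"
    by (intro sum.cong) (auto simp: mident_def)
  thus ?thesis using assms by (simp add: sum.delta')
qed

lemma sum_mult_sum_swap:
  fixes X :: "nat \<Rightarrow> 'a::comm_semiring_1"
  shows "(\<Sum>l<n. X l * (\<Sum>s<n. Y l s * Z s)) = (\<Sum>s<n. (\<Sum>l<n. X l * Y l s) * Z s)"
proof -
  have "(\<Sum>l<n. X l * (\<Sum>s<n. Y l s * Z s)) = (\<Sum>l<n. \<Sum>s<n. X l * Y l s * Z s)"
    by (simp add: sum_distrib_left mult.assoc)
  also have "\<dots> = (\<Sum>s<n. \<Sum>l<n. X l * Y l s * Z s)" by (rule sum.swap)
  also have "\<dots> = (\<Sum>s<n. (\<Sum>l<n. X l * Y l s) * Z s)" by (simp add: sum_distrib_right)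
  finally show ?thesis .
qed

lemma mmul_assoc: "mmul n X (mmul n Y Z) i j = mmul n (mmul n X Y) Z i j"
  unfolding mmul_def using sum_mult_sum_swap[where X="X i" and Y=Y and Z="\<lambda>k. Z k j"] by simp

definition minv :: "nat \<Rightarrow> cmat \<Rightarrow> cmat" where
  "minv n X = (\<lambda>i j. if i < n \<and> j < n then adj_mat (mat n n (\<lambda>(i,j). X i j)) $$ (i,j) / mdet n X else 0)"

lemma mmul_minv:
  assumes d: "mdet n X \<noteq> 0" and ij: "i < n" "j < n"
  shows "mmul n X (minv n X) i j = mident i j"
proof -
  let ?A = "mat n n (\<lambda>(i,j). X i j)"
  have "?A * adj_mat ?A = det ?A \<cdot>\<^sub>m 1\<^sub>m n" by (rule adj_mat) auto
  hence "(?A * adj_mat ?A) $$ (i,j) = (det ?A \<cdot>\<^sub>m 1\<^sub>m n) $$ (i,j)" by simp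
  hence "(\<Sum>l<n. X i l * adj_mat ?A $$ (l,j)) = mdet n X * mident i j"
    using ij adj_mat(1)[of ?A n] by (auto simp: scalar_prod_def atLeast0LessThan mdet_eq_det mident_def)
  hence "(\<Sum>l<n. X i l * (adj_mat ?A $$ (l,j) / mdet n X)) = mident i j"
    using d by (simp add: sum_divide_distrib[symmetric] times_divide_eq_right)
  thus ?thesis unfolding mmul_def minv_def using ij by (auto intro!: sum.cong)
qed

lemma minv_mmul:
  assumes d: "mdet n X \<noteq> 0" and ij: "i < n" "j < n"
  shows "mmul n (minv n X) X i j = mident i j"
proof -
  let ?A = "mat n n (\<lambda>(i,j). X i j)"
  have "adj_mat ?A * ?A = det ?A \<cdot>\<^sub>m 1\<^sub>m n" by (rule adj_mat) auto
  hence "(adj_mat ?A * ?A) $$ (i,j) = (det ?A \<cdot>\<^sub>m 1\<^sub>m n) $$ (i,j)" by simp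
  hence "(\<Sum>l<n. adj_mat ?A $$ (i,l) * X l j) = mdet n X * mident i j"
    using ij adj_mat(1)[of ?A n] by (auto simp: scalar_prod_def atLeast0LessThan mdet_eq_det mident_def)
  hence "(\<Sum>l<n. (adj_mat ?A $$ (i,l) / mdet n X) * X l j) = mident i j"
    using d by (simp add: sum_divide_distrib[symmetric] times_divide_eq_left)
  thus ?thesis unfolding mmul_def minv_def using ij by (auto intro!: sum.cong)
qed

lemma mdet_minv_nonzero: assumes "mdet n X \<noteq> 0" shows "mdet n (minv n X) \<noteq> 0"
proof -
  have "mdet n (mmul n (minv n X) X) = mdet n mident"
    by (rule mdet_cong) (use minv_mmul[OF assms] in auto)
  hence "mdet n (minv n X) * mdet n X = 1" by (simp add: mdet_mmul mdet_mident)
  thus ?thesis by auto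
qed

lemma adj_mat_nth:
  assumes ij: "i < n" "j < n"
  shows "adj_mat (mat n n (\<lambda>(i,j). X i j)) $$ (i,j) = (-1)^(j+i) *
     mdet (n-1) (\<lambda>r c. X (if r < j then r else Suc r) (if c < i then c else Suc c))"
proof -
  have "mat_delete (mat n n (\<lambda>(i,j). X i j)) j i =
      mat (n-1) (n-1) (\<lambda>(r,c). X (if r < j then r else Suc r) (if c < i then c else Suc c))"
    unfolding mat_delete_def by (intro eq_matI) auto
  thus ?thesis unfolding adj_mat_def cofactor_def using ij by (simp add: mdet_eq_det)
qed

lemma tendsto_minv:
  assumes "\<And>i j. i < n \<Longrightarrow> j < n \<Longrightarrow> ((\<lambda>z. X z i j) \<longlongrightarrow> X0 i j) F" and d: "mdet n X0 \<noteq> 0"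
  shows "((\<lambda>z. minv n (X z) i j) \<longlongrightarrow> minv n X0 i j) F"
proof (cases "i < n \<and> j < n")
  case True
  have "((\<lambda>z. mdet (n-1) (\<lambda>r c. X z (if r < j then r else Suc r) (if c < i then c else Suc c))) \<longlongrightarrow>
     mdet (n-1) (\<lambda>r c. X0 (if r < j then r else Suc r) (if c < i then c else Suc c))) F"
    by (rule tendsto_mdet) (use True in \<open>auto intro!: assms(1)\<close>)
  moreover have "((\<lambda>z. mdet n (X z)) \<longlongrightarrow> mdet n X0) F" by (rule tendsto_mdet) (rule assms(1))
  ultimately show ?thesis unfolding minv_def using True d
    by (simp add: adj_mat_nth) (intro tendsto_intros, auto)
next
  case False
  hence "\<And>z. minv n (X z) i j = 0" "minv n X0 i j = 0" by (auto simp: minv_def)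
  thus ?thesis by simp
qed

section \<open>The Cauchy--Binet formula\<close>

abbreviation sl :: "nat set \<Rightarrow> nat list" where
  "sl I \<equiv> sorted_list_of_set I"

lemma ksubD:
  assumes "K \<in> ksub n k"
  shows "finite K" "length (sl K) = k" "set (sl K) = K" "distinct (sl K)" "K \<subseteq> {..<n}" "card K = k"
proof -
  have "finite K" using assms unfolding ksub_def by (auto intro: finite_subset[of _ "{..<n}"])
  thus "finite K" "length (sl K) = k" "set (sl K) = K" "distinct (sl K)" "K \<subseteq> {..<n}" "card K = k"
    using assms unfolding ksub_def by auto
qed

lemma finite_ksub: "finite (ksub n k)"
  unfolding ksub_def by (rule finite_subset[of _ "Pow {..<n}"]) auto

lemma ksub_card: "I \<subseteq> {..<n} \<Longrightarrow> I \<in> ksub n (card I)"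
  unfolding ksub_def by auto

lemma sorted_list_nth_ksub:
  assumes "K \<in> ksub n k"
  shows "inj_on (\<lambda>i. sl K ! i) {..<k}" "(\<lambda>i. sl K ! i) ` {..<k} = K"
proof -
  note f = ksubD[OF assms]
  show "inj_on (\<lambda>i. sl K ! i) {..<k}"
    using f by (intro inj_onI) (auto simp: nth_eq_iff_index_eq)
  have "(\<lambda>i. sl K ! i) ` {..<length (sl K)} = set (sl K)"
    by (auto simp: set_conv_nth)
  thus "(\<lambda>i. sl K ! i) ` {..<k} = K" using f by simp
qed

lemma sl_nth_mem: "X \<subseteq> {..<n} \<Longrightarrow> r < card X \<Longrightarrow> sl X ! r \<in> X"
  using ksubD[OF ksub_card] by (metis nth_mem)

lemma sl_nth_less: "X \<subseteq> {..<n} \<Longrightarrow> r < card X \<Longrightarrow> sl X ! r < n"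
  using sl_nth_mem by blast

text \<open>An injection of \<open>{..<k}\<close> into \<open>{..<n}\<close> is the increasing enumeration of its image \<open>K\<close>,
  precomposed with a unique permutation of \<open>{..<k}\<close>.\<close>

definition inj_funs :: "nat \<Rightarrow> nat \<Rightarrow> (nat \<Rightarrow> nat) set" where
  "inj_funs k n = {f \<in> PiE {..<k} (\<lambda>_. {..<n}). inj_on f {..<k}}"

definition enum_perm :: "nat \<Rightarrow> nat set \<Rightarrow> (nat \<Rightarrow> nat) \<Rightarrow> nat \<Rightarrow> nat" where
  "enum_perm k K p = (\<lambda>r. if r < k then sl K ! p r else undefined)"

definition perm_of_inj :: "nat \<Rightarrow> (nat \<Rightarrow> nat) \<Rightarrow> nat \<Rightarrow> nat" where
  "perm_of_inj k f = (\<lambda>r. if r < k then the_inv_into {..<k} (\<lambda>i. sl (f ` {..<k}) ! i) (f r) else r)"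

lemma enum_perm_in_inj_funs:
  assumes K: "K \<in> ksub n k" and p: "p permutes {..<k}"
  shows "enum_perm k K p \<in> inj_funs k n"
proof -
  note f = ksubD[OF K]
  have "sl K ! (p r) \<in> K" if "r < k" for r
    using f permutes_less[OF p that] by (metis nth_mem)
  hence "enum_perm k K p \<in> PiE {..<k} (\<lambda>_. {..<n})"
    unfolding enum_perm_def using f(5) by (auto simp: PiE_def extensional_def subset_iff)
  moreover have "inj_on (enum_perm k K p) {..<k}"
  proof (rule inj_onI)
    fix r s assume rs: "r \<in> {..<k}" "s \<in> {..<k}" "enum_perm k K p r = enum_perm k K p s"
    hence "p r = p s" using f permutes_less[OF p] by (simp add: enum_perm_def nth_eq_iff_index_eq)
    thus "r = s" using permutes_inj[OF p] by (simp add: inj_eq)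
  qed
  ultimately show ?thesis unfolding inj_funs_def by auto
qed

lemma enum_perm_inverse:
  assumes K: "K \<in> ksub n k" and p: "p permutes {..<k}"
  shows "enum_perm k K p ` {..<k} = K" "perm_of_inj k (enum_perm k K p) = p"
proof -
  note f = ksubD[OF K] sorted_list_nth_ksub[OF K]
  have "enum_perm k K p ` {..<k} = (\<lambda>i. sl K ! i) ` (p ` {..<k})"
    unfolding enum_perm_def by (auto simp: image_iff)
  thus im: "enum_perm k K p ` {..<k} = K" using permutes_image[OF p] f by simp
  show "perm_of_inj k (enum_perm k K p) = p"
  proof
    fix r show "perm_of_inj k (enum_perm k K p) r = p r"
      unfolding perm_of_inj_def im using f permutes_less[OF p, of r] permutes_not_in[OF p, of r]
      by (auto simp: enum_perm_def the_inv_into_f_f)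
  qed
qed

lemma image_inj_funs_ksub: "f \<in> inj_funs k n \<Longrightarrow> f ` {..<k} \<in> ksub n k"
  unfolding inj_funs_def ksub_def by (auto simp: card_image)

lemma perm_of_inj_inverse:
  assumes f: "f \<in> inj_funs k n"
  shows "enum_perm k (f ` {..<k}) (perm_of_inj k f) = f"
proof
  fix r
  define K where "K = f ` {..<k}"
  note ff = sorted_list_nth_ksub[OF image_inj_funs_ksub[OF f], folded K_def]
  show "enum_perm k (f ` {..<k}) (perm_of_inj k f) r = f r"
  proof (cases "r < k")
    case True
    hence "f r \<in> (\<lambda>i. sl K ! i) ` {..<k}" using ff K_def by auto
    then show ?thesis using True ff unfolding enum_perm_def perm_of_inj_def K_def[symmetric]
      by (auto simp: f_the_inv_into_f)
  next
    case False
    then show ?thesis using f unfolding enum_perm_def inj_funs_def by (auto simp: PiE_def extensional_def)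
  qed
qed

lemma perm_of_inj_permutes:
  assumes f: "f \<in> inj_funs k n"
  shows "perm_of_inj k f permutes {..<k}"
proof -
  define K where "K = f ` {..<k}"
  note ff = sorted_list_nth_ksub[OF image_inj_funs_ksub[OF f], folded K_def]
  let ?p = "perm_of_inj k f"
  have fr: "f r \<in> (\<lambda>i. sl K ! i) ` {..<k}" if "r < k" for r using ff that K_def by auto
  have pin: "?p r < k" if "r < k" for r
    unfolding perm_of_inj_def K_def[symmetric] using that the_inv_into_into[OF ff(1) fr[OF that]] by auto
  have pinj: "inj_on ?p {..<k}"
  proof (rule inj_onI)
    fix r s assume rs: "r \<in> {..<k}" "s \<in> {..<k}" "?p r = ?p s"
    hence "f r = f s" using fr unfolding perm_of_inj_def K_def[symmetric]
      by (metis (no_types, lifting) f_the_inv_into_f ff(1) lessThan_iff)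
    thus "r = s" using f rs unfolding inj_funs_def by (auto simp: inj_on_def)
  qed
  have "?p ` {..<k} = {..<k}" using pin pinj by (intro endo_inj_surj) auto
  hence "bij_betw ?p {..<k} {..<k}" using pinj by (simp add: bij_betw_def)
  thus ?thesis by (rule bij_imp_permutes) (simp add: perm_of_inj_def)
qed

lemma sum_inj_funs:
  "(\<Sum>f\<in>inj_funs k n. g f) = (\<Sum>K\<in>ksub n k. \<Sum>p | p permutes {..<k}. g (enum_perm k K p))"
proof -
  have "(\<Sum>K\<in>ksub n k. \<Sum>p | p permutes {..<k}. g (enum_perm k K p)) =
      (\<Sum>(K, p)\<in>Sigma (ksub n k) (\<lambda>_. {p. p permutes {..<k}}). g (enum_perm k K p))"
    by (subst sum.Sigma) (auto simp: finite_ksub finite_permutations)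
  also have "\<dots> = (\<Sum>f\<in>inj_funs k n. g f)"
  proof (rule sum.reindex_bij_witness[where i="\<lambda>f. (f ` {..<k}, perm_of_inj k f)" and j="\<lambda>(K, p). enum_perm k K p"])
    fix x assume "x \<in> Sigma (ksub n k) (\<lambda>_. {p. p permutes {..<k}})"
    then obtain K p where x: "x = (K, p)" "K \<in> ksub n k" "p permutes {..<k}" by auto
    show "(case x of (K, p) \<Rightarrow> enum_perm k K p) \<in> inj_funs k n"
      using x by (simp add: enum_perm_in_inj_funs)
    show "((case x of (K, p) \<Rightarrow> enum_perm k K p) ` {..<k}, perm_of_inj k (case x of (K, p) \<Rightarrow> enum_perm k K p)) = x"
      using x by (simp add: enum_perm_inverse)
  next
    fix f assume f: "f \<in> inj_funs k n"
    show "(f ` {..<k}, perm_of_inj k f) \<in> Sigma (ksub n k) (\<lambda>_. {p. p permutes {..<k}})"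
      using f by (simp add: image_inj_funs_ksub perm_of_inj_permutes)
    show "(case (f ` {..<k}, perm_of_inj k f) of (K, p) \<Rightarrow> enum_perm k K p) = f"
      using f by (simp add: perm_of_inj_inverse)
  qed auto
  finally show ?thesis by simp
qed

lemma mdet_mmul_rect_expand:
  "mdet k (\<lambda>r c. \<Sum>l<n. A r l * B l c) =
    (\<Sum>f\<in>inj_funs k n. (\<Prod>r<k. A r (f r)) * mdet k (\<lambda>r c. B (f r) c))"
proof -
  define F where "F = PiE {..<k} (\<lambda>_. {..<n::nat})"
  define g where "g f = (\<Prod>r<k. A r (f r)) * mdet k (\<lambda>r c. B (f r) c)" for f
  have "mdet k (\<lambda>r c. \<Sum>l<n. A r l * B l c) =
      (\<Sum>p | p permutes {..<k}. of_int (sign p) * (\<Sum>f\<in>F. \<Prod>r<k. A r (f r) * B (f r) (p r)))"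
    unfolding mdet_def F_def by (simp add: prod_sum_PiE)
  also have "\<dots> = (\<Sum>p | p permutes {..<k}. \<Sum>f\<in>F. (\<Prod>r<k. A r (f r)) * (of_int (sign p) * (\<Prod>r<k. B (f r) (p r))))"
    by (simp add: sum_distrib_left prod.distrib mult_ac)
  also have "\<dots> = (\<Sum>f\<in>F. g f)"
    unfolding g_def mdet_def by (subst sum.swap) (simp add: sum_distrib_left)
  also have "\<dots> = (\<Sum>f\<in>inj_funs k n. g f)"
  proof (rule sum.mono_neutral_right)
    show "\<forall>f\<in>F - inj_funs k n. g f = 0"
    proof
      fix f assume "f \<in> F - inj_funs k n"
      then obtain i j where ij: "i < k" "j < k" "i \<noteq> j" "f i = f j"
        unfolding F_def inj_funs_def inj_on_def by auto
      have "mdet k (\<lambda>r c. B (f r) c) = 0" by (rule mdet_eq_0_equal_rows[OF ij(1-3)]) (simp add: ij(4))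
      thus "g f = 0" unfolding g_def by simp
    qed
  qed (auto simp: F_def inj_funs_def finite_PiE)
  finally show ?thesis unfolding g_def .
qed

theorem cauchy_binet:
  "mdet k (\<lambda>r c. \<Sum>l<n. A r l * B l c) =
    (\<Sum>K\<in>ksub n k. mdet k (\<lambda>r c. A r (sl K ! c)) * mdet k (\<lambda>r c. B (sl K ! r) c))"
proof -
  have "mdet k (\<lambda>r c. A r (sl K ! c)) * mdet k (\<lambda>r c. B (sl K ! r) c) =
      (\<Sum>p | p permutes {..<k}. (\<Prod>r<k. A r (enum_perm k K p r)) * mdet k (\<lambda>r c. B (enum_perm k K p r) c))"
    for K
  proof -
    have "mdet k (\<lambda>r c. A r (sl K ! c)) * mdet k (\<lambda>r c. B (sl K ! r) c) =
        (\<Sum>p | p permutes {..<k}. (\<Prod>r<k. A r (sl K ! p r)) * (of_int (sign p) * mdet k (\<lambda>r c. B (sl K ! r) c)))"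
      unfolding mdet_def[of k "\<lambda>r c. A r (sl K ! c)"] sum_distrib_right by (simp add: mult_ac)
    also have "\<dots> = (\<Sum>p | p permutes {..<k}. (\<Prod>r<k. A r (sl K ! p r)) * mdet k (\<lambda>r c. B (sl K ! p r) c))"
      by (intro sum.cong refl) (simp add: mdet_permute_rows[where M="\<lambda>r c. B (sl K ! r) c"])
    also have "\<dots> = (\<Sum>p | p permutes {..<k}. (\<Prod>r<k. A r (enum_perm k K p r)) * mdet k (\<lambda>r c. B (enum_perm k K p r) c))"
      by (intro sum.cong refl arg_cong2[where f="(*)"] prod.cong mdet_cong) (auto simp: enum_perm_def)
    finally show ?thesis .
  qed
  thus ?thesis by (simp add: mdet_mmul_rect_expand sum_inj_funs)
qed

section \<open>Compound matrices\<close>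

lemma lam_cha_minor:
  assumes I: "I \<subseteq> {..<n}" and J: "J \<subseteq> {..<n}"
  shows "lam_cha n X I J = (if card I = card J then mdet (card J) (\<lambda>r c. X (sl I ! r) (sl J ! c)) else 0)"
  unfolding lam_cha_def wedge_def using I ksubD[OF ksub_card[OF J]] sl_nth_less[OF I]
  by (auto intro!: mdet_cong)

lemma lam_cha_card_neq: "I \<subseteq> {..<n} \<Longrightarrow> J \<subseteq> {..<n} \<Longrightarrow> card I \<noteq> card J \<Longrightarrow> lam_cha n X I J = 0"
  by (simp add: lam_cha_minor)

lemma lam_cha_cong:
  assumes "\<And>i j. i < n \<Longrightarrow> j < n \<Longrightarrow> X i j = Y i j" and I: "I \<subseteq> {..<n}" and J: "J \<subseteq> {..<n}"
  shows "lam_cha n X I J = lam_cha n Y I J"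
  unfolding lam_cha_minor[OF I J] using assms(1) sl_nth_less[OF I] sl_nth_less[OF J]
  by (auto intro!: mdet_cong)

lemma tendsto_lam_cha:
  assumes "\<And>i j. i < n \<Longrightarrow> j < n \<Longrightarrow> ((\<lambda>z. X z i j) \<longlongrightarrow> X0 i j) F" and I: "I \<subseteq> {..<n}" and J: "J \<subseteq> {..<n}"
  shows "((\<lambda>z. lam_cha n (X z) I J) \<longlongrightarrow> lam_cha n X0 I J) F"
  unfolding lam_cha_minor[OF I J] using assms(1) sl_nth_less[OF I] sl_nth_less[OF J]
  by (auto intro!: tendsto_mdet)

lemma lam_cha_mmul:
  assumes I: "I \<subseteq> {..<n}" and J: "J \<subseteq> {..<n}"
  shows "lam_cha n (mmul n X Y) I J = (\<Sum>K\<in>Pow {..<n}. lam_cha n X I K * lam_cha n Y K J)"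
proof (cases "card I = card J")
  case True
  define k where "k = card J"
  have "lam_cha n (mmul n X Y) I J = mdet k (\<lambda>r c. \<Sum>l<n. X (sl I ! r) l * Y l (sl J ! c))"
    unfolding lam_cha_minor[OF I J] mmul_def k_def using True by simp
  also have "\<dots> = (\<Sum>K\<in>ksub n k. mdet k (\<lambda>r c. X (sl I ! r) (sl K ! c)) * mdet k (\<lambda>r c. Y (sl K ! r) (sl J ! c)))"
    by (rule cauchy_binet)
  also have "\<dots> = (\<Sum>K\<in>ksub n k. lam_cha n X I K * lam_cha n Y K J)"
    by (intro sum.cong refl) (auto simp: lam_cha_minor I J ksub_def True k_def)
  also have "\<dots> = (\<Sum>K\<in>Pow {..<n}. lam_cha n X I K * lam_cha n Y K J)"
  proof (rule sum.mono_neutral_left)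
    show "\<forall>K\<in>Pow {..<n} - ksub n k. lam_cha n X I K * lam_cha n Y K J = 0"
      using True I J unfolding ksub_def k_def by (auto simp: lam_cha_card_neq)
  qed (auto simp: ksub_def)
  finally show ?thesis .
next
  case False
  have "lam_cha n X I K * lam_cha n Y K J = 0" if "K \<subseteq> {..<n}" for K
    using False I J that by (cases "card K = card I") (auto simp: lam_cha_card_neq)
  hence "(\<Sum>K\<in>Pow {..<n}. lam_cha n X I K * lam_cha n Y K J) = 0" by (intro sum.neutral) auto
  thus ?thesis using False by (simp add: lam_cha_card_neq I J)
qed

lemma lam_cha_mident:
  assumes I: "I \<subseteq> {..<n}" and J: "J \<subseteq> {..<n}"
  shows "lam_cha n mident I J = (if I = J then 1 else 0)"
proof -
  note fI = ksubD[OF ksub_card[OF I]] and fJ = ksubD[OF ksub_card[OF J]]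
  consider "I = J" | "I \<noteq> J" "card I = card J" | "card I \<noteq> card J" by blast
  thus ?thesis
  proof cases
    case 1
    have "lam_cha n mident I J = mdet (card J) mident"
      unfolding lam_cha_minor[OF I J] mident_def using 1 fJ
      by (auto intro!: mdet_cong simp: nth_eq_iff_index_eq)
    thus ?thesis using 1 mdet_mident by simp
  next
    case 2
    have "\<not> J \<subseteq> I" using 2 fI by (metis card_subset_eq)
    then obtain j where j: "j \<in> J" "j \<notin> I" by auto
    then obtain c0 where c0: "c0 < card J" "sl J ! c0 = j" using fJ by (metis in_set_conv_nth)
    have "mdet (card J) (\<lambda>r c. mident (sl I ! r) (sl J ! c)) = 0"
    proof (rule mdet_eq_0_cols_few_rows[of "{c0}" _ "{}"])
      show "\<forall>c\<in>{c0}. \<forall>r<card J. r \<notin> {} \<longrightarrow> mident (sl I ! r) (sl J ! c) = 0"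
        using c0 j sl_nth_mem[OF I] 2(2) unfolding mident_def by fastforce
    qed (use c0 in auto)
    thus ?thesis using 2 by (simp add: lam_cha_minor I J)
  qed (auto simp: lam_cha_card_neq I J)
qed

lemma lam_cha_minv_mmul:
  assumes "mdet n X \<noteq> 0" "I \<subseteq> {..<n}" "J \<subseteq> {..<n}"
  shows "(\<Sum>K\<in>Pow {..<n}. lam_cha n (minv n X) I K * lam_cha n X K J) = (if I = J then 1 else 0)"
proof -
  have "lam_cha n (mmul n (minv n X) X) I J = lam_cha n mident I J"
    by (rule lam_cha_cong) (use assms minv_mmul in auto)
  thus ?thesis using lam_cha_mmul[OF assms(2,3)] lam_cha_mident[OF assms(2,3)] by simp
qed

lemma lam_cha_mmul_minv:
  assumes "mdet n X \<noteq> 0" "I \<subseteq> {..<n}" "J \<subseteq> {..<n}"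
  shows "(\<Sum>K\<in>Pow {..<n}. lam_cha n X I K * lam_cha n (minv n X) K J) = (if I = J then 1 else 0)"
proof -
  have "lam_cha n (mmul n X (minv n X)) I J = lam_cha n mident I J"
    by (rule lam_cha_cong) (use assms mmul_minv in auto)
  thus ?thesis using lam_cha_mmul[OF assms(2,3)] lam_cha_mident[OF assms(2,3)] by simp
qed

lemma lam_cha_scale_rows:
  assumes I: "I \<subseteq> {..<n}" and J: "J \<subseteq> {..<n}"
  shows "lam_cha n (\<lambda>i j. d i * X i j) I J = (\<Prod>i\<in>I. d i) * lam_cha n X I J"
proof (cases "card I = card J")
  case True
  note f = sorted_list_nth_ksub[OF ksub_card[OF I]]
  have "(\<Prod>i\<in>I. d i) = (\<Prod>r<card I. d (sl I ! r))"
    using prod.reindex[OF f(1), of d] f(2) by (simp add: comp_def)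
  thus ?thesis using True by (simp add: lam_cha_minor I J mdet_scale_rows)
qed (simp add: lam_cha_card_neq I J)

lemma sum_sum_mult_swap:
  fixes x :: "'k \<Rightarrow> 'a::comm_semiring_1"
  assumes "finite A" "finite B"
  shows "(\<Sum>J\<in>B. (\<Sum>K\<in>A. x K * y K J) * z J) = (\<Sum>K\<in>A. x K * (\<Sum>J\<in>B. y K J * z J))"
proof -
  have "(\<Sum>J\<in>B. (\<Sum>K\<in>A. x K * y K J) * z J) = (\<Sum>J\<in>B. \<Sum>K\<in>A. x K * (y K J * z J))"
    by (simp add: sum_distrib_right mult.assoc)
  also have "\<dots> = (\<Sum>K\<in>A. \<Sum>J\<in>B. x K * (y K J * z J))" by (rule sum.swap)
  also have "\<dots> = (\<Sum>K\<in>A. x K * (\<Sum>J\<in>B. y K J * z J))" by (simp add: sum_distrib_left)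
  finally show ?thesis .
qed

lemma sum_sandwich_swap:
  fixes x :: "'i \<Rightarrow> 'a::comm_semiring_1"
  assumes "finite A" "finite B" "finite C"
  shows "(\<Sum>I\<in>A. \<Sum>J\<in>B. x I * (\<Sum>K\<in>C. p I K * d K * q K J) * y J) =
         (\<Sum>K\<in>C. (\<Sum>I\<in>A. x I * p I K) * d K * (\<Sum>J\<in>B. q K J * y J))"
proof -
  have "(\<Sum>I\<in>A. \<Sum>J\<in>B. x I * (\<Sum>K\<in>C. p I K * d K * q K J) * y J) =
        (\<Sum>I\<in>A. \<Sum>J\<in>B. \<Sum>K\<in>C. x I * p I K * d K * q K J * y J)"
    by (simp add: sum_distrib_left sum_distrib_right mult_ac)
  also have "\<dots> = (\<Sum>I\<in>A. \<Sum>K\<in>C. \<Sum>J\<in>B. x I * p I K * d K * q K J * y J)"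
    by (intro sum.cong refl) (rule sum.swap)
  also have "\<dots> = (\<Sum>K\<in>C. \<Sum>I\<in>A. \<Sum>J\<in>B. x I * p I K * d K * q K J * y J)"
    by (rule sum.swap)
  also have "\<dots> = (\<Sum>K\<in>C. (\<Sum>I\<in>A. x I * p I K) * d K * (\<Sum>J\<in>B. q K J * y J))"
    by (simp add: sum_distrib_left sum_distrib_right mult_ac)
  finally show ?thesis .
qed

lemma lam_cha_cancel_right:
  assumes X: "mdet n X \<noteq> 0" and D: "\<And>T. T \<subseteq> {..<n} \<Longrightarrow> (\<Sum>J\<in>Pow {..<n}. D J * lam_cha n X J T) = 0"
    and J0: "J0 \<subseteq> {..<n}"
  shows "D J0 = 0"
proof -
  have "(\<Sum>T\<in>Pow {..<n}. (\<Sum>J\<in>Pow {..<n}. D J * lam_cha n X J T) * lam_cha n (minv n X) T J0) =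
      (\<Sum>J\<in>Pow {..<n}. D J * (\<Sum>T\<in>Pow {..<n}. lam_cha n X J T * lam_cha n (minv n X) T J0))"
    by (rule sum_sum_mult_swap) auto
  also have "\<dots> = (\<Sum>J\<in>Pow {..<n}. D J * (if J = J0 then 1 else 0))"
    by (intro sum.cong refl) (simp add: lam_cha_mmul_minv[OF X _ J0])
  also have "\<dots> = D J0" using J0 by (simp add: if_distrib cong: if_cong)
  finally show ?thesis using D by simp
qed

lemma lam_cha_sandwich_nonzero:
  assumes X: "mdet n X \<noteq> 0" and Y: "mdet n Y \<noteq> 0" and K0: "K0 \<subseteq> {..<n}" "card K0 = j" "D K0 \<noteq> 0"
  shows "\<exists>I\<in>ksub n j. \<exists>J\<in>ksub n j. (\<Sum>K\<in>Pow {..<n}. lam_cha n X I K * D K * lam_cha n Y K J) \<noteq> 0"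
proof (rule ccontr)
  define N where "N I J = (\<Sum>K\<in>Pow {..<n}. lam_cha n X I K * D K * lam_cha n Y K J)" for I J
  assume "\<not> ?thesis"
  hence z: "N I J = 0" if "I \<in> ksub n j" "J \<in> ksub n j" for I J using that unfolding N_def by blast
  define S where "S = (\<Sum>I\<in>Pow {..<n}. \<Sum>J\<in>Pow {..<n}. lam_cha n (minv n X) K0 I * N I J * lam_cha n (minv n Y) J K0)"
  have "S = 0" unfolding S_def
  proof (intro sum.neutral ballI)
    fix I J assume IJ: "I \<in> Pow {..<n}" "J \<in> Pow {..<n}"
    show "lam_cha n (minv n X) K0 I * N I J * lam_cha n (minv n Y) J K0 = 0"
      using z[of I J] IJ K0 unfolding ksub_def by (cases "card I = j \<and> card J = j") (auto simp: lam_cha_card_neq)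
  qed
  moreover have "S = (\<Sum>K\<in>Pow {..<n}. (\<Sum>I\<in>Pow {..<n}. lam_cha n (minv n X) K0 I * lam_cha n X I K) * D K *
                 (\<Sum>J\<in>Pow {..<n}. lam_cha n Y K J * lam_cha n (minv n Y) J K0))"
    unfolding S_def N_def by (rule sum_sandwich_swap) auto
  hence "S = D K0"
    using K0 by (simp add: lam_cha_minv_mmul[OF X K0(1)] lam_cha_mmul_minv[OF Y _ K0(1)] if_distrib cong: if_cong)
  ultimately show False using K0 by simp
qed


section \<open>Vectors, spans and orthogonal projections\<close>

definition mcol :: "nat \<Rightarrow> cmat \<Rightarrow> nat \<Rightarrow> cvec" where
  "mcol n X k = (\<lambda>i. if i < n then X i k else 0)"

lemma mcol_vecs: "mcol n X k \<in> vecs n"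
  unfolding mcol_def vecs_def by auto

lemma zero_vecs: "(\<lambda>_. 0) \<in> vecs n"
  unfolding vecs_def by auto

lemma mvec_vecs: "mvec N Q x \<in> vecs N"
  unfolding mvec_def vecs_def by auto

lemma mvec_zero: "mvec n X (\<lambda>_. 0) = (\<lambda>_. 0)"
  unfolding mvec_def by auto

lemma mvec_mmul: "mvec n X (mvec n Y v) = mvec n (mmul n X Y) v"
proof
  fix i
  show "mvec n X (mvec n Y v) i = mvec n (mmul n X Y) v i"
    unfolding mvec_def mmul_def by (simp add: sum_mult_sum_swap)
qed

lemma mvec_cong_mat: "(\<And>i j. i < n \<Longrightarrow> j < n \<Longrightarrow> X i j = Y i j) \<Longrightarrow> mvec n X u = mvec n Y u"
  unfolding mvec_def by auto

lemma mvec_mident: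
  assumes "\<And>i j. i < n \<Longrightarrow> j < n \<Longrightarrow> Z i j = mident i j" "i < n"
  shows "mvec n Z u i = u i"
proof -
  have "mvec n Z u i = (\<Sum>k<n. mident i k * u k)"
    using assms unfolding mvec_def by simp
  thus ?thesis using sum_mident_mult[OF assms(2)] by simp
qed

lemma mvec_mident_vecs:
  assumes "\<And>i j. i < n \<Longrightarrow> j < n \<Longrightarrow> Z i j = mident i j" "u \<in> vecs n"
  shows "mvec n Z u = u"
proof
  fix i show "mvec n Z u i = u i"
    using mvec_mident[OF assms(1)] assms(2) unfolding vecs_def by (cases "i < n") (auto simp: mvec_def)
qed

lemma sum_mcol: "(\<lambda>l. \<Sum>i<n. c i * mcol n X i l) = mvec n X c"
  unfolding mvec_def mcol_def by (auto simp: mult.commute)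

lemma mvec_sum: "mvec n X (\<lambda>i. \<Sum>k\<in>A. c k * f k i) = (\<lambda>i. \<Sum>k\<in>A. c k * mvec n X (f k) i)"
proof
  fix i
  have "(\<Sum>l<n. X i l * (\<Sum>k\<in>A. c k * f k l)) = (\<Sum>k\<in>A. \<Sum>l<n. c k * (X i l * f k l))"
    by (simp add: sum_distrib_left mult_ac sum.swap[of _ "{..<n}"])
  thus "mvec n X (\<lambda>i. \<Sum>k\<in>A. c k * f k i) i = (\<Sum>k\<in>A. c k * mvec n X (f k) i)"
    unfolding mvec_def by (simp add: sum_distrib_left)
qed

lemma mvec_scale: "mvec n X (\<lambda>l. c * f l) = (\<lambda>i. c * mvec n X f i)"
  unfolding mvec_def by (auto simp: sum_distrib_left mult_ac)

lemma mvec_scale_mat: "mvec n (\<lambda>i k. c * G i k) v = (\<lambda>i. c * mvec n G v i)"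
  unfolding mvec_def by (auto simp: sum_distrib_left mult_ac)

lemma tendsto_mvec:
  assumes "\<And>i j. i < n \<Longrightarrow> j < n \<Longrightarrow> ((\<lambda>z. X z i j) \<longlongrightarrow> X0 i j) F"
    and "\<And>k. k < n \<Longrightarrow> ((\<lambda>z. v z k) \<longlongrightarrow> v0 k) F"
  shows "((\<lambda>z. mvec n (X z) (v z) p) \<longlongrightarrow> mvec n X0 v0 p) F"
  unfolding mvec_def by (cases "p < n") (auto intro!: tendsto_sum tendsto_mult assms)

lemma vecs_expand: "v \<in> vecs n \<Longrightarrow> v = (\<lambda>i. \<Sum>l<n. v l * mcol n mident l i)"
  using sum_mcol[where c=v and X=mident] mvec_mident_vecs[of n mident v] by simp

lemma join_vecs: "v \<in> vecs n \<Longrightarrow> w \<in> vecs n \<Longrightarrow> join n v w \<in> vecs (2 * n)"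
  unfolding Defs.join_def vecs_def by auto

lemma join_sum:
  "join n (\<lambda>i. \<Sum>k\<in>A. c k * f k i) (\<lambda>i. \<Sum>k\<in>A. c k * g k i) = (\<lambda>i. \<Sum>k\<in>A. c k * join n (f k) (g k) i)"
  unfolding Defs.join_def by auto

lemma join_inj:
  assumes "join n v w = join n v' w'" "v \<in> vecs n" "w \<in> vecs n" "v' \<in> vecs n" "w' \<in> vecs n"
  shows "v = v' \<and> w = w'"
proof
  show "v = v'"
  proof
    fix i show "v i = v' i"
      using fun_cong[OF assms(1), of i] assms(2,4) unfolding Defs.join_def vecs_def by (cases "i < n") auto
  qed
  show "w = w'"
  proof
    fix i show "w i = w' i"
      using fun_cong[OF assms(1), of "n + i"] assms(3,5) unfolding Defs.join_def vecs_def by (cases "i < n") auto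
  qed
qed

lemma join_split:
  "x \<in> vecs (2 * n) \<Longrightarrow> x = join n (\<lambda>i. if i < n then x i else 0) (\<lambda>i. if i < n then x (n + i) else 0)"
  unfolding Defs.join_def vecs_def by (auto simp: fun_eq_iff)

lemma cspan_map_upt: "x \<in> cspan (map f [0..<N]) \<longleftrightarrow> (\<exists>c. x = (\<lambda>i. \<Sum>k<N. c k * f k i))"
  unfolding cspan_def by auto

lemma cspanI: "x = (\<lambda>i. \<Sum>k<length ws. c k * (ws ! k) i) \<Longrightarrow> x \<in> cspan ws"
  unfolding cspan_def by blast

lemma cspan_mem: assumes "x \<in> set ws" shows "x \<in> cspan ws"
proof -
  obtain k0 where k0: "k0 < length ws" "ws ! k0 = x" using assms by (auto simp: in_set_conv_nth)
  have e: "(if k = k0 then 1 else 0) * v = (if k = k0 then v else (0::complex))" for k v by simp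
  have "(\<lambda>i. \<Sum>k<length ws. (if k = k0 then 1 else 0) * (ws ! k) i) = x"
    using k0 by (intro ext) (simp only: e sum.delta' finite_lessThan, simp)
  thus ?thesis by (intro cspanI) (rule sym)
qed

lemma cspan_zero: "(\<lambda>i. 0) \<in> cspan ws"
  by (rule cspanI[where c="\<lambda>_. 0"]) simp

lemma cspan_add: assumes "x \<in> cspan ws" "y \<in> cspan ws" shows "(\<lambda>i. x i + y i) \<in> cspan ws"
proof -
  obtain a b where x: "x = (\<lambda>i. \<Sum>k<length ws. a k * (ws ! k) i)" and y: "y = (\<lambda>i. \<Sum>k<length ws. b k * (ws ! k) i)"
    using assms unfolding cspan_def by auto
  have "(\<lambda>i. x i + y i) = (\<lambda>i. \<Sum>k<length ws. (a k + b k) * (ws ! k) i)"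
    unfolding x y by (simp add: sum.distrib[symmetric] distrib_right)
  thus ?thesis by (rule cspanI)
qed

lemma cspan_smult: assumes "x \<in> cspan ws" shows "(\<lambda>i. c * x i) \<in> cspan ws"
proof -
  obtain a where x: "x = (\<lambda>i. \<Sum>k<length ws. a k * (ws ! k) i)"
    using assms unfolding cspan_def by auto
  have "(\<lambda>i. c * x i) = (\<lambda>i. \<Sum>k<length ws. (c * a k) * (ws ! k) i)"
    unfolding x by (simp add: sum_distrib_left mult.assoc)
  thus ?thesis by (rule cspanI)
qed

lemma cspan_sum: "finite A \<Longrightarrow> (\<And>k. k \<in> A \<Longrightarrow> x k \<in> cspan ws) \<Longrightarrow> (\<lambda>i. \<Sum>k\<in>A. c k * x k i) \<in> cspan ws"
proof (induction A rule: finite_induct)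
  case empty thus ?case by (simp add: cspan_zero)
next
  case (insert a A)
  have "(\<lambda>i. c a * x a i + (\<Sum>k\<in>A. c k * x k i)) \<in> cspan ws"
    using insert by (intro cspan_add cspan_smult) auto
  thus ?case using insert by simp
qed

lemma cspan_diff: "x \<in> cspan ws \<Longrightarrow> y \<in> cspan ws \<Longrightarrow> (\<lambda>i. x i - y i) \<in> cspan ws"
  using cspan_add[of x ws "\<lambda>i. (-1) * y i"] cspan_smult[of y ws "-1"] by simp

lemma cspan_mono: assumes "set us \<subseteq> cspan ws" shows "cspan us \<subseteq> cspan ws"
proof
  fix y assume "y \<in> cspan us"
  then obtain c where y: "y = (\<lambda>i. \<Sum>k<length us. c k * (us ! k) i)" unfolding cspan_def by auto
  show "y \<in> cspan ws" unfolding y using assms by (intro cspan_sum) auto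
qed

lemma cspan_vecs: assumes "set ws \<subseteq> vecs N" shows "cspan ws \<subseteq> vecs N"
proof
  fix y assume "y \<in> cspan ws"
  then obtain c where y: "y = (\<lambda>i. \<Sum>k<length ws. c k * (ws ! k) i)" unfolding cspan_def by auto
  have "(ws ! k) i = 0" if "k < length ws" "i \<ge> N" for k i
    using assms nth_mem[OF that(1)] that(2) by (auto simp: vecs_def)
  thus "y \<in> vecs N" unfolding y vecs_def by auto
qed

lemma cspan_Cons: "y \<in> cspan (w # ws) \<longleftrightarrow> (\<exists>c0 y'. y' \<in> cspan ws \<and> y = (\<lambda>i. c0 * w i + y' i))"
proof
  assume "y \<in> cspan (w # ws)"
  then obtain c where y: "y = (\<lambda>i. \<Sum>k<length (w#ws). c k * ((w#ws) ! k) i)" unfolding cspan_def by auto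
  have "y = (\<lambda>i. c 0 * w i + (\<Sum>k<length ws. c (Suc k) * (ws ! k) i))"
    unfolding y by (simp only: length_Cons sum.lessThan_Suc_shift nth_Cons_0 nth_Cons_Suc)
  moreover have "(\<lambda>i. \<Sum>k<length ws. c (Suc k) * (ws ! k) i) \<in> cspan ws" by (rule cspanI) simp
  ultimately show "\<exists>c0 y'. y' \<in> cspan ws \<and> y = (\<lambda>i. c0 * w i + y' i)" by blast
next
  assume "\<exists>c0 y'. y' \<in> cspan ws \<and> y = (\<lambda>i. c0 * w i + y' i)"
  then obtain c0 y' where y': "y' \<in> cspan ws" "y = (\<lambda>i. c0 * w i + y' i)" by auto
  have "set ws \<subseteq> cspan (w # ws)" by (auto intro: cspan_mem)
  hence "y' \<in> cspan (w # ws)" using cspan_mono y'(1) by blast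
  thus "y \<in> cspan (w # ws)" unfolding y'(2) by (intro cspan_add cspan_smult) (auto intro: cspan_mem)
qed

lemma graph_cspan: "graph n A = cspan (map (\<lambda>l. join n (mcol n mident l) (mvec n A (mcol n mident l))) [0..<n])"
proof (intro subset_antisym subsetI)
  fix x assume "x \<in> graph n A"
  then obtain v where v: "v \<in> vecs n" "x = join n v (mvec n A v)" unfolding graph_def by auto
  have "x = join n (\<lambda>i. \<Sum>l<n. v l * mcol n mident l i) (mvec n A (\<lambda>i. \<Sum>l<n. v l * mcol n mident l i))"
    using v vecs_expand[OF v(1)] by metis
  also have "\<dots> = (\<lambda>i. \<Sum>l<n. v l * join n (mcol n mident l) (mvec n A (mcol n mident l)) i)"
    unfolding mvec_sum join_sum ..
  finally show "x \<in> cspan (map (\<lambda>l. join n (mcol n mident l) (mvec n A (mcol n mident l))) [0..<n])"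
    unfolding cspan_map_upt by blast
next
  fix x assume "x \<in> cspan (map (\<lambda>l. join n (mcol n mident l) (mvec n A (mcol n mident l))) [0..<n])"
  then obtain c where x: "x = (\<lambda>i. \<Sum>l<n. c l * join n (mcol n mident l) (mvec n A (mcol n mident l)) i)"
    unfolding cspan_map_upt by auto
  define v where "v = (\<lambda>i. \<Sum>l<n. c l * mcol n mident l i)"
  have "v \<in> vecs n" unfolding v_def mcol_def vecs_def by auto
  moreover have "x = join n v (mvec n A v)" unfolding x v_def mvec_sum join_sum ..
  ultimately show "x \<in> graph n A" unfolding graph_def by auto
qed

lemma cinner_diff_left: "cinner N (\<lambda>i. a i - b i) y = cinner N a y - cinner N b y"
  unfolding cinner_def by (simp add: left_diff_distrib sum_subtractf)

lemma cinner_scale_left: "cinner N (\<lambda>i. c * a i) y = c * cinner N a y"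
  unfolding cinner_def by (simp add: sum_distrib_left mult.assoc)

lemma cinner_add_right: "cinner N a (\<lambda>i. x i + y i) = cinner N a x + cinner N a y"
  unfolding cinner_def by (simp add: distrib_left sum.distrib)

lemma cinner_scale_right: "cinner N a (\<lambda>i. c * y i) = cnj c * cinner N a y"
  unfolding cinner_def by (simp add: sum_distrib_left mult_ac)

lemma cinner_commute: "cinner N a b = cnj (cinner N b a)"
  unfolding cinner_def by (simp add: mult.commute)

lemma cinner_cong_right: "(\<And>i. i < N \<Longrightarrow> x i = y i) \<Longrightarrow> cinner N a x = cinner N a y"
  unfolding cinner_def by simp

lemma cinner_self_eq_0:
  assumes "cinner N d d = 0" "i < N"
  shows "d i = 0"
proof -
  have e: "d j * cnj (d j) = complex_of_real ((cmod (d j))\<^sup>2)" for j by (rule complex_norm_square[symmetric])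
  have "cinner N d d = complex_of_real (\<Sum>j<N. (cmod (d j))\<^sup>2)"
    by (simp only: cinner_def e of_real_sum)
  hence "complex_of_real (\<Sum>j<N. (cmod (d j))\<^sup>2) = 0" using assms(1) by metis
  hence "(\<Sum>j<N. (cmod (d j))\<^sup>2) = 0" by (simp only: of_real_eq_0_iff)
  hence "\<forall>j\<in>{..<N}. (cmod (d j))\<^sup>2 = 0" by (subst (asm) sum_nonneg_eq_0_iff) auto
  thus ?thesis using assms(2) by auto
qed

definition is_oproj :: "nat \<Rightarrow> cvec set \<Rightarrow> cmat \<Rightarrow> bool" where
  "is_oproj N S Q = ((\<forall>i j. Q i j \<noteq> 0 \<longrightarrow> i < N \<and> j < N) \<and>
       (\<forall>x\<in>vecs N. mvec N Q x \<in> S \<and> (\<forall>y\<in>S. cinner N (\<lambda>i. x i - mvec N Q x i) y = 0)))"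

lemma is_oproj_Nil: "is_oproj N (cspan []) (\<lambda>i j. 0)"
proof -
  have "cspan [] = {\<lambda>i. 0}" unfolding cspan_def by auto
  moreover have "mvec N (\<lambda>i j. 0) x = (\<lambda>i. 0)" for x unfolding mvec_def by auto
  ultimately show ?thesis unfolding is_oproj_def cinner_def by auto
qed

text \<open>Gram--Schmidt step: adding \<open>w\<close> to the spanning list adds the rank-one projection onto the
  normalised residual \<open>u\<close> of \<open>w\<close>.\<close>

lemma is_oproj_Cons:
  assumes Q: "is_oproj N (cspan ws) Q" and w: "w \<in> vecs N"
  defines "u \<equiv> \<lambda>i. w i - mvec N Q w i"
  shows "is_oproj N (cspan (w # ws))
           (\<lambda>i j. if i < N \<and> j < N then Q i j + u i * cnj (u j) / cinner N u u else 0)"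
    (is "is_oproj N _ ?Q'")
proof -
  define nu where "nu = cinner N u u"
  have Qm: "mvec N Q x \<in> cspan ws" "\<forall>y\<in>cspan ws. cinner N (\<lambda>i. x i - mvec N Q x i) y = 0" if "x \<in> vecs N" for x
    using Q that unfolding is_oproj_def by auto
  have uv: "u \<in> vecs N" using w unfolding u_def vecs_def mvec_def by auto
  have mQ': "mvec N ?Q' x = (\<lambda>i. mvec N Q x i + (cinner N x u / nu) * u i)" for x
  proof
    fix i show "mvec N ?Q' x i = mvec N Q x i + (cinner N x u / nu) * u i"
      using uv unfolding mvec_def cinner_def vecs_def nu_def
      by (cases "i < N") (simp_all add: distrib_left sum.distrib sum_distrib_left sum_divide_distrib mult_ac)
  qed
  have wsub: "cspan ws \<subseteq> cspan (w # ws)" by (rule cspan_mono) (auto intro: cspan_mem)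
  have umem: "u \<in> cspan (w # ws)" unfolding u_def using wsub Qm(1)[OF w] by (intro cspan_diff) (auto intro: cspan_mem)
  have uorth: "cinner N u y = 0" if "y \<in> cspan ws" for y using Qm(2)[OF w] that unfolding u_def by auto
  have "mvec N ?Q' x \<in> cspan (w # ws) \<and> (\<forall>y\<in>cspan (w # ws). cinner N (\<lambda>i. x i - mvec N ?Q' x i) y = 0)"
    if x: "x \<in> vecs N" for x
  proof (intro conjI ballI)
    show "mvec N ?Q' x \<in> cspan (w # ws)" unfolding mQ' using Qm(1)[OF x] wsub umem
      by (intro cspan_add cspan_smult) auto
    define r where "r = (\<lambda>i. x i - mvec N ?Q' x i)"
    have r: "r = (\<lambda>i. (x i - mvec N Q x i) - (cinner N x u / nu) * u i)" unfolding r_def mQ' by auto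
    have r1: "cinner N r y = 0" if "y \<in> cspan ws" for y
      using Qm(2)[OF x] uorth that unfolding r cinner_diff_left[of N "\<lambda>i. x i - mvec N Q x i"] cinner_scale_left by simp
    have "cinner N r w = cinner N r (mvec N Q w) + cinner N r u"
      by (subst cinner_add_right[symmetric]) (rule cinner_cong_right, simp add: u_def)
    also have "\<dots> = cinner N x u - (cinner N x u / nu) * nu"
      using r1[OF Qm(1)[OF w]] uorth[OF Qm(1)[OF x]]
      unfolding r cinner_diff_left cinner_scale_left nu_def by (subst (asm) cinner_commute) simp
    also have "\<dots> = 0"
    proof (cases "nu = 0")
      case True
      hence "\<forall>i<N. u i = 0" using cinner_self_eq_0 unfolding nu_def by blast
      thus ?thesis unfolding cinner_def by simp
    qed simp
    finally have r2: "cinner N r w = 0" .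
    fix y assume "y \<in> cspan (w # ws)"
    then obtain c0 y' where y': "y' \<in> cspan ws" "y = (\<lambda>i. c0 * w i + y' i)" unfolding cspan_Cons by auto
    show "cinner N (\<lambda>i. x i - mvec N ?Q' x i) y = 0"
      unfolding r_def[symmetric] y'(2) cinner_add_right cinner_scale_right using r1[OF y'(1)] r2 by simp
  qed
  thus ?thesis unfolding is_oproj_def by auto
qed

lemma is_oproj_exists: "set ws \<subseteq> vecs N \<Longrightarrow> \<exists>Q. is_oproj N (cspan ws) Q"
  by (induction ws) (auto intro: is_oproj_Nil is_oproj_Cons)

lemma is_oproj_unique:
  assumes Q1: "is_oproj N (cspan ws) Q1" and Q2: "is_oproj N (cspan ws) Q2"
  shows "Q1 = Q2"
proof -
  have eqv: "mvec N Q1 x i = mvec N Q2 x i" if x: "x \<in> vecs N" for x i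
  proof -
    define d where "d = (\<lambda>i. mvec N Q1 x i - mvec N Q2 x i)"
    have "d \<in> cspan ws" unfolding d_def using Q1 Q2 x unfolding is_oproj_def by (intro cspan_diff) auto
    hence "cinner N (\<lambda>i. (x i - mvec N Q2 x i) - (x i - mvec N Q1 x i)) d = 0"
      using Q1 Q2 x unfolding is_oproj_def cinner_diff_left by auto
    hence "cinner N d d = 0" unfolding d_def by (simp add: algebra_simps)
    hence "i < N \<Longrightarrow> d i = 0" using cinner_self_eq_0 by blast
    thus ?thesis unfolding d_def by (cases "i < N") (auto simp: mvec_def)
  qed
  show ?thesis
  proof (intro ext)
    fix i j
    show "Q1 i j = Q2 i j"
    proof (cases "i < N \<and> j < N")
      case True
      define e where "e = (\<lambda>k. if k = j then (1::complex) else 0)"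
      have "e \<in> vecs N" using True unfolding e_def vecs_def by auto
      thus ?thesis using True eqv[of e i] unfolding mvec_def e_def by (simp add: if_distrib cong: if_cong)
    next
      case False
      thus ?thesis using Q1 Q2 unfolding is_oproj_def by metis
    qed
  qed
qed

lemma oproj_is_oproj: assumes "set ws \<subseteq> vecs N" shows "is_oproj N (cspan ws) (oproj N (cspan ws))"
proof -
  have "\<exists>!Q. is_oproj N (cspan ws) Q" using is_oproj_exists[OF assms] is_oproj_unique by blast
  thus ?thesis unfolding oproj_def is_oproj_def[symmetric] by (rule theI')
qed

lemma is_oproj_fixes_span:
  assumes ws: "set ws \<subseteq> vecs N" and Q: "is_oproj N (cspan ws) Q" and x: "x \<in> cspan ws"
  shows "mvec N Q x = x"
proof
  fix i
  have xv: "x \<in> vecs N" using cspan_vecs[OF ws] x by auto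
  define d where "d = (\<lambda>i. x i - mvec N Q x i)"
  have "d \<in> cspan ws" unfolding d_def using Q xv x unfolding is_oproj_def by (intro cspan_diff) auto
  hence "cinner N d d = 0" using Q xv unfolding is_oproj_def d_def by auto
  hence "i < N \<Longrightarrow> d i = 0" using cinner_self_eq_0 by blast
  thus "mvec N Q x i = x i" using xv unfolding d_def vecs_def mvec_def by (cases "i < N") auto
qed

lemma grass_tendsto_approx:
  assumes gl: "\<And>z. set (gl z) \<subseteq> vecs N" and ws: "set ws \<subseteq> vecs N"
    and G: "grass_tendsto N (\<lambda>z. cspan (gl z)) (cspan ws) F" and y: "y \<in> cspan ws"
  obtains x where "\<And>z. x z \<in> cspan (gl z)" "\<And>k. k < N \<Longrightarrow> ((\<lambda>z. x z k) \<longlongrightarrow> y k) F"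
proof
  define x where "x z = mvec N (oproj N (cspan (gl z))) y" for z
  show "x z \<in> cspan (gl z)" for z
    using oproj_is_oproj[OF gl] cspan_vecs[OF ws] y unfolding x_def is_oproj_def by blast
  fix k assume k: "k < N"
  have "((\<lambda>z. x z k) \<longlongrightarrow> mvec N (oproj N (cspan ws)) y k) F"
    unfolding x_def by (rule tendsto_mvec) (use G in \<open>auto simp: grass_tendsto_def\<close>)
  thus "((\<lambda>z. x z k) \<longlongrightarrow> y k) F"
    using is_oproj_fixes_span[OF ws oproj_is_oproj[OF ws] y] by simp
qed

lemma grass_tendsto_limit_mem:
  assumes gl: "\<And>z. set (gl z) \<subseteq> vecs N" and ws: "set ws \<subseteq> vecs N"
    and G: "grass_tendsto N (\<lambda>z. cspan (gl z)) (cspan ws) F" and F: "F \<noteq> bot"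
    and u: "\<And>z. u z \<in> cspan (gl z)" and lim: "\<And>k. k < N \<Longrightarrow> ((\<lambda>z. u z k) \<longlongrightarrow> y k) F"
    and y: "y \<in> vecs N"
  shows "y \<in> cspan ws"
proof -
  have "mvec N (oproj N (cspan ws)) y = y"
  proof
    fix k show "mvec N (oproj N (cspan ws)) y k = y k"
    proof (cases "k < N")
      case True
      have "((\<lambda>z. mvec N (oproj N (cspan (gl z))) (u z) k) \<longlongrightarrow> mvec N (oproj N (cspan ws)) y k) F"
        by (rule tendsto_mvec) (use G lim in \<open>auto simp: grass_tendsto_def\<close>)
      moreover have "mvec N (oproj N (cspan (gl z))) (u z) = u z" for z
        by (rule is_oproj_fixes_span[OF gl oproj_is_oproj[OF gl] u])
      ultimately show ?thesis using tendsto_unique[OF F] lim[OF True] by simp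
    qed (use y in \<open>auto simp: mvec_def vecs_def\<close>)
  qed
  thus ?thesis using oproj_is_oproj[OF ws] y unfolding is_oproj_def by metis
qed

lemma mdet_eq_0_kernel:
  assumes "mdet n M = 0"
  obtains c k where "k < n" "c k \<noteq> 0" "\<And>i. i < n \<Longrightarrow> (\<Sum>l<n. M i l * c l) = 0"
proof -
  have "det (mat n n (\<lambda>(i,j). M i j)) = 0" using assms by (simp add: mdet_eq_det)
  then obtain v where v: "v \<in> carrier_vec n" "v \<noteq> 0\<^sub>v n" "mat n n (\<lambda>(i,j). M i j) *\<^sub>v v = 0\<^sub>v n"
    using det_0_iff_vec_prod_zero_field[of "mat n n (\<lambda>(i,j). M i j)" n] by auto
  obtain k where "k < n" "v $ k \<noteq> 0" using v(1,2) by (metis eq_vecI carrier_vecD index_zero_vec)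
  moreover have "(\<Sum>l<n. M i l * v $ l) = 0" if "i < n" for i
    using arg_cong[OF v(3), of "\<lambda>w::complex vec. w $ i"] that v(1) by (simp add: scalar_prod_def atLeast0LessThan)
  ultimately show ?thesis by (rule that)
qed

lemma lin_indep_mdet_nonzero:
  assumes li: "lin_indep ws" and ws: "set ws \<subseteq> vecs n" and len: "length ws = n"
  shows "mdet n (\<lambda>r c. (ws ! c) r) \<noteq> 0"
proof
  assume "mdet n (\<lambda>r c. (ws ! c) r) = 0"
  then obtain c k where c: "k < n" "c k \<noteq> 0" "\<And>i. i < n \<Longrightarrow> (\<Sum>l<n. (ws ! l) i * c l) = 0"
    using mdet_eq_0_kernel by blast
  have "(\<Sum>l<length ws. c l * (ws ! l) i) = 0" for i
  proof (cases "i < n")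
    case False
    hence "(ws ! l) i = 0" if "l < length ws" for l using ws nth_mem[OF that] unfolding vecs_def by auto
    thus ?thesis by simp
  qed (use c(3) len in \<open>simp add: mult.commute\<close>)
  thus False using li c(1,2) len unfolding lin_indep_def by blast
qed

lemma lin_indep_mcols:
  assumes d: "mdet n X \<noteq> 0" and N: "N \<le> n"
  shows "lin_indep (map (mcol n X) [0..<N])"
  unfolding lin_indep_def
proof (intro allI impI)
  fix c assume z: "\<forall>i. (\<Sum>k<length (map (mcol n X) [0..<N]). c k * (map (mcol n X) [0..<N] ! k) i) = 0"
  define c' where "c' k = (if k < N then c k else 0)" for k
  have "mvec n X c' = (\<lambda>i. \<Sum>k<N. c k * mcol n X k i)"
    unfolding sum_mcol[symmetric] c'_def using N by (intro ext sum.mono_neutral_cong_right) auto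
  also have "\<dots> = (\<lambda>i. 0)" using z by simp
  finally have mz: "mvec n X c' = (\<lambda>i. 0)" .
  fix k assume "k < length (map (mcol n X) [0..<N])"
  hence kN: "k < N" by simp
  have "mvec n (minv n X) (mvec n X c') k = c' k"
    unfolding mvec_mmul using mvec_mident[OF minv_mmul[OF d]] kN N by simp
  thus "c k = 0" using kN N unfolding mz c'_def by (simp add: mvec_def)
qed

lemma lin_indep_length_le:
  assumes li: "lin_indep us" and sp: "set us \<subseteq> cspan ws"
  shows "length us \<le> length ws"
proof (rule ccontr)
  define p where "p = length us"
  define d where "d = length ws"
  assume "\<not> length us \<le> length ws"
  hence lt: "d < p" unfolding p_def d_def by simp
  have "\<forall>j. \<exists>c. j < p \<longrightarrow> us ! j = (\<lambda>i. \<Sum>l<d. c l * (ws ! l) i)"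
    using sp unfolding p_def d_def cspan_def by (auto dest!: nth_mem[of _ us] simp: subset_iff)
  then obtain C where C: "\<And>j. j < p \<Longrightarrow> us ! j = (\<lambda>i. \<Sum>l<d. C j l * (ws ! l) i)" by metis
  have "mdet p (\<lambda>r c. if r < d then C c r else 0) = 0"
    by (rule mdet_eq_0_rows_few_cols[of "{d}" _ "{}"]) (use lt in auto)
  then obtain x k where x: "k < p" "x k \<noteq> 0" "\<And>l. l < p \<Longrightarrow> (\<Sum>j<p. (if l < d then C j l else 0) * x j) = 0"
    using mdet_eq_0_kernel by blast
  have Cx: "(\<Sum>j<p. C j l * x j) = 0" if "l < d" for l
    using x(3)[of l] that lt by simp
  have "(\<Sum>j<p. x j * (us ! j) i) = 0" for i
  proof -
    have "(\<Sum>j<p. x j * (us ! j) i) = (\<Sum>l<d. (\<Sum>j<p. C j l * x j) * (ws ! l) i)"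
      using C by (simp add: sum_distrib_left sum_distrib_right mult_ac sum.swap[of _ "{..<p}"])
    also have "\<dots> = 0" using Cx by simp
    finally show ?thesis .
  qed
  thus False using li x(1,2) unfolding lin_indep_def p_def by blast
qed

lemma wedge_eq_lam_cha:
  assumes ws: "set ws \<subseteq> vecs n" "length ws = n" and T: "T \<subseteq> {..<n}"
  shows "wedge n (map (\<lambda>k. ws ! k) (sl T)) = (\<lambda>K. lam_cha n (\<lambda>r c. (ws ! c) r) K T)"
proof -
  have eq: "map (\<lambda>k. ws ! k) (sl T) = map (\<lambda>k i. if i < n then (ws ! k) i else 0) (sl T)"
  proof (rule map_cong[OF refl])
    fix k assume "k \<in> set (sl T)"
    hence "k < length ws" using T ws finite_subset[OF T] by auto
    hence "ws ! k \<in> vecs n" using ws(1) nth_mem by blast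
    thus "ws ! k = (\<lambda>i. if i < n then (ws ! k) i else 0)" unfolding vecs_def by auto
  qed
  show ?thesis unfolding lam_cha_def by (rule ext) (simp only: eq)
qed

section \<open>Decreasing exponents and their blocks\<close>

lemma downward_closed_eq_lessThan:
  assumes "S \<subseteq> {..<n}" "\<And>i j. i \<le> j \<Longrightarrow> j \<in> S \<Longrightarrow> i \<in> S"
  shows "S = {..<card S}"
proof (cases "S = {}")
  case False
  have fin: "finite S" using assms(1) finite_subset by blast
  define M where "M = Max S"
  have M: "M \<in> S" "\<And>x. x \<in> S \<Longrightarrow> x \<le> M" using fin False unfolding M_def by auto
  have "S = {..M}" using M assms(2) by auto
  thus ?thesis by auto
qed simp

lemma sum_exchange_lessThan:
  fixes m :: "nat \<Rightarrow> 'a::ab_group_add"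
  assumes K: "finite K" "card K = j"
  shows "card (K - {..<j}) = card ({..<j} - K)"
    and "sum m K - sum m {..<j} = sum m (K - {..<j}) - sum m ({..<j} - K)"
proof -
  show "card (K - {..<j}) = card ({..<j} - K)"
    using K by (simp add: card_Diff_subset_Int Int_commute)
  have "sum m K = sum m (K \<inter> {..<j}) + sum m (K - {..<j})"
    and "sum m {..<j} = sum m (K \<inter> {..<j}) + sum m ({..<j} - K)"
    using sum.Int_Diff[OF K(1), of m "{..<j}"] sum.Int_Diff[of "{..<j}" m K] by (simp_all add: Int_commute)
  thus "sum m K - sum m {..<j} = sum m (K - {..<j}) - sum m ({..<j} - K)" by simp
qed

text \<open>The exponents \<open>m 0 \<ge> \<dots> \<ge> m (n - 1)\<close> take the distinct values \<open>kexp 0 > \<dots> > kexp (tau - 1)\<close>;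
  the indices \<open>i\<close> with \<open>m i = kexp t\<close> form the block \<open>[blk_start t, blk_end t)\<close>.\<close>

locale decreasing_exponents =
  fixes n :: nat and m :: "nat \<Rightarrow> int"
  assumes n_pos: "0 < n"
    and m_antimono: "\<And>i j. i \<le> j \<Longrightarrow> j < n \<Longrightarrow> m j \<le> m i"
begin

definition tau :: nat where "tau = length (distinct_exps n m)"
definition kexp :: "nat \<Rightarrow> int" where "kexp t = distinct_exps n m ! t"
definition blk_start :: "nat \<Rightarrow> nat" where "blk_start t = card {i. i < n \<and> kexp t < m i}"
definition blk_size :: "nat \<Rightarrow> nat" where "blk_size t = card {i. i < n \<and> m i = kexp t}"
abbreviation blk_end :: "nat \<Rightarrow> nat" where "blk_end t \<equiv> blk_start t + blk_size t"

definition blk_adapted :: "nat \<Rightarrow> nat set \<Rightarrow> bool" where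
  "blk_adapted t K \<longleftrightarrow> {..<blk_start t} \<subseteq> K \<and> K \<subseteq> {..<blk_end t}"

lemma exps_gt_eq_lessThan: "{i. i < n \<and> k < m i} = {..<card {i. i < n \<and> k < m i}}"
  by (rule downward_closed_eq_lessThan[of _ n]) (auto dest: m_antimono intro: order.strict_trans2)

lemma exps_ge_eq_lessThan: "{i. i < n \<and> k \<le> m i} = {..<card {i. i < n \<and> k \<le> m i}}"
  by (rule downward_closed_eq_lessThan[of _ n]) (auto dest: m_antimono intro: order.trans)

lemma card_exps_ge: "card {i. i < n \<and> k \<le> m i} = card {i. i < n \<and> k < m i} + card {i. i < n \<and> m i = k}"
proof -
  have "{i. i < n \<and> k \<le> m i} = {i. i < n \<and> k < m i} \<union> {i. i < n \<and> m i = k}" by auto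
  thus ?thesis by (simp add: card_Un_disjoint disjoint_iff)
qed

lemma blk_gt: "i < n \<Longrightarrow> kexp t < m i \<longleftrightarrow> i < blk_start t"
  unfolding blk_start_def using exps_gt_eq_lessThan by blast

lemma blk_ge: "i < n \<Longrightarrow> kexp t \<le> m i \<longleftrightarrow> i < blk_end t"
  unfolding blk_start_def blk_size_def card_exps_ge[symmetric] using exps_ge_eq_lessThan by blast

lemma blk_end_le: "blk_end t \<le> n"
  unfolding blk_start_def blk_size_def card_exps_ge[symmetric]
  by (rule order.trans[OF card_mono[of "{..<n}"]]) auto

lemma blk_eq: "i < n \<Longrightarrow> m i = kexp t \<longleftrightarrow> blk_start t \<le> i \<and> i < blk_end t"
  using blk_gt[of i t] blk_ge[of i t] by auto

lemma blk_lt: "i < n \<Longrightarrow> m i < kexp t \<longleftrightarrow> blk_end t \<le> i"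
  using blk_ge[of i t] by auto

lemma kexp_strict_antimono: "s < t \<Longrightarrow> t < tau \<Longrightarrow> kexp t < kexp s"
proof -
  have "sorted_wrt (<) (sorted_list_of_set (m ` {..<n}))" by (rule strict_sorted_list_of_set)
  hence "sorted_wrt (>) (distinct_exps n m)" unfolding distinct_exps_def by (simp add: sorted_wrt_rev)
  thus "s < t \<Longrightarrow> t < tau \<Longrightarrow> kexp t < kexp s"
    unfolding kexp_def tau_def sorted_wrt_iff_nth_less by auto
qed

lemma kexp_le_iff: "s < tau \<Longrightarrow> t < tau \<Longrightarrow> kexp t \<le> kexp s \<longleftrightarrow> s \<le> t"
  using kexp_strict_antimono[of s t] kexp_strict_antimono[of t s] by (cases s t rule: linorder_cases) auto

lemma set_distinct_exps: "set (distinct_exps n m) = m ` {..<n}"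
  unfolding distinct_exps_def by simp

lemma exp_eq_kexp: "i < n \<Longrightarrow> \<exists>s<tau. m i = kexp s"
  using set_distinct_exps unfolding kexp_def tau_def by (metis imageI in_set_conv_nth lessThan_iff)

lemma tau_pos: "0 < tau"
  using set_distinct_exps n_pos unfolding tau_def by (cases "distinct_exps n m") auto

lemma blk_start_0: "blk_start 0 = 0"
proof -
  have "\<not> kexp 0 < m i" if "i < n" for i
    using exp_eq_kexp[OF that] kexp_le_iff[of 0] tau_pos by force
  thus ?thesis unfolding blk_start_def by auto
qed

lemma blk_start_Suc: assumes "Suc t < tau" shows "blk_start (Suc t) = blk_end t"
proof -
  have "{i. i < n \<and> kexp (Suc t) < m i} = {i. i < n \<and> kexp t \<le> m i}"
  proof (intro Collect_cong conj_cong refl)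
    fix i assume i: "i < n"
    obtain s where s: "s < tau" "m i = kexp s" using exp_eq_kexp[OF i] by auto
    show "kexp (Suc t) < m i \<longleftrightarrow> kexp t \<le> m i"
      unfolding s(2) using kexp_le_iff[of s t] kexp_le_iff[of s "Suc t"] kexp_strict_antimono[of t "Suc t"] s(1) assms
      by (cases "s \<le> t") (auto simp: not_le le_Suc_eq)
  qed
  thus ?thesis unfolding blk_start_def blk_size_def card_exps_ge[symmetric] by simp
qed

lemma blk_cover: assumes "j \<le> n" shows "\<exists>t<tau. blk_start t \<le> j \<and> j \<le> blk_end t"
proof (cases j)
  case 0 thus ?thesis using tau_pos blk_start_0 by auto
next
  case (Suc i)
  hence i: "i < n" using assms by auto
  obtain s where "s < tau" "m i = kexp s" using exp_eq_kexp[OF i] by auto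
  thus ?thesis using blk_eq[OF i, of s] Suc by auto
qed

text \<open>A \<open>j\<close>-set \<open>K\<close> with \<open>blk_start t \<le> j \<le> blk_end t\<close> differs from \<open>{..<j}\<close> by exchanging indices
  \<open>\<ge> j\<close>, whose exponents are \<open>\<le> kexp t\<close>, for indices \<open>< j\<close>, whose exponents are \<open>\<ge> kexp t\<close>.\<close>

lemma exchange_bounds:
  assumes t: "blk_start t \<le> j" "j \<le> blk_end t" and K: "K \<subseteq> {..<n}"
  shows "i \<in> K - {..<j} \<Longrightarrow> m i \<le> kexp t" and "i \<in> {..<j} - K \<Longrightarrow> kexp t \<le> m i"
  using blk_gt[of i t] blk_ge[of i t] t K blk_end_le[of t] by fastforce+

lemma sum_exps_le:
  assumes t: "blk_start t \<le> j" "j \<le> blk_end t" and K: "K \<subseteq> {..<n}" "card K = j"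
  shows "(\<Sum>i\<in>K. m i) \<le> (\<Sum>i<j. m i)"
proof -
  have fK: "finite K" using K finite_subset by blast
  have "sum m (K - {..<j}) \<le> of_nat (card (K - {..<j})) * kexp t"
    using sum_bounded_above[of "K - {..<j}" m "kexp t"] exchange_bounds(1)[OF t K(1)] by simp
  moreover have "of_nat (card ({..<j} - K)) * kexp t \<le> sum m ({..<j} - K)"
    using sum_bounded_below[of "{..<j} - K" "kexp t" m] exchange_bounds(2)[OF t K(1)] by simp
  ultimately show ?thesis
    using sum_exchange_lessThan(1)[OF fK K(2)] sum_exchange_lessThan(2)[OF fK K(2), of m] by simp
qed

lemma sum_exps_eq_iff:
  assumes t: "blk_start t \<le> j" "j \<le> blk_end t" and K: "K \<subseteq> {..<n}" "card K = j"
  shows "(\<Sum>i\<in>K. m i) = (\<Sum>i<j. m i) \<longleftrightarrow> blk_adapted t K"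
proof -
  let ?X = "K - {..<j}" and ?Y = "{..<j} - K" and ?k = "kexp t"
  have fK: "finite K" using K finite_subset by blast
  note ex = sum_exchange_lessThan(1)[OF fK K(2)] sum_exchange_lessThan(2)[OF fK K(2), of m] and bd = exchange_bounds[OF t K(1)]
  have "(\<Sum>i\<in>K. m i) = (\<Sum>i<j. m i) \<longleftrightarrow> (\<forall>i\<in>?X. m i = ?k) \<and> (\<forall>i\<in>?Y. m i = ?k)"
  proof
    assume "(\<Sum>i\<in>K. m i) = (\<Sum>i<j. m i)"
    hence eq: "sum m ?X = sum m ?Y" using ex by simp
    have X: "sum m ?X \<le> of_nat (card ?X) * ?k" using sum_bounded_above[of ?X m ?k] bd(1) by simp
    have Y: "of_nat (card ?Y) * ?k \<le> sum m ?Y" using sum_bounded_below[of ?Y ?k m] bd(2) by simp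
    have "(\<Sum>i\<in>?X. ?k - m i) = 0" using eq X Y ex(1) by (simp add: sum_subtractf)
    hence "\<forall>i\<in>?X. ?k - m i = 0" using bd(1) fK by (subst (asm) sum_nonneg_eq_0_iff) auto
    moreover have "(\<Sum>i\<in>?Y. m i - ?k) = 0" using eq X Y ex(1) by (simp add: sum_subtractf)
    hence "\<forall>i\<in>?Y. m i - ?k = 0" using bd(2) by (subst (asm) sum_nonneg_eq_0_iff) auto
    ultimately show "(\<forall>i\<in>?X. m i = ?k) \<and> (\<forall>i\<in>?Y. m i = ?k)" by auto
  next
    assume "(\<forall>i\<in>?X. m i = ?k) \<and> (\<forall>i\<in>?Y. m i = ?k)"
    thus "(\<Sum>i\<in>K. m i) = (\<Sum>i<j. m i)" using ex by simp
  qed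
  also have "\<dots> \<longleftrightarrow> blk_adapted t K"
  proof
    assume XY: "(\<forall>i\<in>?X. m i = ?k) \<and> (\<forall>i\<in>?Y. m i = ?k)"
    show "blk_adapted t K" unfolding blk_adapted_def
    proof (intro conjI subsetI)
      fix i assume "i \<in> {..<blk_start t}"
      hence "i < j" "m i \<noteq> ?k" using t blk_end_le[of t] blk_eq[of i t] by auto
      thus "i \<in> K" using XY by auto
    next
      fix i assume i: "i \<in> K"
      show "i \<in> {..<blk_end t}"
      proof (cases "i < j")
        case False thus ?thesis using XY i K blk_eq[of i t] by auto
      qed (use t in auto)
    qed
  next
    assume "blk_adapted t K"
    hence "{..<blk_start t} \<subseteq> K" "K \<subseteq> {..<blk_end t}" unfolding blk_adapted_def by auto
    thus "(\<forall>i\<in>?X. m i = ?k) \<and> (\<forall>i\<in>?Y. m i = ?k)"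
      using blk_eq t K blk_end_le[of t] by (auto simp: subset_iff not_less)
  qed
  finally show ?thesis .
qed

lemma sum_exps_le_top: "j \<le> n \<Longrightarrow> K \<subseteq> {..<n} \<Longrightarrow> card K = j \<Longrightarrow> (\<Sum>i\<in>K. m i) \<le> (\<Sum>i<j. m i)"
  using blk_cover sum_exps_le by blast

end

section \<open>The limit of the compound matrices\<close>

lemma prod_power_int: "finite K \<Longrightarrow> (z::complex) \<noteq> 0 \<Longrightarrow> (\<Prod>i\<in>K. z powi f i) = z powi (\<Sum>i\<in>K. f i)"
  by (induction K rule: finite_induct) (auto simp: power_int_add)

lemma tendsto_power_int_0:
  assumes "(e::int) \<ge> 0"
  shows "((\<lambda>z::complex. z powi e) \<longlongrightarrow> (if e = 0 then 1 else 0)) (at 0)"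
proof -
  have "((\<lambda>z::complex. z ^ nat e) \<longlongrightarrow> 0 ^ nat e) (at 0)"
    by (intro tendsto_power tendsto_ident_at)
  moreover have "(\<lambda>z::complex. z powi e) = (\<lambda>z. z ^ nat e)" using assms by (auto simp: power_int_def)
  moreover have "(0::complex) ^ nat e = (if e = 0 then 1 else 0)" using assms by auto
  ultimately show ?thesis by simp
qed

locale factored_family = decreasing_exponents +
  fixes \<gamma> :: "complex \<Rightarrow> cmat" and r :: real and a b :: "complex \<Rightarrow> cmat"
  assumes r_pos: "0 < r"
    and holo_a: "\<And>i j. i < n \<Longrightarrow> j < n \<Longrightarrow> (\<lambda>z. a z i j) holomorphic_on ball 0 r"
    and holo_b: "\<And>i j. i < n \<Longrightarrow> j < n \<Longrightarrow> (\<lambda>z. b z i j) holomorphic_on ball 0 r"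
    and det_a: "mdet n (a 0) \<noteq> 0" and det_b: "mdet n (b 0) \<noteq> 0"
    and factorization: "\<And>z i k. 0 < norm z \<Longrightarrow> norm z < r \<Longrightarrow> i < n \<Longrightarrow> k < n \<Longrightarrow>
       \<gamma> z i k = (\<Sum>l<n. a z i l * z powi (- m l) * b z l k)"
begin

lemma holomorphic_tendsto_0:
  assumes "f holomorphic_on ball 0 r" shows "(f \<longlongrightarrow> f 0) (at 0)"
  using holomorphic_on_imp_continuous_on[OF assms] r_pos
  by (simp add: continuous_on_eq_continuous_at isCont_def)

lemma tendsto_a: "i < n \<Longrightarrow> j < n \<Longrightarrow> ((\<lambda>z. a z i j) \<longlongrightarrow> a 0 i j) (at 0)"
  using holomorphic_tendsto_0[OF holo_a] .

lemma tendsto_b: "i < n \<Longrightarrow> j < n \<Longrightarrow> ((\<lambda>z. b z i j) \<longlongrightarrow> b 0 i j) (at 0)"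
  using holomorphic_tendsto_0[OF holo_b] .

lemma tendsto_minv_a: "((\<lambda>z. minv n (a z) i j) \<longlongrightarrow> minv n (a 0) i j) (at 0)"
  by (rule tendsto_minv[OF tendsto_a det_a])

lemma tendsto_minv_b: "((\<lambda>z. minv n (b z) i j) \<longlongrightarrow> minv n (b 0) i j) (at 0)"
  by (rule tendsto_minv[OF tendsto_b det_b])

lemma eventually_punctured_disc: "eventually (\<lambda>z. 0 < norm z \<and> norm z < r) (at (0::complex))"
  unfolding eventually_at using r_pos by (intro exI[of _ r]) auto

lemma eventually_det_a: "eventually (\<lambda>z. mdet n (a z) \<noteq> 0) (at 0)"
  by (rule tendsto_imp_eventually_ne[OF tendsto_mdet[OF tendsto_a] det_a])

lemma eventually_det_b: "eventually (\<lambda>z. mdet n (b z) \<noteq> 0) (at 0)"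
  by (rule tendsto_imp_eventually_ne[OF tendsto_mdet[OF tendsto_b] det_b])

lemma lam_cha_gamma:
  assumes z: "0 < norm z" "norm z < r" and I: "I \<subseteq> {..<n}" and J: "J \<subseteq> {..<n}"
  shows "lam_cha n (\<gamma> z) I J =
    (\<Sum>K\<in>Pow {..<n}. lam_cha n (a z) I K * ((\<Prod>i\<in>K. z powi (- m i)) * lam_cha n (b z) K J))"
proof -
  have "lam_cha n (\<gamma> z) I J = lam_cha n (mmul n (a z) (\<lambda>l k. z powi (- m l) * b z l k)) I J"
    by (rule lam_cha_cong[OF _ I J]) (simp add: factorization[OF z] mmul_def mult.assoc)
  thus ?thesis by (simp add: lam_cha_mmul[OF I J] lam_cha_scale_rows[OF _ J])
qed

text \<open>In degree \<open>j\<close>, the summand of \<open>K\<close> in \<open>lam_cha_gamma\<close> has order \<open>-(\<Sum>i\<in>K. m i) \<ge> -(\<Sum>i<j. m i)\<close>,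
  so after scaling by \<open>z powi (\<Sum>i<j. m i)\<close> only the sets \<open>K\<close> of maximal exponent sum survive.\<close>

definition limit_lam :: "nat \<Rightarrow> nat set \<Rightarrow> nat set \<Rightarrow> complex" where
  "limit_lam j I J = (\<Sum>K\<in>Pow {..<n}.
     lam_cha n (a 0) I K * (if card K = j \<and> sum m K = (\<Sum>i<j. m i) then 1 else 0) * lam_cha n (b 0) K J)"

lemma tendsto_scaled_summand:
  assumes j: "j \<le> n" and I: "I \<in> ksub n j" and J: "J \<subseteq> {..<n}" and K: "K \<subseteq> {..<n}" "card K = j"
  shows "((\<lambda>z. lam_cha n (a z) I K * ((z powi (\<Sum>i<j. m i) * (\<Prod>i\<in>K. z powi (- m i))) * lam_cha n (b z) K J))
    \<longlongrightarrow> lam_cha n (a 0) I K * (if sum m K = (\<Sum>i<j. m i) then 1 else 0) * lam_cha n (b 0) K J) (at 0)"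
proof -
  define e where "e = (\<Sum>i<j. m i) - sum m K"
  have e0: "e \<ge> 0" unfolding e_def using sum_exps_le_top[OF j K] by simp
  have lim: "((\<lambda>z. lam_cha n (a z) I K * (z powi e * lam_cha n (b z) K J)) \<longlongrightarrow>
      lam_cha n (a 0) I K * ((if e = 0 then 1 else 0) * lam_cha n (b 0) K J)) (at 0)"
    using I K unfolding ksub_def
    by (intro tendsto_mult tendsto_lam_cha[OF tendsto_a] tendsto_lam_cha[OF tendsto_b K(1) J] tendsto_power_int_0[OF e0]) auto
  have "eventually (\<lambda>z::complex. z powi e = z powi (\<Sum>i<j. m i) * (\<Prod>i\<in>K. z powi (- m i))) (at 0)"
  proof (rule eventually_mono[OF eventually_punctured_disc])
    fix z :: complex assume "0 < norm z \<and> norm z < r"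
    hence z0: "z \<noteq> 0" by auto
    have "z powi (\<Sum>i<j. m i) * (\<Prod>i\<in>K. z powi (- m i)) = z powi e"
      unfolding prod_power_int[OF finite_subset[OF K(1) finite_lessThan] z0] e_def using z0
      by (simp add: power_int_add[symmetric] sum_negf)
    thus "z powi e = z powi (\<Sum>i<j. m i) * (\<Prod>i\<in>K. z powi (- m i))" by simp
  qed
  hence "eventually (\<lambda>z. lam_cha n (a z) I K * (z powi e * lam_cha n (b z) K J) =
      lam_cha n (a z) I K * ((z powi (\<Sum>i<j. m i) * (\<Prod>i\<in>K. z powi (- m i))) * lam_cha n (b z) K J)) (at 0)"
    by (rule eventually_mono) simp
  from Lim_transform_eventually[OF lim this] show ?thesis
    unfolding e_def by (auto simp: mult.assoc)
qed

theorem tendsto_scaled_lam_cha: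
  assumes j: "j \<le> n" and I: "I \<in> ksub n j" and J: "J \<in> ksub n j"
  shows "((\<lambda>z. z powi (\<Sum>i<j. m i) * lam_cha n (\<gamma> z) I J) \<longlongrightarrow> limit_lam j I J) (at 0)"
proof -
  have I': "I \<subseteq> {..<n}" "card I = j" and J': "J \<subseteq> {..<n}" using I J unfolding ksub_def by auto
  define g where "g z K = lam_cha n (a z) I K * ((z powi (\<Sum>i<j. m i) * (\<Prod>i\<in>K. z powi (- m i))) * lam_cha n (b z) K J)" for z K
  have "((\<lambda>z. \<Sum>K\<in>Pow {..<n}. g z K) \<longlongrightarrow> limit_lam j I J) (at 0)"
    unfolding limit_lam_def
  proof (rule tendsto_sum)
    fix K assume "K \<in> Pow {..<n}"
    hence K: "K \<subseteq> {..<n}" by auto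
    show "((\<lambda>z. g z K) \<longlongrightarrow> lam_cha n (a 0) I K * (if card K = j \<and> sum m K = (\<Sum>i<j. m i) then 1 else 0) * lam_cha n (b 0) K J) (at 0)"
    proof (cases "card K = j")
      case True
      thus ?thesis unfolding g_def using tendsto_scaled_summand[OF j I J' K] by simp
    qed (simp add: g_def lam_cha_card_neq I' K)
  qed
  moreover have "eventually (\<lambda>z. (\<Sum>K\<in>Pow {..<n}. g z K) = z powi (\<Sum>i<j. m i) * lam_cha n (\<gamma> z) I J) (at 0)"
    by (rule eventually_mono[OF eventually_punctured_disc])
      (simp add: lam_cha_gamma I'(1) J' g_def sum_distrib_left mult_ac)
  ultimately show ?thesis by (rule Lim_transform_eventually)
qed

end

context factored_family
begin

definition hinge_lam :: "nat \<Rightarrow> nat set \<Rightarrow> nat set \<Rightarrow> complex" where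
  "hinge_lam t I J = (\<Sum>K\<in>Pow {..<n}. lam_cha n (a 0) I K * (if blk_adapted t K then 1 else 0) * lam_cha n (b 0) K J)"

lemma hinge_lam_cong_degree:
  assumes I: "I \<in> ksub n j" and eq: "\<And>K. K \<subseteq> {..<n} \<Longrightarrow> card K = j \<Longrightarrow> P K = Q K"
  shows "(\<Sum>K\<in>Pow {..<n}. lam_cha n (a 0) I K * (if P K then 1 else 0) * lam_cha n (b 0) K J) =
         (\<Sum>K\<in>Pow {..<n}. lam_cha n (a 0) I K * (if Q K then 1 else 0) * lam_cha n (b 0) K J)"
proof (intro sum.cong refl)
  fix K assume "K \<in> Pow {..<n}"
  thus "lam_cha n (a 0) I K * (if P K then 1 else 0) * lam_cha n (b 0) K J =
        lam_cha n (a 0) I K * (if Q K then 1 else 0) * lam_cha n (b 0) K J"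
    using eq[of K] I unfolding ksub_def by (cases "card K = j") (auto simp: lam_cha_card_neq)
qed

lemma limit_lam_eq_hinge_lam:
  assumes t: "blk_start t \<le> j" "j \<le> blk_end t" and I: "I \<in> ksub n j"
  shows "limit_lam j I J = hinge_lam t I J"
  unfolding limit_lam_def hinge_lam_def
  by (rule hinge_lam_cong_degree[OF I]) (use sum_exps_eq_iff[OF t] in auto)

lemma hinge_lam_nonzero:
  assumes t: "blk_start t \<le> j" "j \<le> blk_end t"
  shows "\<exists>I\<in>ksub n j. \<exists>J\<in>ksub n j. hinge_lam t I J \<noteq> 0"
  unfolding hinge_lam_def
proof (rule lam_cha_sandwich_nonzero[OF det_a det_b, of "{..<j}"])
  show "{..<j} \<subseteq> {..<n}" using t blk_end_le[of t] by auto
  show "(if blk_adapted t {..<j} then 1 else 0) \<noteq> (0::complex)" using t unfolding blk_adapted_def by auto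
qed simp

lemma hinge_lam_degree:
  assumes "\<exists>I\<in>ksub n j. \<exists>J\<in>ksub n j. hinge_lam t I J \<noteq> 0"
  shows "blk_start t \<le> j \<and> j \<le> blk_end t"
proof (rule ccontr)
  assume nt: "\<not> (blk_start t \<le> j \<and> j \<le> blk_end t)"
  obtain I J where I: "I \<in> ksub n j" and nz: "hinge_lam t I J \<noteq> 0" using assms by auto
  have "hinge_lam t I J = (\<Sum>K\<in>Pow {..<n}. lam_cha n (a 0) I K * (if False then 1 else 0) * lam_cha n (b 0) K J)"
    unfolding hinge_lam_def
  proof (rule hinge_lam_cong_degree[OF I])
    fix K assume K: "K \<subseteq> {..<n}" "card K = j"
    show "blk_adapted t K = False"
    proof
      assume E: "blk_adapted t K"
      have "card {..<blk_start t} \<le> card K"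
        using E finite_subset[OF K(1)] unfolding blk_adapted_def by (intro card_mono) auto
      moreover have "card K \<le> card {..<blk_end t}" using E unfolding blk_adapted_def by (intro card_mono) auto
      ultimately show False using nt K(2) by simp
    qed simp
  qed
  thus False using nz by simp
qed

lemma limit_lam_nonzero:
  assumes "j \<le> n"
  shows "\<exists>I\<in>ksub n j. \<exists>J\<in>ksub n j. limit_lam j I J \<noteq> 0"
proof -
  obtain t where t: "blk_start t \<le> j" "j \<le> blk_end t" using blk_cover[OF assms] by auto
  thus ?thesis using hinge_lam_nonzero[OF t] limit_lam_eq_hinge_lam[OF t] by metis
qed

lemma blk_adapted_Suc:
  assumes st: "Suc t < tau" and K: "K \<subseteq> {..<n}" "card K = blk_end t"
  shows "blk_adapted (Suc t) K = blk_adapted t K"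
proof -
  have fK: "finite K" using K finite_subset by auto
  have "blk_adapted t K \<longleftrightarrow> K = {..<blk_end t}"
  proof
    assume "blk_adapted t K" hence "K \<subseteq> {..<blk_end t}" unfolding blk_adapted_def by auto
    thus "K = {..<blk_end t}" using K fK by (intro card_subset_eq) auto
  qed (auto simp: blk_adapted_def)
  moreover have "blk_adapted (Suc t) K \<longleftrightarrow> K = {..<blk_end t}"
  proof
    assume "blk_adapted (Suc t) K" hence "{..<blk_end t} \<subseteq> K" unfolding blk_adapted_def blk_start_Suc[OF st] by auto
    thus "K = {..<blk_end t}" using K fK by (metis card_lessThan card_subset_eq finite_lessThan)
  qed (auto simp: blk_adapted_def blk_start_Suc[OF st])
  ultimately show ?thesis by simp
qed

lemma hinge_lam_Suc:
  assumes "Suc t < tau" "I \<in> ksub n (blk_end t)"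
  shows "hinge_lam (Suc t) I J = hinge_lam t I J"
  unfolding hinge_lam_def by (rule hinge_lam_cong_degree[OF assms(2)]) (use blk_adapted_Suc[OF assms(1)] in auto)

end

section \<open>The hinge\<close>

definition graph_basis :: "nat \<Rightarrow> cmat \<Rightarrow> cvec list" where
  "graph_basis n A = map (\<lambda>l. join n (mcol n mident l) (mvec n A (mcol n mident l))) [0..<n]"

lemma graph_eq_cspan_basis: "graph n A = cspan (graph_basis n A)"
  unfolding graph_basis_def by (rule graph_cspan)

lemma graph_basis_vecs: "set (graph_basis n A) \<subseteq> vecs (2 * n)"
  unfolding graph_basis_def by (auto intro!: join_vecs mcol_vecs mvec_vecs)

lemma limits_of_power_scaled:
  assumes ev: "eventually (\<lambda>z. f z = z powi e * g z) (at (0::complex))"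
    and f: "(f \<longlongrightarrow> \<alpha>) (at 0)" and g: "(g \<longlongrightarrow> \<beta>) (at 0)"
  shows "0 < e \<Longrightarrow> \<alpha> = 0" and "e = 0 \<Longrightarrow> \<alpha> = \<beta>" and "e < 0 \<Longrightarrow> \<beta> = 0"
proof -
  have ev': "eventually (\<lambda>z. z powi e * g z = f z) (at 0)" using ev by (rule eventually_mono) simp
  show "0 < e \<Longrightarrow> \<alpha> = 0"
  proof -
    assume e: "0 < e"
    have "((\<lambda>z. z powi e * g z) \<longlongrightarrow> 0 * \<beta>) (at 0)"
      using tendsto_mult[OF tendsto_power_int_0[of e] g] e by simp
    from Lim_transform_eventually[OF this ev'] show "\<alpha> = 0" using f tendsto_unique[OF at_neq_bot] by simp
  qed
  show "e = 0 \<Longrightarrow> \<alpha> = \<beta>"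
  proof -
    assume "e = 0"
    hence "eventually (\<lambda>z. g z = f z) (at 0)" using ev' by simp
    from Lim_transform_eventually[OF g this] show "\<alpha> = \<beta>" using f tendsto_unique[OF at_neq_bot] by metis
  qed
  show "e < 0 \<Longrightarrow> \<beta> = 0"
  proof -
    assume e: "e < 0"
    have "eventually (\<lambda>z. z powi (- e) * f z = g z) (at (0::complex))"
      using ev eventually_neq_at_within[of 0 0 UNIV]
      by eventually_elim (simp add: power_int_minus mult.assoc[symmetric])
    moreover have "((\<lambda>z. z powi (- e) * f z) \<longlongrightarrow> 0 * \<alpha>) (at 0)"
      using tendsto_mult[OF tendsto_power_int_0[of "- e"] f] e by simp
    ultimately have "(g \<longlongrightarrow> 0) (at 0)" using Lim_transform_eventually by fastforce
    thus "\<beta> = 0" using g tendsto_unique[OF at_neq_bot] by blast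
  qed
qed

context factored_family
begin

abbreviation "a0i \<equiv> minv n (a 0)"
abbreviation "b0i \<equiv> minv n (b 0)"

lemma b0_b0i: "i < n \<Longrightarrow> j < n \<Longrightarrow> mmul n (b 0) b0i i j = mident i j" by (rule mmul_minv[OF det_b])
lemma b0i_b0: "i < n \<Longrightarrow> j < n \<Longrightarrow> mmul n b0i (b 0) i j = mident i j" by (rule minv_mmul[OF det_b])
lemma a0_a0i: "i < n \<Longrightarrow> j < n \<Longrightarrow> mmul n (a 0) a0i i j = mident i j" by (rule mmul_minv[OF det_a])
lemma a0i_a0: "i < n \<Longrightarrow> j < n \<Longrightarrow> mmul n a0i (a 0) i j = mident i j" by (rule minv_mmul[OF det_a])

text \<open>The limit \<open>P\<^sub>t\<close> of the graphs of \<open>z\<^bsup>k\<^sub>t\<^esup> \<gamma>(z)\<close>: it is spanned by the vectors \<open>b(0)\<^sup>-\<^sup>1 e\<^sub>i \<oplus> a(0) e\<^sub>i\<close>,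
  where the first (second) summand is dropped when \<open>m\<^sub>i > k\<^sub>t\<close> (\<open>m\<^sub>i < k\<^sub>t\<close>).\<close>

definition hinge_vec :: "nat \<Rightarrow> nat \<Rightarrow> cvec" where
  "hinge_vec t i = join n (if m i \<le> kexp t then mcol n b0i i else (\<lambda>_. 0)) (if kexp t \<le> m i then mcol n (a 0) i else (\<lambda>_. 0))"

definition hinge_space :: "nat \<Rightarrow> cvec set" where
  "hinge_space t = cspan (map (hinge_vec t) [0..<n])"

definition hinge_cond :: "nat \<Rightarrow> cvec \<Rightarrow> cvec \<Rightarrow> bool" where
  "hinge_cond t v w \<longleftrightarrow> (\<forall>i<n. (kexp t < m i \<longrightarrow> mvec n (b 0) v i = 0) \<and>
    (m i = kexp t \<longrightarrow> mvec n (b 0) v i = mvec n a0i w i) \<and> (m i < kexp t \<longrightarrow> mvec n a0i w i = 0))"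

lemma hinge_vec_vecs: "hinge_vec t i \<in> vecs (2 * n)"
  unfolding hinge_vec_def by (intro join_vecs) (auto simp: mcol_vecs zero_vecs)

lemma hinge_space_imp_cond:
  assumes "x \<in> hinge_space t"
  shows "\<exists>v w. v \<in> vecs n \<and> w \<in> vecs n \<and> x = join n v w \<and> hinge_cond t v w"
proof -
  obtain c where x: "x = (\<lambda>i. \<Sum>k<n. c k * hinge_vec t k i)" using assms unfolding hinge_space_def cspan_map_upt by auto
  define c1 where "c1 k = (if m k \<le> kexp t then c k else 0)" for k
  define c2 where "c2 k = (if kexp t \<le> m k then c k else 0)" for k
  define V where "V = mvec n b0i c1"
  define W where "W = mvec n (a 0) c2"
  have "x = join n (\<lambda>i. \<Sum>k<n. c k * (if m k \<le> kexp t then mcol n b0i k else (\<lambda>_. 0)) i) (\<lambda>i. \<Sum>k<n. c k * (if kexp t \<le> m k then mcol n (a 0) k else (\<lambda>_. 0)) i)"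
    unfolding x join_sum hinge_vec_def ..
  also have "(\<lambda>i. \<Sum>k<n. c k * (if m k \<le> kexp t then mcol n b0i k else (\<lambda>_. 0)) i) = V"
    unfolding V_def sum_mcol[symmetric] c1_def by (auto intro!: sum.cong)
  also have "(\<lambda>i. \<Sum>k<n. c k * (if kexp t \<le> m k then mcol n (a 0) k else (\<lambda>_. 0)) i) = W"
    unfolding W_def sum_mcol[symmetric] c2_def by (auto intro!: sum.cong)
  finally have xj: "x = join n V W" .
  have bV: "mvec n (b 0) V i = c1 i" if "i < n" for i
    unfolding V_def mvec_mmul using mvec_mident[OF b0_b0i that] by simp
  have aW: "mvec n a0i W i = c2 i" if "i < n" for i
    unfolding W_def mvec_mmul using mvec_mident[OF a0i_a0 that] by simp
  have "hinge_cond t V W" unfolding hinge_cond_def using bV aW by (auto simp: c1_def c2_def)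
  moreover have "V \<in> vecs n" "W \<in> vecs n" unfolding V_def W_def by (auto simp: mvec_vecs)
  ultimately show ?thesis using xj by blast
qed

lemma hinge_cond_imp_space:
  assumes v: "v \<in> vecs n" and w: "w \<in> vecs n" and P: "hinge_cond t v w"
  shows "join n v w \<in> hinge_space t"
proof -
  define x' where "x' = mvec n (b 0) v"
  define y' where "y' = mvec n a0i w"
  define c where "c k = (if m k \<le> kexp t then x' k else y' k)" for k
  have V: "(\<lambda>i. \<Sum>k<n. c k * (if m k \<le> kexp t then mcol n b0i k else (\<lambda>_. 0)) i) = v"
  proof -
    have "(\<lambda>i. \<Sum>k<n. c k * (if m k \<le> kexp t then mcol n b0i k else (\<lambda>_. 0)) i) = (\<lambda>i. \<Sum>k<n. x' k * mcol n b0i k i)"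
    proof (intro ext sum.cong refl)
      fix i k assume k: "k \<in> {..<n}"
      show "c k * (if m k \<le> kexp t then mcol n b0i k else (\<lambda>_. 0)) i = x' k * mcol n b0i k i"
        using P k unfolding c_def hinge_cond_def x'_def by (cases "m k \<le> kexp t") auto
    qed
    also have "\<dots> = mvec n b0i (mvec n (b 0) v)" unfolding sum_mcol x'_def ..
    also have "\<dots> = v" unfolding mvec_mmul by (rule mvec_mident_vecs[OF b0i_b0 v])
    finally show ?thesis .
  qed
  have W: "(\<lambda>i. \<Sum>k<n. c k * (if kexp t \<le> m k then mcol n (a 0) k else (\<lambda>_. 0)) i) = w"
  proof -
    have "(\<lambda>i. \<Sum>k<n. c k * (if kexp t \<le> m k then mcol n (a 0) k else (\<lambda>_. 0)) i) = (\<lambda>i. \<Sum>k<n. y' k * mcol n (a 0) k i)"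
    proof (intro ext sum.cong refl)
      fix i k assume k: "k \<in> {..<n}"
      show "c k * (if kexp t \<le> m k then mcol n (a 0) k else (\<lambda>_. 0)) i = y' k * mcol n (a 0) k i"
        using P k unfolding c_def hinge_cond_def x'_def y'_def
        by (cases "m k < kexp t"; cases "m k = kexp t") auto
    qed
    also have "\<dots> = mvec n (a 0) (mvec n a0i w)" unfolding sum_mcol y'_def ..
    also have "\<dots> = w" unfolding mvec_mmul by (rule mvec_mident_vecs[OF a0_a0i w])
    finally show ?thesis .
  qed
  have "join n v w = (\<lambda>i. \<Sum>k<n. c k * hinge_vec t k i)"
    unfolding hinge_vec_def join_sum[symmetric] V W ..
  thus ?thesis unfolding hinge_space_def cspan_map_upt by blast
qed

lemma hinge_space_join_iff:
  assumes "v \<in> vecs n" "w \<in> vecs n"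
  shows "join n v w \<in> hinge_space t \<longleftrightarrow> hinge_cond t v w"
  using hinge_cond_imp_space[OF assms] hinge_space_imp_cond[of "join n v w" t] join_inj assms by metis

end

context factored_family
begin

lemma mvec_gamma_minv_b_col:
  assumes z: "0 < norm z" "norm z < r" and d: "mdet n (b z) \<noteq> 0" and i: "i < n"
  shows "mvec n (\<gamma> z) (mcol n (minv n (b z)) i) = (\<lambda>l. z powi (- m i) * mcol n (a z) i l)"
proof
  fix l show "mvec n (\<gamma> z) (mcol n (minv n (b z)) i) l = z powi (- m i) * mcol n (a z) i l"
  proof (cases "l < n")
    case True
    have "mvec n (\<gamma> z) (mcol n (minv n (b z)) i) l = (\<Sum>q<n. (\<Sum>s<n. (a z l s * z powi (- m s)) * b z s q) * minv n (b z) q i)"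
      unfolding mvec_def mcol_def using True factorization[OF z True] by (auto intro!: sum.cong)
    also have "\<dots> = (\<Sum>s<n. (a z l s * z powi (- m s)) * (\<Sum>q<n. b z s q * minv n (b z) q i))"
      by (rule sum_mult_sum_swap[symmetric])
    also have "\<dots> = (\<Sum>s<n. (a z l s * z powi (- m s)) * mident s i)"
      using mmul_minv[OF d _ i] by (intro sum.cong refl) (simp add: mmul_def)
    also have "\<dots> = a z l i * z powi (- m i)" by (rule sum_mult_mident[OF i])
    finally show ?thesis using True by (simp add: mcol_def mult.commute)
  next
    case False thus ?thesis by (simp add: mvec_def mcol_def)
  qed
qed

lemma mvec_minv_a_gamma:
  assumes z: "0 < norm z" "norm z < r" and d: "mdet n (a z) \<noteq> 0" and p: "p < n"
  shows "mvec n (minv n (a z)) (mvec n (\<gamma> z) V) p = z powi (- m p) * mvec n (b z) V p"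
proof -
  have "mvec n (minv n (a z)) (mvec n (\<gamma> z) V) p = (\<Sum>l<n. minv n (a z) p l * (\<Sum>q<n. (\<Sum>s<n. a z l s * (z powi (- m s) * b z s q)) * V q))"
  proof -
    have g: "\<forall>l<n. \<forall>q<n. \<gamma> z l q = (\<Sum>s<n. a z l s * (z powi (- m s) * b z s q))"
      using factorization[OF z] by (auto simp: mult.assoc)
    have inner: "mvec n (\<gamma> z) V l = (\<Sum>q<n. (\<Sum>s<n. a z l s * (z powi (- m s) * b z s q)) * V q)" if "l < n" for l
      using that by (simp add: mvec_def g)
    have outer: "mvec n X u p = (\<Sum>l<n. X p l * u l)" for X u using p by (simp add: mvec_def)
    show ?thesis unfolding outer[of "minv n (a z)"] by (intro sum.cong refl) (simp add: inner)
  qed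
  also have "\<dots> = (\<Sum>l<n. minv n (a z) p l * (\<Sum>s<n. a z l s * (\<Sum>q<n. z powi (- m s) * b z s q * V q)))"
  proof -
    have ie: "(\<Sum>q<n. (\<Sum>s<n. a z l s * (z powi (- m s) * b z s q)) * V q) = (\<Sum>s<n. a z l s * (\<Sum>q<n. z powi (- m s) * b z s q * V q))" for l
      using sum_mult_sum_swap[where X="a z l" and Y="\<lambda>s q. z powi (- m s) * b z s q" and Z=V] by simp
    show ?thesis by (simp only: ie)
  qed
  also have "\<dots> = (\<Sum>s<n. (\<Sum>l<n. minv n (a z) p l * a z l s) * (\<Sum>q<n. z powi (- m s) * b z s q * V q))"
    by (rule sum_mult_sum_swap)
  also have "\<dots> = (\<Sum>s<n. mident p s * (\<Sum>q<n. z powi (- m s) * b z s q * V q))"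
    using minv_mmul[OF d p] by (intro sum.cong refl) (simp add: mmul_def)
  also have "\<dots> = (\<Sum>q<n. z powi (- m p) * b z p q * V q)" by (rule sum_mident_mult[OF p])
  also have "\<dots> = z powi (- m p) * mvec n (b z) V p" unfolding mvec_def using p
    by (simp add: sum_distrib_left mult_ac)
  finally show ?thesis .
qed

lemma hinge_cond_of_limit:
  assumes VW: "\<And>z. W z = mvec n (\<lambda>i k. z powi kexp t * \<gamma> z i k) (V z)"
    and V: "\<And>k. k < n \<Longrightarrow> ((\<lambda>z. V z k) \<longlongrightarrow> v k) (at 0)"
    and W: "\<And>k. k < n \<Longrightarrow> ((\<lambda>z. W z k) \<longlongrightarrow> w k) (at 0)"
  shows "hinge_cond t v w"
  unfolding hinge_cond_def
proof (intro allI impI conjI)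
  fix p assume p: "p < n"
  define BV where "BV z = mvec n (b z) (V z) p" for z
  define AW where "AW z = mvec n (minv n (a z)) (W z) p" for z
  have BV: "(BV \<longlongrightarrow> mvec n (b 0) v p) (at 0)" unfolding BV_def
    by (rule tendsto_mvec) (auto intro: tendsto_b V)
  have AW: "(AW \<longlongrightarrow> mvec n a0i w p) (at 0)" unfolding AW_def
    by (rule tendsto_mvec) (auto intro: tendsto_minv_a W)
  have "eventually (\<lambda>z. AW z = z powi (kexp t - m p) * BV z) (at 0)"
    using eventually_punctured_disc eventually_det_a
  proof eventually_elim
    case (elim z)
    hence "AW z = z powi kexp t * (z powi (- m p) * BV z)"
      unfolding AW_def BV_def VW mvec_scale_mat mvec_scale using mvec_minv_a_gamma p by simp
    thus ?case using elim by (simp add: power_int_diff power_int_minus mult.assoc field_simps)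
  qed
  note lims = limits_of_power_scaled[OF this AW BV]
  show "kexp t < m p \<Longrightarrow> mvec n (b 0) v p = 0" using lims(3) by simp
  show "m p = kexp t \<Longrightarrow> mvec n (b 0) v p = mvec n a0i w p" using lims(2) by simp
  show "m p < kexp t \<Longrightarrow> mvec n a0i w p = 0" using lims(1) by simp
qed

lemma hinge_limit_subset:
  assumes ws: "set ws \<subseteq> vecs (2 * n)"
    and G: "grass_tendsto (2 * n) (\<lambda>z. graph n (\<lambda>i k. z powi kexp t * \<gamma> z i k)) (cspan ws) (at 0)"
  shows "cspan ws \<subseteq> hinge_space t"
proof
  define A where "A z = (\<lambda>i k. z powi kexp t * \<gamma> z i k)" for z
  fix y assume y: "y \<in> cspan ws"
  have G': "grass_tendsto (2 * n) (\<lambda>z. cspan (graph_basis n (A z))) (cspan ws) (at 0)"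
    using G unfolding A_def graph_eq_cspan_basis .
  obtain x where x: "\<And>z. x z \<in> cspan (graph_basis n (A z))" "\<And>k. k < 2 * n \<Longrightarrow> ((\<lambda>z. x z k) \<longlongrightarrow> y k) (at 0)"
    using grass_tendsto_approx[OF graph_basis_vecs ws G' y] by blast
  have "\<forall>z. \<exists>v. v \<in> vecs n \<and> x z = join n v (mvec n (A z) v)"
    using x(1) unfolding graph_eq_cspan_basis[symmetric] graph_def by blast
  then obtain V where "\<forall>z. V z \<in> vecs n \<and> x z = join n (V z) (mvec n (A z) (V z))"
    by (rule choice[THEN exE])
  hence V: "\<And>z. V z \<in> vecs n" "\<And>z. x z = join n (V z) (mvec n (A z) (V z))" by auto
  have yv: "y \<in> vecs (2 * n)" using y cspan_vecs[OF ws] by auto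
  define v where "v = (\<lambda>i. if i < n then y i else 0)"
  define w where "w = (\<lambda>i. if i < n then y (n + i) else 0)"
  have "((\<lambda>z. V z k) \<longlongrightarrow> v k) (at 0)" if "k < n" for k
    using x(2)[of k] V(2) that unfolding v_def Defs.join_def by simp
  moreover have "((\<lambda>z. mvec n (A z) (V z) k) \<longlongrightarrow> w k) (at 0)" if "k < n" for k
    using x(2)[of "n + k"] V(2) that unfolding w_def Defs.join_def by simp
  ultimately have "hinge_cond t v w"
    by (intro hinge_cond_of_limit[where V=V and W="\<lambda>z. mvec n (A z) (V z)"]) (auto simp: A_def)
  moreover have "v \<in> vecs n" "w \<in> vecs n" unfolding v_def w_def vecs_def by auto
  ultimately show "y \<in> hinge_space t"
    using join_split[OF yv] hinge_cond_imp_space unfolding v_def w_def by metis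
qed

end

context factored_family
begin

text \<open>Each spanning vector of \<open>P\<^sub>t\<close> is a limit of points \<open>v(z) \<oplus> z\<^bsup>k\<^sub>t\<^esup>\<gamma>(z)v(z)\<close> of the graphs, with
  \<open>v(z)\<close> a multiple \<open>s(z)\<close> of \<open>b(z)\<^sup>-\<^sup>1 e\<^sub>i\<close>: then \<open>z\<^bsup>k\<^sub>t\<^esup>\<gamma>(z)v(z) = s(z) z\<^bsup>k\<^sub>t - m\<^sub>i\<^esup> a(z) e\<^sub>i\<close>, and the scalar
  \<open>s(z)\<close> is chosen to keep both parts bounded.\<close>

lemma hinge_vec_approx:
  assumes i: "i < n"
  obtains u where "\<And>z. u z \<in> graph n (\<lambda>i k. z powi kexp t * \<gamma> z i k)"
    "\<And>k. ((\<lambda>z. u z k) \<longlongrightarrow> hinge_vec t i k) (at 0)"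
proof -
  define s where "s z = (if m i \<le> kexp t then 1 else z powi (m i - kexp t))" for z :: complex
  define e where "e = (if m i \<le> kexp t then kexp t - m i else 0)"
  define V where "V z = (\<lambda>l. s z * mcol n (minv n (b z)) i l)" for z
  have Vlim: "((\<lambda>z. V z l) \<longlongrightarrow> (if m i \<le> kexp t then mcol n b0i i l else 0)) (at 0)" for l
  proof -
    have s: "(s \<longlongrightarrow> (if m i \<le> kexp t then 1 else 0)) (at 0)"
    proof (cases "m i \<le> kexp t")
      case False
      thus ?thesis unfolding s_def using tendsto_power_int_0[of "m i - kexp t"] by simp
    next
      case True
      hence "s = (\<lambda>_. 1)" unfolding s_def by auto
      thus ?thesis using True by simp
    qed
    have "((\<lambda>z. mcol n (minv n (b z)) i l) \<longlongrightarrow> mcol n b0i i l) (at 0)"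
      unfolding mcol_def by (cases "l < n") (auto intro: tendsto_minv_b)
    from tendsto_mult[OF s this] show ?thesis unfolding V_def by (cases "m i \<le> kexp t") simp_all
  qed
  have ev: "eventually (\<lambda>z. z powi e * mcol n (a z) i l = mvec n (\<lambda>i k. z powi kexp t * \<gamma> z i k) (V z) l) (at 0)" for l
    using eventually_punctured_disc eventually_det_b
  proof eventually_elim
    case (elim z)
    hence "mvec n (\<lambda>i k. z powi kexp t * \<gamma> z i k) (V z) l = z powi kexp t * (s z * (z powi (- m i) * mcol n (a z) i l))"
      unfolding V_def mvec_scale_mat mvec_scale using mvec_gamma_minv_b_col[OF _ _ _ i] by simp
    thus ?case using elim
      by (auto simp: s_def e_def power_int_diff power_int_minus field_simps)
  qed
  have lim: "((\<lambda>z. z powi e * mcol n (a z) i l) \<longlongrightarrow> (if kexp t \<le> m i then mcol n (a 0) i l else 0)) (at 0)" for l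
  proof -
    have "((\<lambda>z. mcol n (a z) i l) \<longlongrightarrow> mcol n (a 0) i l) (at 0)"
      unfolding mcol_def by (cases "l < n") (auto intro: tendsto_a i)
    moreover have "e \<ge> 0" "e = 0 \<longleftrightarrow> kexp t \<le> m i" unfolding e_def by auto
    ultimately show ?thesis using tendsto_mult[OF tendsto_power_int_0[of e]] by (cases "kexp t \<le> m i") simp_all
  qed
  have Wlim: "((\<lambda>z. mvec n (\<lambda>i k. z powi kexp t * \<gamma> z i k) (V z) l) \<longlongrightarrow> (if kexp t \<le> m i then mcol n (a 0) i l else 0)) (at 0)" for l
    using Lim_transform_eventually[OF lim ev] .
  show ?thesis
  proof (rule that)
    show "join n (V z) (mvec n (\<lambda>i k. z powi kexp t * \<gamma> z i k) (V z)) \<in> graph n (\<lambda>i k. z powi kexp t * \<gamma> z i k)" for z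
      unfolding graph_def V_def mcol_def vecs_def by auto
    show "((\<lambda>z. join n (V z) (mvec n (\<lambda>i k. z powi kexp t * \<gamma> z i k) (V z)) k) \<longlongrightarrow> hinge_vec t i k) (at 0)" for k
      using Vlim[of k] Wlim[of "k - n"] unfolding hinge_vec_def Defs.join_def by (auto split: if_splits)
  qed
qed

lemma subset_hinge_limit:
  assumes ws: "set ws \<subseteq> vecs (2 * n)"
    and G: "grass_tendsto (2 * n) (\<lambda>z. graph n (\<lambda>i k. z powi kexp t * \<gamma> z i k)) (cspan ws) (at 0)"
  shows "hinge_space t \<subseteq> cspan ws"
  unfolding hinge_space_def
proof (rule cspan_mono, rule subsetI)
  fix x assume "x \<in> set (map (hinge_vec t) [0..<n])"
  then obtain i where i: "i < n" "x = hinge_vec t i" by auto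
  then obtain u where u: "\<And>z. u z \<in> graph n (\<lambda>i k. z powi kexp t * \<gamma> z i k)"
    "\<And>k. ((\<lambda>z. u z k) \<longlongrightarrow> hinge_vec t i k) (at 0)"
    using hinge_vec_approx by auto
  have G': "grass_tendsto (2 * n) (\<lambda>z. cspan (graph_basis n (\<lambda>i k. z powi kexp t * \<gamma> z i k))) (cspan ws) (at 0)"
    using G unfolding graph_eq_cspan_basis .
  have u': "u z \<in> cspan (graph_basis n (\<lambda>i k. z powi kexp t * \<gamma> z i k))" for z
    using u(1) unfolding graph_eq_cspan_basis .
  show "x \<in> cspan ws" unfolding i(2)
    by (rule grass_tendsto_limit_mem[OF graph_basis_vecs ws G' at_neq_bot u' u(2) hinge_vec_vecs])
qed

end

lemma prod_indicator:
  "finite K \<Longrightarrow> (\<Prod>i\<in>K. if P i then (1::'a::comm_semiring_1) else 0) = (if \<forall>i\<in>K. P i then 1 else 0)"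
  by (induction K rule: finite_induct) auto

lemma graph_eq_imp_eq:
  assumes g: "graph n A = graph n B" and ij: "i < n" "j < n"
  shows "A i j = B i j"
proof -
  define v where "v = mcol n mident j"
  have v: "v \<in> vecs n" unfolding v_def by (rule mcol_vecs)
  have "join n v (mvec n A v) \<in> graph n B" using g v unfolding graph_def by auto
  then obtain v' where v': "v' \<in> vecs n" "join n v (mvec n A v) = join n v' (mvec n B v')"
    unfolding graph_def by auto
  hence "mvec n A v i = mvec n B v i" using join_inj v mvec_vecs by metis
  moreover have "mvec n X v i = X i j" for X
    using sum_mult_mident[OF ij(2), of "X i"] ij unfolding mvec_def v_def mcol_def by simp
  ultimately show ?thesis by simp
qed

context factored_family
begin

lemma hinge_of_eq:
  assumes "is_hinge_of n \<gamma> m Ps"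
  shows "length Ps = tau" "\<And>t. t < tau \<Longrightarrow> Ps ! t = hinge_space t"
proof -
  show l: "length Ps = tau" using assms unfolding is_hinge_of_def tau_def by simp
  fix t assume t: "t < tau"
  have "is_subspace_dim (2 * n) (Ps ! t) n"
    and G: "grass_tendsto (2 * n) (\<lambda>z. graph n (\<lambda>i k. z powi kexp t * \<gamma> z i k)) (Ps ! t) (at 0)"
    using assms t l unfolding is_hinge_of_def kexp_def by auto
  then obtain ws where ws: "set ws \<subseteq> vecs (2 * n)" "Ps ! t = cspan ws" unfolding is_subspace_dim_def by auto
  show "Ps ! t = hinge_space t"
    using hinge_limit_subset[OF ws(1)] subset_hinge_limit[OF ws(1)] G unfolding ws(2) by blast
qed

text \<open>The first hinge (index \<open>0\<close> here) is the graph of \<open>a(0) E b(0)\<close>, \<open>E\<close> the projection onto the coordinates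
  carrying the top exponent.\<close>

definition b0_top_rows :: cmat where "b0_top_rows = (\<lambda>i j. (if m i = kexp 0 then 1 else 0) * b 0 i j)"
definition first_hinge_mat :: cmat where "first_hinge_mat = mmul n (a 0) b0_top_rows"

lemma minv_a0_first_hinge_mat: "i < n \<Longrightarrow> j < n \<Longrightarrow> mmul n a0i first_hinge_mat i j = b0_top_rows i j"
proof -
  assume ij: "i < n" "j < n"
  have "mmul n a0i first_hinge_mat i j = mmul n (mmul n a0i (a 0)) b0_top_rows i j" unfolding first_hinge_mat_def by (rule mmul_assoc)
  also have "\<dots> = (\<Sum>l<n. mident i l * b0_top_rows l j)" unfolding mmul_def using a0i_a0 ij by (intro sum.cong) (auto simp: mmul_def)
  also have "\<dots> = b0_top_rows i j" by (rule sum_mident_mult[OF ij(1)])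
  finally show ?thesis .
qed

lemma not_kexp0_less: "p < n \<Longrightarrow> \<not> kexp 0 < m p"
  using blk_gt[of p 0] blk_start_0 by auto

lemma graph_first_hinge_mat: "graph n first_hinge_mat = hinge_space 0"
proof (intro subset_antisym subsetI)
  fix x assume "x \<in> graph n first_hinge_mat"
  then obtain v where v: "v \<in> vecs n" "x = join n v (mvec n first_hinge_mat v)" unfolding graph_def by auto
  have aw: "mvec n a0i (mvec n first_hinge_mat v) p = (if m p = kexp 0 then 1 else 0) * mvec n (b 0) v p" if p: "p < n" for p
  proof -
    have "mvec n a0i (mvec n first_hinge_mat v) p = mvec n b0_top_rows v p"
      unfolding mvec_mmul by (rule arg_cong[where f="\<lambda>X. X p"], rule mvec_cong_mat) (simp add: minv_a0_first_hinge_mat)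
    thus ?thesis using p unfolding mvec_def b0_top_rows_def by (simp add: sum_distrib_left mult.assoc)
  qed
  have "hinge_cond 0 v (mvec n first_hinge_mat v)" unfolding hinge_cond_def using aw not_kexp0_less by auto
  thus "x \<in> hinge_space 0" unfolding v(2) by (rule hinge_cond_imp_space[OF v(1) mvec_vecs])
next
  fix x assume "x \<in> hinge_space 0"
  then obtain v w where vw: "v \<in> vecs n" "w \<in> vecs n" "x = join n v w" "hinge_cond 0 v w"
    using hinge_space_imp_cond by blast
  have e: "mvec n a0i w = mvec n b0_top_rows v"
  proof
    fix p show "mvec n a0i w p = mvec n b0_top_rows v p"
    proof (cases "p < n")
      case True
      have "mvec n b0_top_rows v p = (if m p = kexp 0 then 1 else 0) * mvec n (b 0) v p"
        using True unfolding mvec_def b0_top_rows_def by (simp add: sum_distrib_left mult.assoc)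
      moreover have "\<not> kexp 0 < m p" using not_kexp0_less True by auto
      ultimately show ?thesis using vw(4) True unfolding hinge_cond_def
        by (cases "m p = kexp 0") (auto simp: not_less_iff_gr_or_eq)
    next
      case False thus ?thesis by (simp add: mvec_def)
    qed
  qed
  have "w = mvec n (a 0) (mvec n a0i w)" unfolding mvec_mmul by (rule mvec_mident_vecs[OF a0_a0i vw(2), symmetric])
  also have "\<dots> = mvec n first_hinge_mat v" unfolding e mvec_mmul first_hinge_mat_def ..
  finally show "x \<in> graph n first_hinge_mat" unfolding graph_def using vw by auto
qed

lemma lam_cha_first_hinge_mat: assumes I: "I \<subseteq> {..<n}" and J: "J \<subseteq> {..<n}" shows "lam_cha n first_hinge_mat I J = hinge_lam 0 I J"
proof -
  have "lam_cha n first_hinge_mat I J = (\<Sum>K\<in>Pow {..<n}. lam_cha n (a 0) I K * lam_cha n b0_top_rows K J)"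
    unfolding first_hinge_mat_def by (rule lam_cha_mmul[OF I J])
  also have "\<dots> = hinge_lam 0 I J" unfolding hinge_lam_def
  proof (intro sum.cong refl)
    fix K assume K: "K \<in> Pow {..<n}"
    have fK: "finite K" using K finite_subset by auto
    have "lam_cha n b0_top_rows K J = (\<Prod>i\<in>K. if m i = kexp 0 then 1 else 0) * lam_cha n (b 0) K J"
      unfolding b0_top_rows_def using K J by (simp add: lam_cha_scale_rows)
    also have "(\<Prod>i\<in>K. if m i = kexp 0 then (1::complex) else 0) = (if blk_adapted 0 K then 1 else 0)"
    proof -
      have "(\<forall>i\<in>K. m i = kexp 0) = blk_adapted 0 K" unfolding blk_adapted_def blk_start_0 using K blk_eq[of _ 0] blk_start_0 by auto
      thus ?thesis using prod_indicator[OF fK, where 'a=complex, of "\<lambda>i. m i = kexp 0"] by simp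
    qed
    finally show "lam_cha n (a 0) I K * lam_cha n b0_top_rows K J = lam_cha n (a 0) I K * (if blk_adapted 0 K then 1 else 0) * lam_cha n (b 0) K J"
      by (simp add: mult.assoc)
  qed
  finally show ?thesis .
qed

definition hinge_image :: "nat \<Rightarrow> cvec set" where "hinge_image t = {w \<in> vecs n. \<forall>p<n. m p < kexp t \<longrightarrow> mvec n a0i w p = 0}"

lemma Im_hinge_space: "Im n (hinge_space t) = hinge_image t"
proof (intro subset_antisym subsetI)
  fix w assume "w \<in> Im n (hinge_space t)"
  then obtain v where v: "w \<in> vecs n" "v \<in> vecs n" "join n v w \<in> hinge_space t" unfolding Im_def by auto
  have "hinge_cond t v w" using hinge_space_join_iff[OF v(2,1)] v(3) by simp
  thus "w \<in> hinge_image t" unfolding hinge_image_def hinge_cond_def using v by auto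
next
  fix w assume w: "w \<in> hinge_image t"
  define xx where "xx p = (if m p = kexp t then mvec n a0i w p else 0)" for p
  define v where "v = mvec n b0i xx"
  have bv: "mvec n (b 0) v p = xx p" if "p < n" for p unfolding v_def mvec_mmul using mvec_mident[OF b0_b0i that] .
  have "hinge_cond t v w" unfolding hinge_cond_def using bv w unfolding hinge_image_def xx_def by auto
  moreover have "v \<in> vecs n" unfolding v_def by (rule mvec_vecs)
  ultimately have "join n v w \<in> hinge_space t" using hinge_cond_imp_space w unfolding hinge_image_def by blast
  thus "w \<in> Im n (hinge_space t)" unfolding Im_def using w \<open>v \<in> vecs n\<close> unfolding hinge_image_def by auto
qed

lemma hinge_image_span: "hinge_image t = cspan (map (mcol n (a 0)) [0..<blk_end t])"
proof (intro subset_antisym subsetI)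
  fix w assume w: "w \<in> hinge_image t"
  define y where "y = mvec n a0i w"
  have y0: "y k = 0" if "blk_end t \<le> k" "k < n" for k
    using w that blk_lt[of k t] unfolding hinge_image_def y_def by auto
  have "w = mvec n (a 0) y" unfolding y_def mvec_mmul using w unfolding hinge_image_def
    by (intro mvec_mident_vecs[OF a0_a0i, symmetric]) auto
  also have "\<dots> = (\<lambda>i. \<Sum>k<n. y k * mcol n (a 0) k i)" by (rule sum_mcol[symmetric])
  also have "\<dots> = (\<lambda>i. \<Sum>k<blk_end t. y k * mcol n (a 0) k i)"
    using y0 blk_end_le[of t] by (intro ext sum.mono_neutral_right) auto
  finally show "w \<in> cspan (map (mcol n (a 0)) [0..<blk_end t])" unfolding cspan_map_upt by blast
next
  fix w assume "w \<in> cspan (map (mcol n (a 0)) [0..<blk_end t])"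
  then obtain c where c: "w = (\<lambda>i. \<Sum>k<blk_end t. c k * mcol n (a 0) k i)" unfolding cspan_map_upt by auto
  define c' where "c' k = (if k < blk_end t then c k else 0)" for k
  have "w = (\<lambda>i. \<Sum>k<n. c' k * mcol n (a 0) k i)"
    unfolding c c'_def using blk_end_le[of t] by (intro ext sum.mono_neutral_cong_left) auto
  also have "\<dots> = mvec n (a 0) c'" by (rule sum_mcol)
  finally have wc: "w = mvec n (a 0) c'" .
  have "mvec n a0i w p = c' p" if "p < n" for p unfolding wc mvec_mmul using mvec_mident[OF a0i_a0 that] .
  hence "\<forall>p<n. m p < kexp t \<longrightarrow> mvec n a0i w p = 0" using blk_lt unfolding c'_def by auto
  thus "w \<in> hinge_image t" unfolding hinge_image_def using wc mvec_vecs by auto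
qed

lemma cdim_Im_hinge_space: "cdim n (Im n (hinge_space t)) = blk_end t"
  unfolding cdim_def Im_hinge_space
proof (rule Least_equality)
  show "is_subspace_dim n (hinge_image t) (blk_end t)" unfolding is_subspace_dim_def hinge_image_span
    by (intro exI[of _ "map (mcol n (a 0)) [0..<blk_end t]"]) (auto simp: mcol_vecs blk_end_le lin_indep_mcols[OF det_a])
  fix d assume "is_subspace_dim n (hinge_image t) d"
  then obtain ws where ws: "length ws = d" "cspan ws = hinge_image t" unfolding is_subspace_dim_def by auto
  have "length (map (mcol n (a 0)) [0..<blk_end t]) \<le> length ws"
  proof (rule lin_indep_length_le)
    show "lin_indep (map (mcol n (a 0)) [0..<blk_end t])" by (rule lin_indep_mcols[OF det_a blk_end_le])
    show "set (map (mcol n (a 0)) [0..<blk_end t]) \<subseteq> cspan ws" unfolding ws(2) hinge_image_span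
      by (auto intro: cspan_mem)
  qed
  thus "blk_end t \<le> d" using ws by simp
qed

end

section \<open>Uniqueness of \<open>\<lambda>(P)\<close> on the hinge\<close>

lemma card_sorted_positions:
  assumes X: "X \<subseteq> {..<n}"
  shows "card {c. c < card X \<and> sl X ! c \<in> Y} = card (X \<inter> Y)"
proof -
  note f = sorted_list_nth_ksub[OF ksub_card[OF X]]
  have sub: "{c. c < card X \<and> sl X ! c \<in> Y} \<subseteq> {..<card X}" by auto
  have inj: "inj_on (\<lambda>i. sl X ! i) {c. c < card X \<and> sl X ! c \<in> Y}" using inj_on_subset[OF f(1) sub] .
  have "(\<lambda>i. sl X ! i) ` {c. c < card X \<and> sl X ! c \<in> Y} = X \<inter> Y"
  proof
    show "(\<lambda>i. sl X ! i) ` {c. c < card X \<and> sl X ! c \<in> Y} \<subseteq> X \<inter> Y" using f(2) by auto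
    show "X \<inter> Y \<subseteq> (\<lambda>i. sl X ! i) ` {c. c < card X \<and> sl X ! c \<in> Y}"
    proof
      fix x assume x: "x \<in> X \<inter> Y"
      then obtain i where "i < card X" "sl X ! i = x" using f(2) by (metis IntD1 imageE lessThan_iff)
      thus "x \<in> (\<lambda>i. sl X ! i) ` {c. c < card X \<and> sl X ! c \<in> Y}" using x by auto
    qed
  qed
  thus ?thesis using card_image[OF inj] by simp
qed

lemma sorted_list_prefix:
  assumes X: "X \<subseteq> {..<n}" and A: "{..<al} \<subseteq> X"
  shows "sl X = [0..<al] @ sl (X - {..<al})"
proof -
  have fX: "finite X" using X finite_subset by blast
  have "sl X = [0..<al] @ sl (X - {..<al})"
  proof (subst sorted_list_of_set_unique[OF fX, symmetric], intro conjI)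
    show "sorted_wrt (<) ([0..<al] @ sl (X - {..<al}))"
      unfolding sorted_wrt_append using fX by auto
    show "set ([0..<al] @ sl (X - {..<al})) = X" using A fX by auto
    have "card X = card ({..<al} \<union> (X - {..<al}))" using A by (metis Un_Diff_cancel Un_absorb1)
    also have "\<dots> = al + card (X - {..<al})" by (subst card_Un_disjoint) (use fX in auto)
    finally show "length ([0..<al] @ sl (X - {..<al})) = card X" using fX by simp
  qed
  thus ?thesis .
qed

lemma sorted_list_prefix_nth:
  assumes X: "X \<subseteq> {..<n}" and A: "{..<al} \<subseteq> X"
  shows "r < al \<Longrightarrow> sl X ! r = r" and "al \<le> r \<Longrightarrow> r < card X \<Longrightarrow> al \<le> sl X ! r"
proof -
  note e = sorted_list_prefix[OF X A]
  show "r < al \<Longrightarrow> sl X ! r = r" unfolding e by (simp add: nth_append)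
  assume r: "al \<le> r" "r < card X"
  have "sl X ! r \<in> X" using r ksubD[OF ksub_card[OF X]] by (metis nth_mem)
  moreover have "sl X ! r \<notin> {..<al}"
  proof -
    have fX: "finite X" using X finite_subset by blast
    have "sl X ! r = sl (X - {..<al}) ! (r - al)" unfolding e using r by (simp add: nth_append)
    moreover have "r - al < length (sl (X - {..<al}))"
    proof -
      have "length (sl X) = card X" using fX by simp
      thus ?thesis using r unfolding e by simp
    qed
    ultimately show ?thesis using fX by (metis Diff_iff finite_Diff nth_mem set_sorted_list_of_set)
  qed
  ultimately show "al \<le> sl X ! r" by auto
qed

lemma lam_cha_transpose:
  assumes I: "I \<subseteq> {..<n}" and J: "J \<subseteq> {..<n}"
  shows "lam_cha n (\<lambda>i j. X j i) J I = lam_cha n X I J"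
proof (cases "card I = card J")
  case True
  have "mdet (card J) (\<lambda>r c. X (sl I ! c) (sl J ! r)) = mdet (card J) (\<lambda>r c. X (sl I ! r) (sl J ! c))"
    using mdet_transpose[of "card J" "\<lambda>r c. X (sl I ! r) (sl J ! c)"] by simp
  thus ?thesis using True by (simp add: lam_cha_minor I J)
qed (simp add: lam_cha_card_neq I J)

lemma lam_cha_prefix_factor:
  assumes R: "\<And>p k. p < al \<Longrightarrow> al \<le> k \<Longrightarrow> k < n \<Longrightarrow> R p k = 0"
    and K: "K \<subseteq> {..<n}" "{..<al} \<subseteq> K" and T: "T \<subseteq> {..<n}" "{..<al} \<subseteq> T" and c: "card K = card T"
  shows "lam_cha n R K T = mdet al R * mdet (card T - al) (\<lambda>r c. R (sl K ! (al + r)) (sl T ! (al + c)))"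
proof -
  have ad: "al \<le> card T" using T card_mono[OF finite_subset[OF T(1)] T(2)] by simp
  note Kp = sorted_list_prefix_nth[OF K] and Tp = sorted_list_prefix_nth[OF T]
  have "lam_cha n R K T = mdet (card T) (\<lambda>r c. R (sl K ! r) (sl T ! c))" using c by (simp add: lam_cha_minor K(1) T(1))
  also have "\<dots> = mdet al (\<lambda>r c. R (sl K ! r) (sl T ! c)) * mdet (card T - al) (\<lambda>r c. R (sl K ! (al + r)) (sl T ! (al + c)))"
    by (rule mdet_block_upper_right_0[OF ad]) (use Kp(1) Tp(2) R sl_nth_less[OF T(1)] in auto)
  also have "mdet al (\<lambda>r c. R (sl K ! r) (sl T ! c)) = mdet al R" by (rule mdet_cong) (simp add: Kp(1) Tp(1))
  finally show ?thesis .
qed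

lemma lam_cha_prefix_vanish:
  assumes R: "\<And>p k. p < al \<Longrightarrow> al \<le> k \<Longrightarrow> k < n \<Longrightarrow> R p k = 0"
    and K: "K \<subseteq> {..<n}" "{..<al} \<subseteq> K" and T: "T \<subseteq> {..<n}" "\<not> {..<al} \<subseteq> T" and c: "card K = card T"
  shows "lam_cha n R K T = 0"
proof -
  define B where "B = {c. c < card T \<and> sl T ! c \<in> {..<al}}"
  have "card B = card (T \<inter> {..<al})" unfolding B_def by (rule card_sorted_positions[OF T(1)])
  also have "\<dots> < card {..<al}" using T(2) by (intro psubset_card_mono) auto
  finally have cB: "card B < al" by simp
  have "al \<le> card K" using K card_mono[OF finite_subset[OF K(1)] K(2)] by simp
  moreover have "mdet (card K) (\<lambda>r c. R (sl K ! r) (sl T ! c)) = 0"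
  proof (rule mdet_eq_0_rows_few_cols[of "{..<al}" _ B])
    show "\<forall>r\<in>{..<al}. \<forall>c<card K. c \<notin> B \<longrightarrow> R (sl K ! r) (sl T ! c) = 0"
      using sorted_list_prefix_nth(1)[OF K] sl_nth_less[OF T(1)] R c unfolding B_def by (auto simp: not_less)
  qed (use calculation cB B_def in auto)
  ultimately show ?thesis using c by (simp add: lam_cha_minor K(1) T(1))
qed

lemma lam_cha_outside_vanish:
  assumes R: "\<And>p k. p < e \<Longrightarrow> e \<le> k \<Longrightarrow> k < n \<Longrightarrow> R p k = 0"
    and K: "K \<subseteq> {..<e}" and T: "T \<subseteq> {..<n}" "\<not> T \<subseteq> {..<e}" and e: "e \<le> n"
  shows "lam_cha n R K T = 0"
proof (cases "card K = card T")
  case True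
  have K': "K \<subseteq> {..<n}" using K e by auto
  obtain t0 where t0: "t0 \<in> T" "e \<le> t0" using T(2) by (auto simp: subset_iff not_less)
  then obtain c0 where c0: "c0 < card T" "sl T ! c0 = t0"
    using ksubD[OF ksub_card[OF T(1)]] by (metis in_set_conv_nth)
  have "mdet (card T) (\<lambda>r c. R (sl K ! r) (sl T ! c)) = 0"
  proof (rule mdet_eq_0_cols_few_rows[of "{c0}" _ "{}"])
    show "\<forall>c\<in>{c0}. \<forall>r<card T. r \<notin> {} \<longrightarrow> R (sl K ! r) (sl T ! c) = 0"
    proof (intro ballI allI impI)
      fix c r assume "c \<in> {c0}" "r < card T"
      hence "sl K ! r < e" "sl T ! c = t0" "t0 < n" using sl_nth_mem[OF K', of r] K True c0 t0 T(1) by auto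
      thus "R (sl K ! r) (sl T ! c) = 0" using R t0(2) by simp
    qed
  qed (use c0 in auto)
  thus ?thesis using True by (simp add: lam_cha_minor K' T(1))
next
  case False
  thus ?thesis using K e T(1) by (intro lam_cha_card_neq) auto
qed

lemma lam_cha_block_adapted_both:
  fixes R S :: cmat
  assumes R1: "\<And>p k. p < al \<Longrightarrow> al \<le> k \<Longrightarrow> k < n \<Longrightarrow> R p k = 0"
   and S1: "\<And>p k. al \<le> p \<Longrightarrow> p < n \<Longrightarrow> k < al \<Longrightarrow> S p k = 0"
   and RS: "\<And>p k. al \<le> p \<Longrightarrow> p < e \<Longrightarrow> al \<le> k \<Longrightarrow> k < e \<Longrightarrow> R p k = S p k"
   and K: "K \<subseteq> {..<n}" "{..<al} \<subseteq> K" "K \<subseteq> {..<e}" and T: "T \<subseteq> {..<n}" "{..<al} \<subseteq> T" "T \<subseteq> {..<e}"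
   and c: "card K = card T"
  shows "lam_cha n R K T * mdet al S = mdet al R * lam_cha n S K T"
proof -
  let ?S' = "\<lambda>i j. S j i"
  define X where "X = mdet (card T - al) (\<lambda>r c. R (sl K ! (al + r)) (sl T ! (al + c)))"
  have "lam_cha n R K T = mdet al R * X"
    unfolding X_def by (rule lam_cha_prefix_factor[OF R1 K(1,2) T(1,2) c])
  moreover have "lam_cha n ?S' T K = mdet al ?S' * mdet (card K - al) (\<lambda>r c. ?S' (sl T ! (al + r)) (sl K ! (al + c)))"
    by (rule lam_cha_prefix_factor[OF _ T(1,2) K(1,2) c[symmetric]]) (use S1 in auto)
  moreover have "mdet (card K - al) (\<lambda>r c. ?S' (sl T ! (al + r)) (sl K ! (al + c))) = X"
  proof -
    have lt: "sl K ! (al + r) \<in> {..<e}" "sl T ! (al + r) \<in> {..<e}" if "r < card T - al" for r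
      using K T c sl_nth_mem[OF K(1), of "al + r"] sl_nth_mem[OF T(1), of "al + r"] less_diff_conv[THEN iffD1, OF that]
      by (auto simp: add.commute)
    have ge: "al \<le> sl K ! (al + r)" "al \<le> sl T ! (al + r)" if "r < card T - al" for r
      using c sorted_list_prefix_nth(2)[OF K(1,2), of "al + r"] sorted_list_prefix_nth(2)[OF T(1,2), of "al + r"]
        less_diff_conv[THEN iffD1, OF that] by (auto simp: add.commute)
    have "mdet (card T - al) (\<lambda>r c. S (sl K ! (al + r)) (sl T ! (al + c))) = X"
      unfolding X_def by (intro mdet_cong) (metis RS lt ge lessThan_iff)
    thus ?thesis using mdet_transpose[of "card T - al" "\<lambda>r c. S (sl K ! (al + r)) (sl T ! (al + c))"] c by simp
  qed
  ultimately show ?thesis using lam_cha_transpose[OF K(1) T(1)] mdet_transpose[of al S] by simp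
qed

lemma lam_cha_block_adapted:
  fixes R S :: cmat
  assumes ab: "al + be \<le> n"
   and R1: "\<And>p k. p < al \<Longrightarrow> al \<le> k \<Longrightarrow> k < n \<Longrightarrow> R p k = 0"
   and R2: "\<And>p k. p < al + be \<Longrightarrow> al + be \<le> k \<Longrightarrow> k < n \<Longrightarrow> R p k = 0"
   and S1: "\<And>p k. al \<le> p \<Longrightarrow> p < n \<Longrightarrow> k < al \<Longrightarrow> S p k = 0"
   and S2: "\<And>p k. al + be \<le> p \<Longrightarrow> p < n \<Longrightarrow> k < al + be \<Longrightarrow> S p k = 0"
   and RS: "\<And>p k. al \<le> p \<Longrightarrow> p < al + be \<Longrightarrow> al \<le> k \<Longrightarrow> k < al + be \<Longrightarrow> R p k = S p k"
   and dS: "mdet al S \<noteq> 0"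
   and K: "K \<subseteq> {..<n}" and T: "T \<subseteq> {..<n}"
  shows "(if {..<al} \<subseteq> K \<and> K \<subseteq> {..<al+be} then 1 else 0) * lam_cha n R K T =
         (mdet al R / mdet al S) * ((if {..<al} \<subseteq> T \<and> T \<subseteq> {..<al+be} then 1 else 0) * lam_cha n S K T)"
proof (cases "card K = card T")
  case True
  let ?S' = "\<lambda>i j. S j i"
  have S'1: "?S' p k = 0" if "p < al" "al \<le> k" "k < n" for p k using S1 that by simp
  have S'2: "?S' p k = 0" if "p < al + be" "al + be \<le> k" "k < n" for p k using S2 that by simp
  have lS: "lam_cha n S K T = lam_cha n ?S' T K" using lam_cha_transpose[OF K T] by simp
  consider "{..<al} \<subseteq> K \<and> K \<subseteq> {..<al+be}" "{..<al} \<subseteq> T \<and> T \<subseteq> {..<al+be}"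
    | "{..<al} \<subseteq> K \<and> K \<subseteq> {..<al+be}" "\<not> ({..<al} \<subseteq> T \<and> T \<subseteq> {..<al+be})"
    | "\<not> ({..<al} \<subseteq> K \<and> K \<subseteq> {..<al+be})" "{..<al} \<subseteq> T \<and> T \<subseteq> {..<al+be}"
    | "\<not> ({..<al} \<subseteq> K \<and> K \<subseteq> {..<al+be})" "\<not> ({..<al} \<subseteq> T \<and> T \<subseteq> {..<al+be})" by blast
  thus ?thesis
  proof cases
    case 1
    thus ?thesis using lam_cha_block_adapted_both[OF R1 S1 RS K _ _ T _ _ True] dS
      by (simp add: field_simps)
  next
    case 2
    have "lam_cha n R K T = 0"
    proof (cases "{..<al} \<subseteq> T")
      case True
      thus ?thesis using 2 by (intro lam_cha_outside_vanish[OF R2 _ T _ ab]) auto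
    qed (use 2 lam_cha_prefix_vanish[OF R1 K _ T _ True] in auto)
    thus ?thesis by (simp only: if_not_P[OF 2(2)] if_P[OF 2(1)]) simp
  next
    case 3
    have "lam_cha n ?S' T K = 0"
    proof (cases "{..<al} \<subseteq> K")
      case True
      thus ?thesis using 3 by (intro lam_cha_outside_vanish[OF S'2 _ K _ ab]) auto
    qed (use 3 lam_cha_prefix_vanish[OF S'1 T _ K] True in auto)
    thus ?thesis unfolding lS by (simp only: if_not_P[OF 3(1)] if_P[OF 3(2)]) simp
  next
    case 4 thus ?thesis by (simp only: if_not_P[OF 4(1)] if_not_P[OF 4(2)]) simp
  qed
qed (simp add: lam_cha_card_neq K T)

lemma mdet_nonzero_card_le:
  assumes "mdet n M \<noteq> 0" "A \<subseteq> {..<n}" "finite B" "\<forall>c\<in>A. \<forall>r<n. r \<notin> B \<longrightarrow> M r c = 0"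
  shows "card A \<le> card B"
  using mdet_eq_0_cols_few_rows[OF assms(2,3) _ assms(4)] assms(1) by (meson not_le)

text \<open>The zero patterns force the column blocks of sizes \<open>a'\<close>, \<open>b'\<close> to match the row blocks of sizes
  \<open>\<alpha>\<close>, \<open>\<beta>\<close>, since in an invertible matrix no \<open>k\<close> columns are supported on fewer than \<open>k\<close> rows.\<close>

lemma block_sizes_eq:
  fixes R S :: cmat
  assumes dR: "mdet n R \<noteq> 0" and dS: "mdet n S \<noteq> 0" and le: "a' + b' \<le> n" "\<alpha> + \<beta> \<le> n"
    and SF: "\<And>p k. k < a' \<Longrightarrow> \<alpha> \<le> p \<Longrightarrow> p < n \<Longrightarrow> S p k = 0"
    and RG: "\<And>p k. a' \<le> k \<Longrightarrow> k < a' + b' \<Longrightarrow> p < \<alpha> \<Longrightarrow> R p k = 0"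
    and SG: "\<And>p k. a' \<le> k \<Longrightarrow> k < a' + b' \<Longrightarrow> \<alpha> + \<beta> \<le> p \<Longrightarrow> p < n \<Longrightarrow> S p k = 0"
    and RH: "\<And>p k. a' + b' \<le> k \<Longrightarrow> k < n \<Longrightarrow> p < \<alpha> + \<beta> \<Longrightarrow> R p k = 0"
  shows "a' = \<alpha>" "b' = \<beta>"
proof -
  have "card {..<a'} \<le> card {..<\<alpha>}"
    using le SF by (intro mdet_nonzero_card_le[OF dS]) (auto simp: not_less)
  moreover have "card {a'..<n} \<le> card {\<alpha>..<n}"
  proof (rule mdet_nonzero_card_le[OF dR])
    show "\<forall>c\<in>{a'..<n}. \<forall>r<n. r \<notin> {\<alpha>..<n} \<longrightarrow> R r c = 0"
      using RG RH le by (metis atLeastLessThan_iff not_le order.strict_trans2 le_add1)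
  qed auto
  moreover have "card {..<a' + b'} \<le> card {..<\<alpha> + \<beta>}"
  proof (rule mdet_nonzero_card_le[OF dS])
    show "\<forall>c\<in>{..<a' + b'}. \<forall>r<n. r \<notin> {..<\<alpha> + \<beta>} \<longrightarrow> S r c = 0"
      using SF SG by (metis lessThan_iff not_le le_add1 order.trans)
  qed (use le in auto)
  moreover have "card {a' + b'..<n} \<le> card {\<alpha> + \<beta>..<n}"
    using le RH by (intro mdet_nonzero_card_le[OF dR]) (auto simp: not_le)
  ultimately show "a' = \<alpha>" "b' = \<beta>" using le by auto
qed

lemma upt_split3: assumes "a \<le> b" "b \<le> c" shows "[0..<c] = [0..<a] @ [a..<b] @ [b..<c]"
  using upt_add_eq_append[of 0 b "c - b"] upt_add_eq_append[of 0 a "b - a"] assms by simp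

lemma map2_map_same: "map2 F (map g xs) (map h xs) = map (\<lambda>x. F (g x) (h x)) xs"
  by (induction xs) auto

context factored_family
begin

lemma hinge_vecs_split:
  "map (hinge_vec t) [0..<n] =
   map (\<lambda>i. join n (\<lambda>_. 0) (mcol n (a 0) i)) [0..<blk_start t] @
   map (\<lambda>i. join n (mcol n b0i i) (mcol n (a 0) i)) [blk_start t..<blk_end t] @
   map (\<lambda>i. join n (mcol n b0i i) (\<lambda>_. 0)) [blk_end t..<n]"
proof -
  have "map (hinge_vec t) [0..<n] = map (hinge_vec t) [0..<blk_start t] @
      map (hinge_vec t) [blk_start t..<blk_end t] @ map (hinge_vec t) [blk_end t..<n]"
    using upt_split3[of "blk_start t" "blk_end t" n] blk_end_le[of t] by simp
  moreover have "map (hinge_vec t) [0..<blk_start t] = map (\<lambda>i. join n (\<lambda>_. 0) (mcol n (a 0) i)) [0..<blk_start t]"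
  proof (rule map_cong[OF refl])
    fix i assume "i \<in> set [0..<blk_start t]"
    hence "kexp t < m i" using blk_gt[of i t] blk_end_le[of t] by auto
    thus "hinge_vec t i = join n (\<lambda>_. 0) (mcol n (a 0) i)" unfolding hinge_vec_def by auto
  qed
  moreover have "map (hinge_vec t) [blk_start t..<blk_end t] =
      map (\<lambda>i. join n (mcol n b0i i) (mcol n (a 0) i)) [blk_start t..<blk_end t]"
  proof (rule map_cong[OF refl])
    fix i assume "i \<in> set [blk_start t..<blk_end t]"
    hence "m i = kexp t" using blk_eq[of i t] blk_end_le[of t] by auto
    thus "hinge_vec t i = join n (mcol n b0i i) (mcol n (a 0) i)" unfolding hinge_vec_def by auto
  qed
  moreover have "map (hinge_vec t) [blk_end t..<n] = map (\<lambda>i. join n (mcol n b0i i) (\<lambda>_. 0)) [blk_end t..<n]"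
  proof (rule map_cong[OF refl])
    fix i assume "i \<in> set [blk_end t..<n]"
    hence "m i < kexp t" using blk_lt[of i t] by auto
    thus "hinge_vec t i = join n (mcol n b0i i) (\<lambda>_. 0)" unfolding hinge_vec_def by auto
  qed
  ultimately show ?thesis by simp
qed

lemma wedge_mcols:
  assumes T: "T \<subseteq> {..<n}"
  shows "wedge n (map (\<lambda>k. map (mcol n X) [0..<n] ! k) (sl T)) = (\<lambda>K. lam_cha n X K T)"
proof
  fix K
  have "wedge n (map (\<lambda>k. map (mcol n X) [0..<n] ! k) (sl T)) = (\<lambda>K. lam_cha n (\<lambda>r c. (map (mcol n X) [0..<n] ! c) r) K T)"
    by (rule wedge_eq_lam_cha[OF _ _ T]) (auto simp: mcol_vecs)
  moreover have "lam_cha n (\<lambda>r c. (map (mcol n X) [0..<n] ! c) r) K T = lam_cha n X K T"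
  proof (cases "K \<subseteq> {..<n}")
    case True thus ?thesis by (intro lam_cha_cong[OF _ True T]) (simp add: mcol_def)
  qed (simp add: lam_cha_def wedge_def)
  ultimately show "wedge n (map (\<lambda>k. map (mcol n X) [0..<n] ! k) (sl T)) K = lam_cha n X K T" by simp
qed

lemma ext_apply_hinge_lam:
  assumes T: "T \<subseteq> {..<n}"
  shows "ext_apply n (hinge_lam t) (\<lambda>J. lam_cha n b0i J T) I = lam_cha n (a 0) I T * (if blk_adapted t T then 1 else 0)"
proof -
  have "ext_apply n (hinge_lam t) (\<lambda>J. lam_cha n b0i J T) I =
      (\<Sum>K\<in>Pow {..<n}. (lam_cha n (a 0) I K * (if blk_adapted t K then 1 else 0)) *
        (\<Sum>J\<in>Pow {..<n}. lam_cha n (b 0) K J * lam_cha n b0i J T))"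
    unfolding ext_apply_def hinge_lam_def by (rule sum_sum_mult_swap) auto
  also have "\<dots> = (\<Sum>K\<in>Pow {..<n}. if K = T then lam_cha n (a 0) I K * (if blk_adapted t K then 1 else 0) else 0)"
    by (intro sum.cong refl) (simp add: lam_cha_mmul_minv[OF det_b _ T])
  finally show ?thesis using T by (simp add: sum.delta)
qed

theorem is_lambda_hinge_lam: "is_lambda n (hinge_space t) (hinge_lam t)"
proof -
  define f where "f = map (mcol n b0i) [0..<blk_start t]"
  define g where "g = map (mcol n b0i) [blk_start t..<blk_end t]"
  define h where "h = map (mcol n b0i) [blk_end t..<n]"
  define F where "F = map (mcol n (a 0)) [0..<blk_start t]"
  define G where "G = map (mcol n (a 0)) [blk_start t..<blk_end t]"
  define H where "H = map (mcol n (a 0)) [blk_end t..<n]"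
  have fgh: "f @ g @ h = map (mcol n b0i) [0..<n]" and FGH: "F @ G @ H = map (mcol n (a 0)) [0..<n]"
    unfolding f_def g_def h_def F_def G_def H_def
    using upt_split3[of "blk_start t" "blk_end t" n] blk_end_le[of t] by simp_all
  have "hinge_space t = cspan (map (join n (\<lambda>_. 0)) F @ map2 (join n) g G @ map (\<lambda>v. join n v (\<lambda>_. 0)) h)"
    unfolding hinge_space_def hinge_vecs_split f_def g_def h_def F_def G_def H_def
    by (simp only: map2_map_same map_map comp_def)
  moreover have "ext_apply n (hinge_lam t) (wedge n (map (\<lambda>k. (f @ g @ h) ! k) (sl T))) I =
      (if {..<length f} \<subseteq> T \<and> T \<subseteq> {..<length f + length g}
       then wedge n (map (\<lambda>k. (F @ G @ H) ! k) (sl T)) I else 0)" if "T \<subseteq> {..<n}" for T I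
    using that unfolding fgh FGH wedge_mcols[OF that] ext_apply_hinge_lam[OF that]
    by (simp add: f_def g_def blk_adapted_def)
  moreover have "length f + length g + length h = n" "length F = length f" "length G = length g" "length H = length h"
    unfolding f_def g_def h_def F_def G_def H_def using blk_end_le[of t] by simp_all
  moreover have "set (f @ g @ h) \<subseteq> vecs n" "set (F @ G @ H) \<subseteq> vecs n"
    unfolding fgh FGH by (auto simp: mcol_vecs)
  moreover have "lin_indep (f @ g @ h)" "lin_indep (F @ G @ H)"
    unfolding fgh FGH by (simp_all add: lin_indep_mcols mdet_minv_nonzero det_a det_b)
  ultimately show ?thesis unfolding is_lambda_def by blast
qed

end

context factored_family
begin

lemma hinge_cond_of_spanning_list:
  assumes P: "hinge_space t = cspan (map (join n (\<lambda>_. 0)) F @ map2 (join n) g G @ map (\<lambda>v. join n v (\<lambda>_. 0)) h)"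
    and vs: "set (g @ h) \<subseteq> vecs n" "set (F @ G) \<subseteq> vecs n"
  shows "w \<in> set F \<Longrightarrow> hinge_cond t (\<lambda>_. 0) w"
    and "(v, w) \<in> set (zip g G) \<Longrightarrow> hinge_cond t v w"
    and "v \<in> set h \<Longrightarrow> hinge_cond t v (\<lambda>_. 0)"
proof -
  have inP: "x \<in> set (map (join n (\<lambda>_. 0)) F @ map2 (join n) g G @ map (\<lambda>v. join n v (\<lambda>_. 0)) h) \<Longrightarrow>
      x \<in> hinge_space t" for x
    unfolding P by (rule cspan_mem)
  show "w \<in> set F \<Longrightarrow> hinge_cond t (\<lambda>_. 0) w"
    using inP[of "join n (\<lambda>_. 0) w"] hinge_space_join_iff[OF zero_vecs, of w t] vs by auto
  show "(v, w) \<in> set (zip g G) \<Longrightarrow> hinge_cond t v w"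
    using inP[of "join n v w"] hinge_space_join_iff[of v w t] vs set_zip_leftD[of v w] set_zip_rightD[of v w]
    by force
  show "v \<in> set h \<Longrightarrow> hinge_cond t v (\<lambda>_. 0)"
    using inP[of "join n v (\<lambda>_. 0)"] hinge_space_join_iff[OF _ zero_vecs, of v t] vs by auto
qed

lemma is_lambda_hinge_basis:
  assumes L: "is_lambda n (hinge_space t) M"
  obtains us Us a' b' where "length us = n" "length Us = n" "set us \<subseteq> vecs n" "set Us \<subseteq> vecs n"
    "lin_indep us" "lin_indep Us" "a' + b' \<le> n"
    "\<And>k. k < a' \<Longrightarrow> hinge_cond t (\<lambda>_. 0) (Us ! k)"
    "\<And>k. a' \<le> k \<Longrightarrow> k < a' + b' \<Longrightarrow> hinge_cond t (us ! k) (Us ! k)"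
    "\<And>k. a' + b' \<le> k \<Longrightarrow> k < n \<Longrightarrow> hinge_cond t (us ! k) (\<lambda>_. 0)"
    "\<And>T I. T \<subseteq> {..<n} \<Longrightarrow> I \<subseteq> {..<n} \<Longrightarrow> (\<Sum>J\<in>Pow {..<n}. M I J * lam_cha n (\<lambda>r c. (us ! c) r) J T) =
       (if {..<a'} \<subseteq> T \<and> T \<subseteq> {..<a' + b'} then lam_cha n (\<lambda>r c. (Us ! c) r) I T else 0)"
proof -
  obtain f g h F G H where
    len: "length f + length g + length h = n" "length F = length f" "length G = length g" "length H = length h"
    and sv: "set (f @ g @ h) \<subseteq> vecs n" "lin_indep (f @ g @ h)"
    and sV: "set (F @ G @ H) \<subseteq> vecs n" "lin_indep (F @ G @ H)"
    and P: "hinge_space t = cspan (map (join n (\<lambda>_. 0)) F @ map2 (join n) g G @ map (\<lambda>v. join n v (\<lambda>_. 0)) h)"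
    and W: "\<forall>T\<subseteq>{..<n}. \<forall>I\<subseteq>{..<n}.
        ext_apply n M (wedge n (map (\<lambda>k. (f @ g @ h) ! k) (sl T))) I =
        (if {..<length f} \<subseteq> T \<and> T \<subseteq> {..<length f + length g}
         then wedge n (map (\<lambda>k. (F @ G @ H) ! k) (sl T)) I else 0)"
    using L unfolding is_lambda_def by (elim exE conjE) (rule that; assumption)
  let ?us = "f @ g @ h" and ?Us = "F @ G @ H"
  have lens: "length ?us = n" "length ?Us = n" using len by auto
  have "set (g @ h) \<subseteq> vecs n" "set (F @ G) \<subseteq> vecs n" using sv(1) sV(1) by auto
  note cond = hinge_cond_of_spanning_list[OF P this]
  show thesis
  proof (rule that[of ?us ?Us "length f" "length g"])
    show "hinge_cond t (\<lambda>_. 0) (?Us ! k)" if "k < length f" for k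
      using cond(1)[of "F ! k"] sV(1) that len by (simp add: nth_append)
    show "hinge_cond t (?us ! k) (?Us ! k)" if "length f \<le> k" "k < length f + length g" for k
    proof -
      have "(g ! (k - length f), G ! (k - length f)) \<in> set (zip g G)" using that len by (auto simp: in_set_zip)
      thus ?thesis using cond(2) sv(1) sV(1) that len by (simp add: nth_append)
    qed
    show "hinge_cond t (?us ! k) (\<lambda>_. 0)" if "length f + length g \<le> k" "k < n" for k
    proof -
      have "?us ! k = h ! (k - length f - length g)" using that len by (auto simp: nth_append)
      thus ?thesis using cond(3)[of "h ! (k - length f - length g)"] that len by simp
    qed
    show "(\<Sum>J\<in>Pow {..<n}. M I J * lam_cha n (\<lambda>r c. (?us ! c) r) J T) =
       (if {..<length f} \<subseteq> T \<and> T \<subseteq> {..<length f + length g} then lam_cha n (\<lambda>r c. (?Us ! c) r) I T else 0)"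
      if "T \<subseteq> {..<n}" "I \<subseteq> {..<n}" for T I
    proof -
      have "ext_apply n M (wedge n (map (\<lambda>k. ?us ! k) (sl T))) I =
          (if {..<length f} \<subseteq> T \<and> T \<subseteq> {..<length f + length g} then wedge n (map (\<lambda>k. ?Us ! k) (sl T)) I else 0)"
        using W that by blast
      thus ?thesis
        unfolding ext_apply_def wedge_eq_lam_cha[OF sv(1) lens(1) that(1)] wedge_eq_lam_cha[OF sV(1) lens(2) that(1)] .
    qed
  qed (use len sv sV in auto)
qed

lemma hinge_cond_blocks:
  assumes "hinge_cond t v w" "p < n"
  shows "p < blk_start t \<Longrightarrow> mvec n (b 0) v p = 0"
    and "blk_end t \<le> p \<Longrightarrow> mvec n a0i w p = 0"
    and "blk_start t \<le> p \<Longrightarrow> p < blk_end t \<Longrightarrow> mvec n (b 0) v p = mvec n a0i w p"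
  using assms blk_gt[of p t] blk_lt[of p t] blk_eq[of p t] unfolding hinge_cond_def by auto

lemma sum_hinge_lam_mult_lam_cha:
  assumes BC: "\<And>K T. K \<subseteq> {..<n} \<Longrightarrow> T \<subseteq> {..<n} \<Longrightarrow>
      (if blk_adapted t K then 1 else 0) * lam_cha n (mmul n (b 0) \<Phi>) K T =
      \<kappa> * ((if blk_adapted t T then 1 else 0) * lam_cha n (mmul n a0i \<Psi>) K T)"
    and I: "I \<subseteq> {..<n}" and T: "T \<subseteq> {..<n}"
  shows "(\<Sum>J\<in>Pow {..<n}. hinge_lam t I J * lam_cha n \<Phi> J T) = \<kappa> * ((if blk_adapted t T then 1 else 0) * lam_cha n \<Psi> I T)"
proof -
  have "(\<Sum>J\<in>Pow {..<n}. hinge_lam t I J * lam_cha n \<Phi> J T) =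
      (\<Sum>K\<in>Pow {..<n}. (lam_cha n (a 0) I K * (if blk_adapted t K then 1 else 0)) *
         (\<Sum>J\<in>Pow {..<n}. lam_cha n (b 0) K J * lam_cha n \<Phi> J T))"
    unfolding hinge_lam_def by (rule sum_sum_mult_swap) auto
  also have "\<dots> = (\<Sum>K\<in>Pow {..<n}. lam_cha n (a 0) I K * ((if blk_adapted t K then 1 else 0) * lam_cha n (mmul n (b 0) \<Phi>) K T))"
    by (intro sum.cong refl) (simp add: lam_cha_mmul T mult.assoc)
  also have "\<dots> = (\<Sum>K\<in>Pow {..<n}. lam_cha n (a 0) I K * (\<kappa> * ((if blk_adapted t T then 1 else 0) * lam_cha n (mmul n a0i \<Psi>) K T)))"
    by (intro sum.cong refl) (simp add: BC T)
  also have "\<dots> = \<kappa> * (if blk_adapted t T then 1 else 0) * lam_cha n (mmul n (a 0) (mmul n a0i \<Psi>)) I T"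
    by (simp add: lam_cha_mmul[OF I T] sum_distrib_left mult_ac)
  also have "lam_cha n (mmul n (a 0) (mmul n a0i \<Psi>)) I T = lam_cha n \<Psi> I T"
  proof (rule lam_cha_cong[OF _ I T])
    fix i j assume ij: "i < n" "j < n"
    have "mmul n (a 0) (mmul n a0i \<Psi>) i j = mmul n (mmul n (a 0) a0i) \<Psi> i j" by (rule mmul_assoc)
    also have "\<dots> = (\<Sum>l<n. mident i l * \<Psi> l j)"
      unfolding mmul_def using a0_a0i ij by (intro sum.cong) (auto simp: mmul_def)
    finally show "mmul n (a 0) (mmul n a0i \<Psi>) i j = \<Psi> i j" using sum_mident_mult[OF ij(1)] by simp
  qed
  finally show ?thesis by (simp add: mult_ac)
qed

end

context factored_family
begin

lemma hinge_basis_block_claim: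
  assumes len: "length us = n" "length Us = n" and vs: "set us \<subseteq> vecs n" "set Us \<subseteq> vecs n"
    and li: "lin_indep us" "lin_indep Us" and ab: "a' + b' \<le> n"
    and cF: "\<And>k. k < a' \<Longrightarrow> hinge_cond t (\<lambda>_. 0) (Us ! k)"
    and cG: "\<And>k. a' \<le> k \<Longrightarrow> k < a' + b' \<Longrightarrow> hinge_cond t (us ! k) (Us ! k)"
    and cH: "\<And>k. a' + b' \<le> k \<Longrightarrow> k < n \<Longrightarrow> hinge_cond t (us ! k) (\<lambda>_. 0)"
  shows "a' = blk_start t" "b' = blk_size t"
    and "\<exists>\<kappa>. \<kappa> \<noteq> 0 \<and> (\<forall>K T. K \<subseteq> {..<n} \<longrightarrow> T \<subseteq> {..<n} \<longrightarrow>
      (if blk_adapted t K then 1 else 0) * lam_cha n (mmul n (b 0) (\<lambda>r c. (us ! c) r)) K T =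
      \<kappa> * ((if blk_adapted t T then 1 else 0) * lam_cha n (mmul n a0i (\<lambda>r c. (Us ! c) r)) K T))"
proof -
  define R where "R = mmul n (b 0) (\<lambda>r c. (us ! c) r)"
  define S where "S = mmul n a0i (\<lambda>r c. (Us ! c) r)"
  have dR: "mdet n R \<noteq> 0" unfolding R_def mdet_mmul using lin_indep_mdet_nonzero[OF li(1) vs(1) len(1)] det_b by simp
  have dS: "mdet n S \<noteq> 0"
    unfolding S_def mdet_mmul using lin_indep_mdet_nonzero[OF li(2) vs(2) len(2)] mdet_minv_nonzero[OF det_a] by simp
  have Rv: "R p k = mvec n (b 0) (us ! k) p" and Sv: "S p k = mvec n a0i (Us ! k) p" if "p < n" for p k
    using that unfolding R_def S_def mmul_def mvec_def by simp_all
  note blk = hinge_cond_blocks and e = blk_end_le[of t]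
  have SF: "S p k = 0" if "k < a'" "blk_start t \<le> p" "p < n" for p k
    using blk[OF cF[OF that(1)] that(3)] that Sv[OF that(3)] by (cases "p < blk_end t") (auto simp: mvec_zero)
  have RG: "R p k = 0" if "a' \<le> k" "k < a' + b'" "p < blk_start t" for p k
    using blk(1)[OF cG[OF that(1,2)]] that Rv e by simp
  have SG: "S p k = 0" if "a' \<le> k" "k < a' + b'" "blk_end t \<le> p" "p < n" for p k
    using blk(2)[OF cG[OF that(1,2)]] that Sv by simp
  have RH: "R p k = 0" if "a' + b' \<le> k" "k < n" "p < blk_end t" for p k
    using blk[OF cH[OF that(1,2)]] that Rv e by (cases "p < blk_start t") (auto simp: mvec_zero)
  have RS: "R p k = S p k" if "a' \<le> k" "k < a' + b'" "blk_start t \<le> p" "p < blk_end t" for p k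
    using blk(3)[OF cG[OF that(1,2)]] that Rv Sv e by simp
  note sizes = block_sizes_eq[OF dR dS ab e SF RG SG RH]
  show "a' = blk_start t" "b' = blk_size t" using sizes by auto
  have R1: "R p k = 0" if "p < blk_start t" "blk_start t \<le> k" "k < n" for p k
    using RG RH that sizes by (cases "k < a' + b'") auto
  have R2: "R p k = 0" if "p < blk_end t" "blk_end t \<le> k" "k < n" for p k
    using RH that sizes by auto
  have S1: "S p k = 0" if "blk_start t \<le> p" "p < n" "k < blk_start t" for p k
    using SF that sizes by auto
  have S2: "S p k = 0" if "blk_end t \<le> p" "p < n" "k < blk_end t" for p k
    using SF SG that sizes by (cases "k < a'") auto
  have dSa: "mdet (blk_start t) S \<noteq> 0" using dS mdet_block_lower_left_0[of "blk_start t" n S] S1 e by auto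
  have dRa: "mdet (blk_start t) R \<noteq> 0" using dR mdet_block_upper_right_0[of "blk_start t" n R] R1 e by auto
  have RS': "R p k = S p k" if "blk_start t \<le> p" "p < blk_end t" "blk_start t \<le> k" "k < blk_end t" for p k
    using RS that sizes by auto
  have "(if blk_adapted t K then 1 else 0) * lam_cha n R K T =
      (mdet (blk_start t) R / mdet (blk_start t) S) * ((if blk_adapted t T then 1 else 0) * lam_cha n S K T)"
    if "K \<subseteq> {..<n}" "T \<subseteq> {..<n}" for K T
    unfolding blk_adapted_def by (rule lam_cha_block_adapted[OF e R1 R2 S1 S2 RS' dSa that])
  moreover have "mdet (blk_start t) R / mdet (blk_start t) S \<noteq> 0" using dSa dRa by simp
  ultimately show "\<exists>\<kappa>. \<kappa> \<noteq> 0 \<and> (\<forall>K T. K \<subseteq> {..<n} \<longrightarrow> T \<subseteq> {..<n} \<longrightarrow>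
      (if blk_adapted t K then 1 else 0) * lam_cha n (mmul n (b 0) (\<lambda>r c. (us ! c) r)) K T =
      \<kappa> * ((if blk_adapted t T then 1 else 0) * lam_cha n (mmul n a0i (\<lambda>r c. (Us ! c) r)) K T))"
    unfolding R_def S_def by blast
qed

theorem is_lambda_hinge_unique:
  assumes L: "is_lambda n (hinge_space t) M"
  shows "\<exists>c. c \<noteq> 0 \<and> (\<forall>I J. I \<subseteq> {..<n} \<longrightarrow> J \<subseteq> {..<n} \<longrightarrow> M I J = c * hinge_lam t I J)"
proof -
  obtain us Us a' b' where basis: "length us = n" "length Us = n" "set us \<subseteq> vecs n" "set Us \<subseteq> vecs n"
      "lin_indep us" "lin_indep Us" "a' + b' \<le> n"
    and cF: "\<And>k. k < a' \<Longrightarrow> hinge_cond t (\<lambda>_. 0) (Us ! k)"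
    and cG: "\<And>k. a' \<le> k \<Longrightarrow> k < a' + b' \<Longrightarrow> hinge_cond t (us ! k) (Us ! k)"
    and cH: "\<And>k. a' + b' \<le> k \<Longrightarrow> k < n \<Longrightarrow> hinge_cond t (us ! k) (\<lambda>_. 0)"
    and E1: "\<And>T I. T \<subseteq> {..<n} \<Longrightarrow> I \<subseteq> {..<n} \<Longrightarrow> (\<Sum>J\<in>Pow {..<n}. M I J * lam_cha n (\<lambda>r c. (us ! c) r) J T) =
       (if {..<a'} \<subseteq> T \<and> T \<subseteq> {..<a' + b'} then lam_cha n (\<lambda>r c. (Us ! c) r) I T else 0)"
    by (rule is_lambda_hinge_basis[OF L]) (rule that; assumption)
  note claim = hinge_basis_block_claim[OF basis cF cG cH]
  then obtain \<kappa> where \<kappa>: "\<kappa> \<noteq> 0" and BC: "\<And>K T. K \<subseteq> {..<n} \<Longrightarrow> T \<subseteq> {..<n} \<Longrightarrow>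
      (if blk_adapted t K then 1 else 0) * lam_cha n (mmul n (b 0) (\<lambda>r c. (us ! c) r)) K T =
      \<kappa> * ((if blk_adapted t T then 1 else 0) * lam_cha n (mmul n a0i (\<lambda>r c. (Us ! c) r)) K T)"
    by blast
  have "hinge_lam t I J = \<kappa> * M I J" if I: "I \<subseteq> {..<n}" and J: "J \<subseteq> {..<n}" for I J
  proof -
    have "hinge_lam t I J - \<kappa> * M I J = 0"
    proof (rule lam_cha_cancel_right[OF lin_indep_mdet_nonzero[OF basis(5,3,1)] _ J])
      fix T assume T: "T \<subseteq> {..<n}"
      have "(\<Sum>J\<in>Pow {..<n}. (hinge_lam t I J - \<kappa> * M I J) * lam_cha n (\<lambda>r c. (us ! c) r) J T) =
          (\<Sum>J\<in>Pow {..<n}. hinge_lam t I J * lam_cha n (\<lambda>r c. (us ! c) r) J T) -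
          \<kappa> * (\<Sum>J\<in>Pow {..<n}. M I J * lam_cha n (\<lambda>r c. (us ! c) r) J T)"
        by (simp add: left_diff_distrib sum_subtractf sum_distrib_left mult.assoc)
      also have "\<dots> = 0"
        using sum_hinge_lam_mult_lam_cha[OF BC I T] E1[OF T I] claim(1,2) by (simp add: blk_adapted_def)
      finally show "(\<Sum>J\<in>Pow {..<n}. (hinge_lam t I J - \<kappa> * M I J) * lam_cha n (\<lambda>r c. (us ! c) r) J T) = 0" .
    qed
    thus ?thesis by simp
  qed
  thus ?thesis using \<kappa> by (intro exI[of _ "1 / \<kappa>"]) auto
qed

end

context factored_family
begin

lemma normalized_lambdas_hinge_lam:
  assumes "is_hinge_of n \<gamma> m Ps"
  shows "normalized_lambdas n Ps (map hinge_lam [0..<tau])"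
  unfolding normalized_lambdas_def
proof (intro conjI allI impI ballI)
  note Ps = hinge_of_eq[OF assms]
  show "length (map hinge_lam [0..<tau]) = length Ps" using Ps by simp
  show "is_lambda n (Ps ! j) (map hinge_lam [0..<tau] ! j)" if "j < length Ps" for j
    using that Ps is_lambda_hinge_lam by auto
  show "\<exists>A. graph n A = Ps ! 0 \<and> (\<forall>I\<subseteq>{..<n}. \<forall>J\<subseteq>{..<n}. (map hinge_lam [0..<tau] ! 0) I J = lam_cha n A I J)"
    using tau_pos Ps graph_first_hinge_mat lam_cha_first_hinge_mat by (intro exI[of _ first_hinge_mat]) auto
  fix j I J assume j: "Suc j < length Ps"
    and I: "I \<in> ksub n (cdim n (Im n (Ps ! j)))" and "J \<in> ksub n (cdim n (Im n (Ps ! j)))"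
  have "I \<in> ksub n (blk_end j)" using I j Ps cdim_Im_hinge_space by simp
  thus "(map hinge_lam [0..<tau] ! Suc j) I J = (map hinge_lam [0..<tau] ! j) I J"
    using hinge_lam_Suc j Ps by simp
qed

text \<open>\<open>\<lambda>(P\<^sub>t)\<close> is determined up to a scalar, and the scalar is fixed inductively by the agreement
  of consecutive terms in degree \<open>dim Im P\<^sub>t\<close>, where \<open>hinge_lam t\<close> does not vanish.\<close>

lemma normalized_lambdas_eq_hinge_lam:
  assumes H: "is_hinge_of n \<gamma> m Ps" and N: "normalized_lambdas n Ps Ms"
  shows "t < tau \<Longrightarrow> I \<subseteq> {..<n} \<Longrightarrow> J \<subseteq> {..<n} \<Longrightarrow> (Ms ! t) I J = hinge_lam t I J"
proof (induction t arbitrary: I J)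
  note Ps = hinge_of_eq[OF H]
  case 0
  obtain A where A: "graph n A = Ps ! 0" "\<forall>I\<subseteq>{..<n}. \<forall>J\<subseteq>{..<n}. (Ms ! 0) I J = lam_cha n A I J"
    using N unfolding normalized_lambdas_def by blast
  have "graph n A = graph n first_hinge_mat" using A(1) Ps tau_pos graph_first_hinge_mat by simp
  hence "lam_cha n A I J = lam_cha n first_hinge_mat I J"
    using graph_eq_imp_eq by (intro lam_cha_cong[OF _ 0(2,3)]) blast
  thus ?case using A(2) 0 lam_cha_first_hinge_mat by simp
next
  note Ps = hinge_of_eq[OF H]
  case (Suc t)
  have st: "Suc t < tau" "t < tau" using Suc.prems by auto
  have "is_lambda n (hinge_space (Suc t)) (Ms ! Suc t)" using N st Ps unfolding normalized_lambdas_def by auto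
  then obtain c where c: "\<And>I J. I \<subseteq> {..<n} \<Longrightarrow> J \<subseteq> {..<n} \<Longrightarrow> (Ms ! Suc t) I J = c * hinge_lam (Suc t) I J"
    using is_lambda_hinge_unique by blast
  obtain I0 J0 where IJ0: "I0 \<in> ksub n (blk_end t)" "J0 \<in> ksub n (blk_end t)" "hinge_lam t I0 J0 \<noteq> 0"
    using hinge_lam_nonzero[of t "blk_end t"] by auto
  have sub0: "I0 \<subseteq> {..<n}" "J0 \<subseteq> {..<n}" using IJ0 unfolding ksub_def by auto
  have "c * hinge_lam (Suc t) I0 J0 = (Ms ! t) I0 J0"
    using c[OF sub0] N st Ps IJ0 cdim_Im_hinge_space unfolding normalized_lambdas_def by auto
  also have "\<dots> = hinge_lam t I0 J0" using Suc.IH[OF st(2) sub0] .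
  finally have "c = 1" using hinge_lam_Suc[OF st(1) IJ0(1)] IJ0(3) by simp
  thus ?case using c[OF Suc.prems(2,3)] by simp
qed

theorem hinge_limit_lam:
  assumes H: "is_hinge_of n \<gamma> m Ps"
  shows "(\<exists>Ms. normalized_lambdas n Ps Ms) \<and>
        (\<forall>Ms. normalized_lambdas n Ps Ms \<longrightarrow>
           (\<forall>j\<le>n.
              (\<exists>k<length Ps. \<exists>I\<in>ksub n j. \<exists>J\<in>ksub n j. (Ms ! k) I J \<noteq> 0) \<and>
              (\<forall>k<length Ps. (\<exists>I\<in>ksub n j. \<exists>J\<in>ksub n j. (Ms ! k) I J \<noteq> 0) \<longrightarrow>
                 (\<forall>I\<in>ksub n j. \<forall>J\<in>ksub n j. (Ms ! k) I J = limit_lam j I J))))"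
proof (intro conjI allI impI)
  note Ps = hinge_of_eq[OF H]
  show "\<exists>Ms. normalized_lambdas n Ps Ms" using normalized_lambdas_hinge_lam[OF H] by blast
  fix Ms j assume N: "normalized_lambdas n Ps Ms" and j: "j \<le> n"
  have MM: "(Ms ! k) I J = hinge_lam k I J" if "k < tau" "I \<in> ksub n j" "J \<in> ksub n j" for k I J
    using normalized_lambdas_eq_hinge_lam[OF H N that(1)] that(2,3) unfolding ksub_def by auto
  obtain t where t: "t < tau" "blk_start t \<le> j" "j \<le> blk_end t" using blk_cover[OF j] by auto
  show "\<exists>k<length Ps. \<exists>I\<in>ksub n j. \<exists>J\<in>ksub n j. (Ms ! k) I J \<noteq> 0"
    using hinge_lam_nonzero[OF t(2,3)] MM[OF t(1)] t(1) Ps by metis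
  fix k assume "k < length Ps" and "\<exists>I\<in>ksub n j. \<exists>J\<in>ksub n j. (Ms ! k) I J \<noteq> 0"
  hence k: "k < tau" "blk_start k \<le> j \<and> j \<le> blk_end k" using MM Ps hinge_lam_degree by (metis, metis)
  show "\<forall>I\<in>ksub n j. \<forall>J\<in>ksub n j. (Ms ! k) I J = limit_lam j I J"
    using MM[OF k(1)] limit_lam_eq_hinge_lam k(2) by auto
qed

end

lemma factored_family_if_has_exponents:
  assumes "0 < n" and "has_exponents n \<gamma> m"
  obtains r a b where "factored_family n m \<gamma> r a b"
proof -
  have "\<exists>r>0. \<exists>a b.
        (\<forall>i<n. \<forall>j<n. (\<lambda>z. a z i j) holomorphic_on ball 0 r \<and> (\<lambda>z. b z i j) holomorphic_on ball 0 r) \<and>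
        mdet n (a 0) \<noteq> 0 \<and> mdet n (b 0) \<noteq> 0 \<and>
        (\<forall>z. 0 < norm z \<and> norm z < r \<longrightarrow>
           (\<forall>i<n. \<forall>k<n. \<gamma> z i k = (\<Sum>l<n. a z i l * z powi (- m l) * b z l k)))"
    using assms(2) unfolding has_exponents_def by blast
  then obtain r a b where "r > 0"
    and "\<forall>i<n. \<forall>j<n. (\<lambda>z. a z i j) holomorphic_on ball 0 r \<and> (\<lambda>z. b z i j) holomorphic_on ball 0 r"
    and "mdet n (a 0) \<noteq> 0" "mdet n (b 0) \<noteq> 0"
    and "\<forall>z. 0 < norm z \<and> norm z < r \<longrightarrow> (\<forall>i<n. \<forall>k<n. \<gamma> z i k = (\<Sum>l<n. a z i l * z powi (- m l) * b z l k))"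
    by blast
  moreover have "\<And>i j. i \<le> j \<Longrightarrow> j < n \<Longrightarrow> m j \<le> m i" using assms(2) unfolding has_exponents_def by blast
  ultimately have "factored_family n m \<gamma> r a b" using assms(1) by unfold_locales auto
  thus thesis by (rule that)
qed

theorem proposition3p3:
  fixes n :: nat and e :: real and \<gamma> :: "complex \<Rightarrow> cmat" and m :: "nat \<Rightarrow> int"
  assumes "0 < n"
    and "meromorphic_family n e \<gamma>"
    and "has_exponents n \<gamma> m"
  shows "\<exists>L :: nat \<Rightarrow> nat set \<Rightarrow> nat set \<Rightarrow> complex.
     (\<forall>j\<le>n.
        (\<forall>I\<in>ksub n j. \<forall>J\<in>ksub n j.
           ((\<lambda>z. z powi (\<Sum>i<j. m i) * lam_cha n (\<gamma> z) I J) \<longlongrightarrow> L j I J) (at 0)) \<and>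
        (\<exists>I\<in>ksub n j. \<exists>J\<in>ksub n j. L j I J \<noteq> 0)) \<and>
     (\<forall>Ps. is_hinge_of n \<gamma> m Ps \<longrightarrow>
        (\<exists>Ms. normalized_lambdas n Ps Ms) \<and>
        (\<forall>Ms. normalized_lambdas n Ps Ms \<longrightarrow>
           (\<forall>j\<le>n.
              (\<exists>k<length Ps. \<exists>I\<in>ksub n j. \<exists>J\<in>ksub n j. (Ms ! k) I J \<noteq> 0) \<and>
              (\<forall>k<length Ps. (\<exists>I\<in>ksub n j. \<exists>J\<in>ksub n j. (Ms ! k) I J \<noteq> 0) \<longrightarrow>
                 (\<forall>I\<in>ksub n j. \<forall>J\<in>ksub n j. (Ms ! k) I J = L j I J)))))"
proof -
  obtain r a b where "factored_family n m \<gamma> r a b"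
    using assms(1,3) by (rule factored_family_if_has_exponents)
  then interpret factored_family n m \<gamma> r a b .
  show ?thesis
    using tendsto_scaled_lam_cha limit_lam_nonzero hinge_limit_lam by (intro exI[of _ limit_lam]) blast
qed

end
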